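(* Let $k$ be a commutative ring and $P,Q$ invertible $k$-modules. If $A$ is a $P$-Frobenius $k$-algebra and $B$ is a $Q$-Frobenius $k$-algebra, then the tensor product algebra $A\otimes_kB$ is a $P\otimes_kQ$-Frobenius algebra.
   Context: A $k$-module is invertible if it is finitely generated projective of constant rank one. For an invertible $P$, a $k$-algebra $A$ is $P$-Frobenius if it is finitely generated projective over $k$ and $A_A\cong\mathrm{Hom}_k(A,P)_A$ as right $A$-modules, where $(fa)(x)=f(ax)$. *)

theory Defs
  imports "HOL-Algebra.Algebra"
begin

definition lin_map :: "('k, 'c) ring_scheme \<Rightarrow> ('k, 'm, 'x) module_scheme
    \<Rightarrow> ('k, 'n, 'y) module_scheme \<Rightarrow> ('m \<Rightarrow> 'n) \<Rightarrow> bool" where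
  "lin_map R M N f \<longleftrightarrow>
     (\<forall>x\<in>carrier M. f x \<in> carrier N) \<and>
     (\<forall>x\<in>carrier M. \<forall>y\<in>carrier M. f (x \<oplus>\<^bsub>M\<^esub> y) = f x \<oplus>\<^bsub>N\<^esub> f y) \<and>
     (\<forall>r\<in>carrier R. \<forall>x\<in>carrier M. f (r \<odot>\<^bsub>M\<^esub> x) = r \<odot>\<^bsub>N\<^esub> f x)"

definition free_carrier :: "('k, 'c) ring_scheme \<Rightarrow> 's set \<Rightarrow> ('s \<Rightarrow> 'k) set" where
  "free_carrier R S = {f. (\<forall>x. f x \<in> carrier R) \<and> (\<forall>x. x \<notin> S \<longrightarrow> f x = \<zero>\<^bsub>R\<^esub>)
                          \<and> finite {x. f x \<noteq> \<zero>\<^bsub>R\<^esub>}}"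

definition free_module :: "('k, 'c) ring_scheme \<Rightarrow> 's set \<Rightarrow> ('k, 's \<Rightarrow> 'k) module" where
  "free_module R S = \<lparr>carrier = free_carrier R S, monoid.mult = undefined, monoid.one = undefined,
      ring.zero = (\<lambda>x. \<zero>\<^bsub>R\<^esub>), ring.add = (\<lambda>f g x. f x \<oplus>\<^bsub>R\<^esub> g x),
      module.smult = (\<lambda>r f x. r \<otimes>\<^bsub>R\<^esub> f x)\<rparr>"

definition fs_delta :: "('k, 'c) ring_scheme \<Rightarrow> 's \<Rightarrow> ('s \<Rightarrow> 'k)" where
  "fs_delta R s = (\<lambda>y. if y = s then \<one>\<^bsub>R\<^esub> else \<zero>\<^bsub>R\<^esub>)"

definition fin_gen :: "('k, 'c) ring_scheme \<Rightarrow> ('k, 'm, 'x) module_scheme \<Rightarrow> bool" where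
  "fin_gen R M \<longleftrightarrow> (\<exists>S. finite S \<and> S \<subseteq> carrier M \<and>
     (\<forall>m\<in>carrier M. \<exists>c. (\<forall>s\<in>S. c s \<in> carrier R) \<and>
        m = finsum M (\<lambda>s. c s \<odot>\<^bsub>M\<^esub> s) S))"

text \<open>Projective = direct summand of a free module (we may take the free module on the
  underlying set of M, which surjects onto M).\<close>
definition projective :: "('k, 'c) ring_scheme \<Rightarrow> ('k, 'm, 'x) module_scheme \<Rightarrow> bool" where
  "projective R M \<longleftrightarrow> (\<exists>f g. lin_map R M (free_module R (carrier M)) f \<and>
       lin_map R (free_module R (carrier M)) M g \<and> (\<forall>x\<in>carrier M. g (f x) = x))"

definition self_mod :: "('k, 'c) ring_scheme \<Rightarrow> ('k, 'k) module" where
  "self_mod R = \<lparr>carrier = carrier R, monoid.mult = monoid.mult R, monoid.one = \<one>\<^bsub>R\<^esub>,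
     ring.zero = \<zero>\<^bsub>R\<^esub>, ring.add = ring.add R, module.smult = monoid.mult R\<rparr>"



definition loc_rel :: "('k, 'c) ring_scheme \<Rightarrow> ('k, 'm, 'x) module_scheme \<Rightarrow> 'k set
    \<Rightarrow> (('m \<times> 'k) \<times> ('m \<times> 'k)) set" where
  "loc_rel R M p = {((m, s), (m', s')). m \<in> carrier M \<and> m' \<in> carrier M \<and>
       s \<in> carrier R - p \<and> s' \<in> carrier R - p \<and>
       (\<exists>u\<in>carrier R - p. u \<odot>\<^bsub>M\<^esub> ((s' \<odot>\<^bsub>M\<^esub> m) \<ominus>\<^bsub>M\<^esub> (s \<odot>\<^bsub>M\<^esub> m')) = \<zero>\<^bsub>M\<^esub>)}"

definition loc_carrier :: "('k, 'c) ring_scheme \<Rightarrow> ('k, 'm, 'x) module_scheme \<Rightarrow> 'k set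
    \<Rightarrow> ('m \<times> 'k) set set" where
  "loc_carrier R M p = (carrier M \<times> (carrier R - p)) // loc_rel R M p"

definition loc_smult :: "('k, 'c) ring_scheme \<Rightarrow> ('k, 'm, 'x) module_scheme \<Rightarrow> 'k set
    \<Rightarrow> ('k \<times> 'k) set \<Rightarrow> ('m \<times> 'k) set \<Rightarrow> ('m \<times> 'k) set" where
  "loc_smult R M p a x =
     (let (r, t) = (SOME rt. rt \<in> a); (m, s) = (SOME ms. ms \<in> x)
      in loc_rel R M p `` {(r \<odot>\<^bsub>M\<^esub> m, t \<otimes>\<^bsub>R\<^esub> s)})"

definition loc_rank_one :: "('k, 'c) ring_scheme \<Rightarrow> ('k, 'm, 'x) module_scheme \<Rightarrow> 'k set \<Rightarrow> bool" where
  "loc_rank_one R M p \<longleftrightarrow> (\<exists>x\<in>loc_carrier R M p. \<forall>y\<in>loc_carrier R M p.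
      \<exists>!a. a \<in> loc_carrier R (self_mod R) p \<and> y = loc_smult R M p a x)"

definition invertible_mod :: "('k, 'c) ring_scheme \<Rightarrow> ('k, 'm, 'x) module_scheme \<Rightarrow> bool" where
  "invertible_mod R M \<longleftrightarrow> module R M \<and> fin_gen R M \<and> projective R M \<and>
     (\<forall>p. primeideal p R \<longrightarrow> loc_rank_one R M p)"

definition tens_gens :: "('k, 'c) ring_scheme \<Rightarrow> ('k, 'm, 'x) module_scheme
    \<Rightarrow> ('k, 'n, 'y) module_scheme \<Rightarrow> ('m \<times> 'n \<Rightarrow> 'k) set" where
  "tens_gens R M N =
     {(\<lambda>z. fs_delta R (m \<oplus>\<^bsub>M\<^esub> m', n) z \<ominus>\<^bsub>R\<^esub> fs_delta R (m, n) z \<ominus>\<^bsub>R\<^esub> fs_delta R (m', n) z)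
        | m m' n. m \<in> carrier M \<and> m' \<in> carrier M \<and> n \<in> carrier N} \<union>
     {(\<lambda>z. fs_delta R (m, n \<oplus>\<^bsub>N\<^esub> n') z \<ominus>\<^bsub>R\<^esub> fs_delta R (m, n) z \<ominus>\<^bsub>R\<^esub> fs_delta R (m, n') z)
        | m n n'. m \<in> carrier M \<and> n \<in> carrier N \<and> n' \<in> carrier N} \<union>
     {(\<lambda>z. fs_delta R (r \<odot>\<^bsub>M\<^esub> m, n) z \<ominus>\<^bsub>R\<^esub> r \<otimes>\<^bsub>R\<^esub> fs_delta R (m, n) z)
        | r m n. r \<in> carrier R \<and> m \<in> carrier M \<and> n \<in> carrier N} \<union>
     {(\<lambda>z. fs_delta R (m, r \<odot>\<^bsub>N\<^esub> n) z \<ominus>\<^bsub>R\<^esub> r \<otimes>\<^bsub>R\<^esub> fs_delta R (m, n) z)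
        | r m n. r \<in> carrier R \<and> m \<in> carrier M \<and> n \<in> carrier N}"

definition tens_rel :: "('k, 'c) ring_scheme \<Rightarrow> ('k, 'm, 'x) module_scheme
    \<Rightarrow> ('k, 'n, 'y) module_scheme \<Rightarrow> ('m \<times> 'n \<Rightarrow> 'k) set" where
  "tens_rel R M N = \<Inter>{H. submodule H R (free_module R (carrier M \<times> carrier N))
                          \<and> tens_gens R M N \<subseteq> H}"

definition tens_cls :: "('k, 'c) ring_scheme \<Rightarrow> ('k, 'm, 'x) module_scheme
    \<Rightarrow> ('k, 'n, 'y) module_scheme \<Rightarrow> ('m \<times> 'n \<Rightarrow> 'k) \<Rightarrow> ('m \<times> 'n \<Rightarrow> 'k) set" where
  "tens_cls R M N f = {g \<in> free_carrier R (carrier M \<times> carrier N).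
                        (\<lambda>z. g z \<ominus>\<^bsub>R\<^esub> f z) \<in> tens_rel R M N}"

definition tens_rep :: "'a set \<Rightarrow> 'a" where
  "tens_rep S = (SOME u. u \<in> S)"

definition tensor_mod :: "('k, 'c) ring_scheme \<Rightarrow> ('k, 'm, 'x) module_scheme
    \<Rightarrow> ('k, 'n, 'y) module_scheme \<Rightarrow> ('k, ('m \<times> 'n \<Rightarrow> 'k) set) module" where
  "tensor_mod R M N =
    \<lparr>carrier = tens_cls R M N ` free_carrier R (carrier M \<times> carrier N),
     monoid.mult = undefined, monoid.one = undefined,
     ring.zero = tens_cls R M N (\<lambda>z. \<zero>\<^bsub>R\<^esub>),
     ring.add = (\<lambda>U V. tens_cls R M N (\<lambda>z. tens_rep U z \<oplus>\<^bsub>R\<^esub> tens_rep V z)),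
     module.smult = (\<lambda>r U. tens_cls R M N (\<lambda>z. r \<otimes>\<^bsub>R\<^esub> tens_rep U z))\<rparr>"

text \<open>Multiplication on the free module over A x B: (a,b)(a',b') = (aa',bb').\<close>
definition fs_mult :: "('k, 'c) ring_scheme \<Rightarrow> ('k, 'a, 'x) module_scheme
    \<Rightarrow> ('k, 'b, 'y) module_scheme \<Rightarrow> ('a \<times> 'b \<Rightarrow> 'k) \<Rightarrow> ('a \<times> 'b \<Rightarrow> 'k) \<Rightarrow> ('a \<times> 'b \<Rightarrow> 'k)" where
  "fs_mult R A B f g = (\<lambda>z. finsum R (\<lambda>(u, v). f u \<otimes>\<^bsub>R\<^esub> g v)
      {(u, v). f u \<noteq> \<zero>\<^bsub>R\<^esub> \<and> g v \<noteq> \<zero>\<^bsub>R\<^esub> \<and>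
               z = (fst u \<otimes>\<^bsub>A\<^esub> fst v, snd u \<otimes>\<^bsub>B\<^esub> snd v)})"

definition tensor_alg :: "('k, 'c) ring_scheme \<Rightarrow> ('k, 'a, 'x) module_scheme
    \<Rightarrow> ('k, 'b, 'y) module_scheme \<Rightarrow> ('k, ('a \<times> 'b \<Rightarrow> 'k) set) module" where
  "tensor_alg R A B = (tensor_mod R A B)
     \<lparr>monoid.mult := (\<lambda>U V. tens_cls R A B (fs_mult R A B (tens_rep U) (tens_rep V))),
      monoid.one := tens_cls R A B (fs_delta R (\<one>\<^bsub>A\<^esub>, \<one>\<^bsub>B\<^esub>))\<rparr>"

definition k_algebra :: "('k, 'c) ring_scheme \<Rightarrow> ('k, 'a, 'x) module_scheme \<Rightarrow> bool" where
  "k_algebra R A \<longleftrightarrow> ring A \<and> module R A \<and>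
     (\<forall>r\<in>carrier R. \<forall>x\<in>carrier A. \<forall>y\<in>carrier A.
        (r \<odot>\<^bsub>A\<^esub> x) \<otimes>\<^bsub>A\<^esub> y = r \<odot>\<^bsub>A\<^esub> (x \<otimes>\<^bsub>A\<^esub> y) \<and>
        x \<otimes>\<^bsub>A\<^esub> (r \<odot>\<^bsub>A\<^esub> y) = r \<odot>\<^bsub>A\<^esub> (x \<otimes>\<^bsub>A\<^esub> y))"

definition hom_set :: "('k, 'c) ring_scheme \<Rightarrow> ('k, 'a, 'x) module_scheme
    \<Rightarrow> ('k, 'p, 'y) module_scheme \<Rightarrow> ('a \<Rightarrow> 'p) set" where
  "hom_set R A P = {f. lin_map R A P f \<and> f \<in> extensional (carrier A)}"

text \<open>A is P-Frobenius: A f.g. projective over k and A_A \<cong> Hom_k(A,P)_A as right A-modules,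
  where (f a)(x) = f (a x).\<close>
definition frobenius :: "('k, 'c) ring_scheme \<Rightarrow> ('k, 'p, 'y) module_scheme
    \<Rightarrow> ('k, 'a, 'x) module_scheme \<Rightarrow> bool" where
  "frobenius R P A \<longleftrightarrow> k_algebra R A \<and> fin_gen R A \<and> projective R A \<and>
     (\<exists>\<phi>. bij_betw \<phi> (carrier A) (hom_set R A P) \<and>
        (\<forall>x\<in>carrier A. \<forall>y\<in>carrier A.
            \<phi> (x \<oplus>\<^bsub>A\<^esub> y) = (\<lambda>z\<in>carrier A. \<phi> x z \<oplus>\<^bsub>P\<^esub> \<phi> y z)) \<and>
        (\<forall>x\<in>carrier A. \<forall>a\<in>carrier A.
            \<phi> (x \<otimes>\<^bsub>A\<^esub> a) = (\<lambda>z\<in>carrier A. \<phi> x (a \<otimes>\<^bsub>A\<^esub> z))))"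

end

theory Submission
  imports Defs
begin

(*
  Write \<phi>\<^sub>A : A \<rightarrow> Hom(A,P) and \<phi>\<^sub>B : B \<rightarrow> Hom(B,Q) for the given isomorphisms of right
  modules. The isomorphism for A \<otimes> B is \<Phi> with \<Phi> (a \<otimes> b) (x \<otimes> y) = \<phi>\<^sub>A a x \<otimes> \<phi>\<^sub>B b y;
  it is well defined because both of its arguments enter through the universal property of the
  tensor product. Right linearity \<Phi> (U V) W = \<Phi> U (V W) only has to be checked on elementary
  tensors, where it is right linearity of \<phi>\<^sub>A and \<phi>\<^sub>B.
  Bijectivity uses that A and B, being finitely generated projective, have finite dual bases
  (d\<^sub>i, \<alpha>\<^sub>i) and (e\<^sub>j, \<beta>\<^sub>j). With \<epsilon>\<^sub>i p = \<phi>\<^sub>A\<^sup>-\<^sup>1 (\<lambda>x. \<alpha>\<^sub>i x p) every a equals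
  \<Sum>\<^sub>i \<epsilon>\<^sub>i (\<phi>\<^sub>A a d\<^sub>i); together with the analogous \<epsilon>'\<^sub>j for B this gives the inverse
  \<Theta> h = \<Sum>\<^sub>i\<^sub>,\<^sub>j (\<epsilon>\<^sub>i \<otimes> \<epsilon>'\<^sub>j) (h (d\<^sub>i \<otimes> e\<^sub>j)).
*)

section \<open>Linear maps\<close>

lemma lin_mapD:
  assumes "lin_map R M N h"
  shows "x \<in> carrier M \<Longrightarrow> h x \<in> carrier N"
    and "x \<in> carrier M \<Longrightarrow> y \<in> carrier M \<Longrightarrow> h (x \<oplus>\<^bsub>M\<^esub> y) = h x \<oplus>\<^bsub>N\<^esub> h y"
    and "r \<in> carrier R \<Longrightarrow> x \<in> carrier M \<Longrightarrow> h (r \<odot>\<^bsub>M\<^esub> x) = r \<odot>\<^bsub>N\<^esub> h x"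
  using assms by (auto simp: lin_map_def)

lemma lin_mapI:
  assumes "\<And>x. x \<in> carrier M \<Longrightarrow> h x \<in> carrier N"
    and "\<And>x y. x \<in> carrier M \<Longrightarrow> y \<in> carrier M \<Longrightarrow> h (x \<oplus>\<^bsub>M\<^esub> y) = h x \<oplus>\<^bsub>N\<^esub> h y"
    and "\<And>r x. r \<in> carrier R \<Longrightarrow> x \<in> carrier M \<Longrightarrow> h (r \<odot>\<^bsub>M\<^esub> x) = r \<odot>\<^bsub>N\<^esub> h x"
  shows "lin_map R M N h"
  using assms by (auto simp: lin_map_def)

lemma lin_map_id: "lin_map R M M (\<lambda>x. x)"
  by (simp add: lin_map_def)

lemma lin_map_comp:
  "lin_map R M N h \<Longrightarrow> lin_map R N L g \<Longrightarrow> lin_map R M L (\<lambda>x. g (h x))"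
  by (auto simp: lin_map_def)

lemma lin_map_smult:
  assumes L: "module R L" and c: "c \<in> carrier R"
  shows "lin_map R L L (\<lambda>t. c \<odot>\<^bsub>L\<^esub> t)"
proof -
  interpret L: module R L by fact
  show ?thesis
  proof (rule lin_mapI)
    fix r x assume r: "r \<in> carrier R" and x: "x \<in> carrier L"
    have "c \<odot>\<^bsub>L\<^esub> (r \<odot>\<^bsub>L\<^esub> x) = (r \<otimes>\<^bsub>R\<^esub> c) \<odot>\<^bsub>L\<^esub> x"
      using c r x by (simp add: L.smult_assoc1[symmetric] L.m_comm)
    also have "\<dots> = r \<odot>\<^bsub>L\<^esub> (c \<odot>\<^bsub>L\<^esub> x)" using c r x by (simp add: L.smult_assoc1)
    finally show "c \<odot>\<^bsub>L\<^esub> (r \<odot>\<^bsub>L\<^esub> x) = r \<odot>\<^bsub>L\<^esub> (c \<odot>\<^bsub>L\<^esub> x)" .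
  qed (use c in \<open>simp_all add: L.smult_r_distr\<close>)
qed

context
  fixes R :: "('k, 'c) ring_scheme" and M :: "('k, 'm, 'x) module_scheme"
    and N :: "('k, 'n, 'y) module_scheme" and h :: "'m \<Rightarrow> 'n"
  assumes M: "module R M" and N: "module R N" and h: "lin_map R M N h"
begin

interpretation M: module R M by (rule M)
interpretation N: module R N by (rule N)

lemma lin_map_zero: "h \<zero>\<^bsub>M\<^esub> = \<zero>\<^bsub>N\<^esub>"
proof -
  have "h \<zero>\<^bsub>M\<^esub> = h (\<zero>\<^bsub>R\<^esub> \<odot>\<^bsub>M\<^esub> \<zero>\<^bsub>M\<^esub>)" by simp
  also have "\<dots> = \<zero>\<^bsub>R\<^esub> \<odot>\<^bsub>N\<^esub> h \<zero>\<^bsub>M\<^esub>" using lin_mapD(3)[OF h, of "\<zero>\<^bsub>R\<^esub>" "\<zero>\<^bsub>M\<^esub>"] by simp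
  also have "\<dots> = \<zero>\<^bsub>N\<^esub>" using lin_mapD(1)[OF h] by simp
  finally show ?thesis .
qed

lemma lin_map_neg:
  assumes x: "x \<in> carrier M"
  shows "h (\<ominus>\<^bsub>M\<^esub> x) = \<ominus>\<^bsub>N\<^esub> h x"
proof -
  have "h (\<ominus>\<^bsub>M\<^esub> x) \<oplus>\<^bsub>N\<^esub> h x = h (\<ominus>\<^bsub>M\<^esub> x \<oplus>\<^bsub>M\<^esub> x)"
    using x by (simp add: lin_mapD(2)[OF h])
  also have "\<dots> = \<zero>\<^bsub>N\<^esub>" using x lin_map_zero by (simp add: M.l_neg)
  finally show ?thesis using x lin_mapD(1)[OF h] by (metis M.add.inv_closed N.add.inv_equality)
qed

lemma lin_map_minus:
  "x \<in> carrier M \<Longrightarrow> y \<in> carrier M \<Longrightarrow> h (x \<ominus>\<^bsub>M\<^esub> y) = h x \<ominus>\<^bsub>N\<^esub> h y"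
  by (simp add: a_minus_def lin_mapD(2)[OF h] lin_map_neg)

lemma lin_map_finsum:
  assumes "finite I" "F \<in> I \<rightarrow> carrier M"
  shows "h (finsum M F I) = finsum N (\<lambda>i. h (F i)) I"
  using assms
proof (induction I rule: finite_induct)
  case empty
  then show ?case using lin_map_zero by simp
next
  case (insert i I)
  have "h (finsum M F (insert i I)) = h (F i \<oplus>\<^bsub>M\<^esub> finsum M F I)"
    using insert by (subst M.finsum_insert) auto
  also have "\<dots> = h (F i) \<oplus>\<^bsub>N\<^esub> h (finsum M F I)"
    using insert by (intro lin_mapD(2)[OF h]) (auto intro: M.finsum_closed)
  also have "\<dots> = finsum N (\<lambda>i. h (F i)) (insert i I)"
    using insert lin_mapD(1)[OF h] by (subst N.finsum_insert) (auto simp: Pi_iff)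
  finally show ?case .
qed

end

lemma (in abelian_monoid) finsum_cong_simple:
  assumes "\<And>i. i \<in> A \<Longrightarrow> f i = g i" "g \<in> A \<rightarrow> carrier G"
  shows "finsum G f A = finsum G g A"
  using assms by (intro finsum_cong) (auto simp: simp_implies_def)

lemma (in abelian_monoid) finsum_product:
  assumes A: "finite A" and B: "finite B" and F: "\<And>a b. a \<in> A \<Longrightarrow> b \<in> B \<Longrightarrow> F a b \<in> carrier G"
  shows "finsum G (\<lambda>a. finsum G (\<lambda>b. F a b) B) A = finsum G (\<lambda>p. F (fst p) (snd p)) (A \<times> B)"
  using A F
proof (induction A rule: finite_induct)
  case empty
  then show ?case by simp
next
  case (insert a A)
  have "insert a A \<times> B = (Pair a ` B) \<union> (A \<times> B)" and "Pair a ` B \<inter> (A \<times> B) = {}"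
    using insert by auto
  then have "finsum G (\<lambda>p. F (fst p) (snd p)) (insert a A \<times> B)
     = finsum G (\<lambda>p. F (fst p) (snd p)) (Pair a ` B) \<oplus> finsum G (\<lambda>p. F (fst p) (snd p)) (A \<times> B)"
    using insert B by (simp only:) (intro finsum_Un_disjoint, auto simp: Pi_iff)
  moreover have "finsum G (\<lambda>p. F (fst p) (snd p)) (Pair a ` B) = finsum G (\<lambda>b. F a b) B"
    using insert by (simp add: finsum_reindex inj_on_def Pi_iff)
  ultimately show ?case
    using insert by (simp add: Pi_iff finsum_closed)
qed

lemma lin_map_finsum_fun:
  assumes N: "module R N" and I: "finite I" and h: "\<And>i. i \<in> I \<Longrightarrow> lin_map R M N (h i)"
  shows "lin_map R M N (\<lambda>x. finsum N (\<lambda>i. h i x) I)"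
proof -
  interpret N: module R N by fact
  have hc: "h i x \<in> carrier N" if "i \<in> I" "x \<in> carrier M" for i x using lin_mapD(1)[OF h] that
    by blast
  show ?thesis
  proof (rule lin_mapI)
    show "finsum N (\<lambda>i. h i x) I \<in> carrier N" if "x \<in> carrier M" for x
      using hc that by (intro N.finsum_closed) auto
  next
    fix x y assume xy: "x \<in> carrier M" "y \<in> carrier M"
    have "finsum N (\<lambda>i. h i (x \<oplus>\<^bsub>M\<^esub> y)) I = finsum N (\<lambda>i. h i x \<oplus>\<^bsub>N\<^esub> h i y) I"
      using xy hc by (intro N.finsum_cong_simple) (auto simp: lin_mapD(2)[OF h])
    also have "\<dots> = finsum N (\<lambda>i. h i x) I \<oplus>\<^bsub>N\<^esub> finsum N (\<lambda>i. h i y) I"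
      using xy hc by (intro N.finsum_addf) auto
    finally show "finsum N (\<lambda>i. h i (x \<oplus>\<^bsub>M\<^esub> y)) I = finsum N (\<lambda>i. h i x) I \<oplus>\<^bsub>N\<^esub> finsum N (\<lambda>i. h i y) I" .
  next
    fix r x assume rx: "r \<in> carrier R" "x \<in> carrier M"
    have "finsum N (\<lambda>i. h i (r \<odot>\<^bsub>M\<^esub> x)) I = finsum N (\<lambda>i. r \<odot>\<^bsub>N\<^esub> h i x) I"
      using rx hc by (intro N.finsum_cong_simple) (auto simp: lin_mapD(3)[OF h])
    also have "\<dots> = r \<odot>\<^bsub>N\<^esub> finsum N (\<lambda>i. h i x) I"
      using rx hc I by (intro N.finsum_smult_ldistr[symmetric]) auto
    finally show "finsum N (\<lambda>i. h i (r \<odot>\<^bsub>M\<^esub> x)) I = r \<odot>\<^bsub>N\<^esub> finsum N (\<lambda>i. h i x) I" .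
  qed
qed

lemma abelian_group_image:
  assumes F: "abelian_group F" and surj: "carrier T = q ` carrier F"
    and add: "\<And>x y. x \<in> carrier F \<Longrightarrow> y \<in> carrier F \<Longrightarrow> q x \<oplus>\<^bsub>T\<^esub> q y = q (x \<oplus>\<^bsub>F\<^esub> y)"
    and zero: "\<zero>\<^bsub>T\<^esub> = q \<zero>\<^bsub>F\<^esub>"
  shows "abelian_group T"
proof -
  interpret F: abelian_group F by fact
  show ?thesis
  proof (rule abelian_groupI)
    show "\<And>x y. x \<in> carrier T \<Longrightarrow> y \<in> carrier T \<Longrightarrow> x \<oplus>\<^bsub>T\<^esub> y \<in> carrier T"
      unfolding surj by (auto simp: add)
    show "\<zero>\<^bsub>T\<^esub> \<in> carrier T" unfolding surj zero by auto
    show "\<And>x y z. x \<in> carrier T \<Longrightarrow> y \<in> carrier T \<Longrightarrow> z \<in> carrier T \<Longrightarrow>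
        x \<oplus>\<^bsub>T\<^esub> y \<oplus>\<^bsub>T\<^esub> z = x \<oplus>\<^bsub>T\<^esub> (y \<oplus>\<^bsub>T\<^esub> z)"
      unfolding surj by (auto simp: add F.a_assoc)
    show "\<And>x y. x \<in> carrier T \<Longrightarrow> y \<in> carrier T \<Longrightarrow> x \<oplus>\<^bsub>T\<^esub> y = y \<oplus>\<^bsub>T\<^esub> x"
      unfolding surj by (auto simp: add F.a_comm)
    show "\<And>x. x \<in> carrier T \<Longrightarrow> \<zero>\<^bsub>T\<^esub> \<oplus>\<^bsub>T\<^esub> x = x"
      unfolding surj zero by (auto simp: add)
  next
    fix x assume "x \<in> carrier T"
    then obtain a where a: "a \<in> carrier F" "x = q a" unfolding surj by auto
    then have "q (\<ominus>\<^bsub>F\<^esub> a) \<oplus>\<^bsub>T\<^esub> x = \<zero>\<^bsub>T\<^esub>" by (simp add: add zero F.l_neg)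
    moreover have "q (\<ominus>\<^bsub>F\<^esub> a) \<in> carrier T" unfolding surj using a by auto
    ultimately show "\<exists>y\<in>carrier T. y \<oplus>\<^bsub>T\<^esub> x = \<zero>\<^bsub>T\<^esub>" by blast
  qed
qed

lemma module_image:
  fixes F :: "('k, 'f, 'z) module_scheme" and T :: "('k, 't, 'w) module_scheme"
  assumes F: "module R F" and surj: "carrier T = q ` carrier F"
    and add: "\<And>x y. x \<in> carrier F \<Longrightarrow> y \<in> carrier F \<Longrightarrow> q x \<oplus>\<^bsub>T\<^esub> q y = q (x \<oplus>\<^bsub>F\<^esub> y)"
    and sm: "\<And>r x. r \<in> carrier R \<Longrightarrow> x \<in> carrier F \<Longrightarrow> r \<odot>\<^bsub>T\<^esub> q x = q (r \<odot>\<^bsub>F\<^esub> x)"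
    and zero: "\<zero>\<^bsub>T\<^esub> = q \<zero>\<^bsub>F\<^esub>"
  shows "module R T"
proof -
  interpret F: module R F by fact
  show ?thesis
  proof (rule moduleI)
    show "cring R" by (rule F.is_cring)
    show "abelian_group T" by (rule abelian_group_image[OF F.abelian_group_axioms surj add zero])
    show "\<And>a x. a \<in> carrier R \<Longrightarrow> x \<in> carrier T \<Longrightarrow> a \<odot>\<^bsub>T\<^esub> x \<in> carrier T"
      unfolding surj by (auto simp: sm)
    show "\<And>a b x. a \<in> carrier R \<Longrightarrow> b \<in> carrier R \<Longrightarrow> x \<in> carrier T \<Longrightarrow>
        (a \<oplus>\<^bsub>R\<^esub> b) \<odot>\<^bsub>T\<^esub> x = a \<odot>\<^bsub>T\<^esub> x \<oplus>\<^bsub>T\<^esub> b \<odot>\<^bsub>T\<^esub> x"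
      unfolding surj by (auto simp: sm add F.smult_l_distr)
    show "\<And>a x y. a \<in> carrier R \<Longrightarrow> x \<in> carrier T \<Longrightarrow> y \<in> carrier T \<Longrightarrow>
        a \<odot>\<^bsub>T\<^esub> (x \<oplus>\<^bsub>T\<^esub> y) = a \<odot>\<^bsub>T\<^esub> x \<oplus>\<^bsub>T\<^esub> a \<odot>\<^bsub>T\<^esub> y"
      unfolding surj by (auto simp: sm add F.smult_r_distr)
    show "\<And>a b x. a \<in> carrier R \<Longrightarrow> b \<in> carrier R \<Longrightarrow> x \<in> carrier T \<Longrightarrow>
        (a \<otimes>\<^bsub>R\<^esub> b) \<odot>\<^bsub>T\<^esub> x = a \<odot>\<^bsub>T\<^esub> (b \<odot>\<^bsub>T\<^esub> x)"
      unfolding surj by (auto simp: sm F.smult_assoc1)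
    show "\<And>x. x \<in> carrier T \<Longrightarrow> \<one>\<^bsub>R\<^esub> \<odot>\<^bsub>T\<^esub> x = x"
      unfolding surj by (auto simp: sm)
  qed
qed

section \<open>Free modules\<close>

lemma free_carrier_iff:
  "f \<in> free_carrier R S \<longleftrightarrow> (\<forall>x. f x \<in> carrier R) \<and> (\<forall>x. x \<notin> S \<longrightarrow> f x = \<zero>\<^bsub>R\<^esub>)
      \<and> finite {x. f x \<noteq> \<zero>\<^bsub>R\<^esub>}"
  by (simp add: free_carrier_def)

lemma free_module_simps [simp]:
  "carrier (free_module R S) = free_carrier R S"
  "\<zero>\<^bsub>free_module R S\<^esub> = (\<lambda>x. \<zero>\<^bsub>R\<^esub>)"
  "f \<oplus>\<^bsub>free_module R S\<^esub> g = (\<lambda>x. f x \<oplus>\<^bsub>R\<^esub> g x)"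
  "r \<odot>\<^bsub>free_module R S\<^esub> f = (\<lambda>x. r \<otimes>\<^bsub>R\<^esub> f x)"
  by (simp_all add: free_module_def)

context cring begin

lemma free_carrier_val: "f \<in> free_carrier R S \<Longrightarrow> f x \<in> carrier R"
  by (simp add: free_carrier_def)

lemma free_carrier_outside: "f \<in> free_carrier R S \<Longrightarrow> x \<notin> S \<Longrightarrow> f x = \<zero>"
  by (simp add: free_carrier_def)

lemma free_carrier_finite: "f \<in> free_carrier R S \<Longrightarrow> finite {x. f x \<noteq> \<zero>}"
  by (simp add: free_carrier_def)

lemma free_carrier_support: "f \<in> free_carrier R S \<Longrightarrow> {x. f x \<noteq> \<zero>} \<subseteq> S"
  using free_carrier_outside[of f S] by auto


lemma free_carrier_add: "f \<in> free_carrier R S \<Longrightarrow> g \<in> free_carrier R S \<Longrightarrow>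
    (\<lambda>x. f x \<oplus> g x) \<in> free_carrier R S"
proof -
  assume f: "f \<in> free_carrier R S" and g: "g \<in> free_carrier R S"
  have "{x. f x \<oplus> g x \<noteq> \<zero>} \<subseteq> {x. f x \<noteq> \<zero>} \<union> {x. g x \<noteq> \<zero>}" using f g by auto
  then show ?thesis using f g free_carrier_finite[OF f] free_carrier_finite[OF g]
      free_carrier_outside[OF f] free_carrier_outside[OF g]
    by (auto simp: free_carrier_iff intro: finite_subset)
qed

lemma free_carrier_smult: "r \<in> carrier R \<Longrightarrow> f \<in> free_carrier R S \<Longrightarrow> (\<lambda>x. r \<otimes> f x) \<in> free_carrier R S"
proof -
  assume r: "r \<in> carrier R" and f: "f \<in> free_carrier R S"
  have "{x. r \<otimes> f x \<noteq> \<zero>} \<subseteq> {x. f x \<noteq> \<zero>}" using f r by auto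
  then show ?thesis using f r free_carrier_finite[OF f] free_carrier_outside[OF f]
    by (auto simp: free_carrier_iff intro: finite_subset)
qed

lemma free_carrier_neg: "f \<in> free_carrier R S \<Longrightarrow> (\<lambda>x. \<ominus> f x) \<in> free_carrier R S"
proof -
  assume f: "f \<in> free_carrier R S"
  have "{x. \<ominus> f x \<noteq> \<zero>} \<subseteq> {x. f x \<noteq> \<zero>}" using f by auto
  then show ?thesis using f free_carrier_finite[OF f] free_carrier_outside[OF f]
    by (auto simp: free_carrier_iff intro: finite_subset)
qed

lemma free_carrier_minus:
  "f \<in> free_carrier R S \<Longrightarrow> g \<in> free_carrier R S \<Longrightarrow> (\<lambda>x. f x \<ominus> g x) \<in> free_carrier R S"
  using free_carrier_add[OF _ free_carrier_neg] by (simp add: a_minus_def)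

lemma free_carrier_zero: "(\<lambda>x. \<zero>) \<in> free_carrier R S"
  by (simp add: free_carrier_iff)

lemma free_carrier_delta: "s \<in> S \<Longrightarrow> fs_delta R s \<in> free_carrier R S"
proof -
  assume "s \<in> S"
  have "{x. fs_delta R s x \<noteq> \<zero>} \<subseteq> {s}" by (auto simp: fs_delta_def)
  then show ?thesis using \<open>s \<in> S\<close> by (auto simp: free_carrier_iff fs_delta_def intro: finite_subset)
qed

lemma free_carrier_smult_delta:
  "r \<in> carrier R \<Longrightarrow> s \<in> S \<Longrightarrow> (\<lambda>x. r \<otimes> fs_delta R s x) \<in> free_carrier R S"
  by (intro free_carrier_smult free_carrier_delta)

lemma fs_delta_closed: "fs_delta R z x \<in> carrier R"
  by (simp add: fs_delta_def)

lemma free_carrier_prod: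
  assumes f: "f \<in> free_carrier R S1" and g: "g \<in> free_carrier R S2"
  shows "(\<lambda>p. f (fst p) \<otimes> g (snd p)) \<in> free_carrier R (S1 \<times> S2)"
proof -
  have "{p. f (fst p) \<otimes> g (snd p) \<noteq> \<zero>} \<subseteq> {u. f u \<noteq> \<zero>} \<times> {v. g v \<noteq> \<zero>}"
    using free_carrier_val[OF f] free_carrier_val[OF g] by auto
  moreover have "finite ({u. f u \<noteq> \<zero>} \<times> {v. g v \<noteq> \<zero>})"
    using free_carrier_finite[OF f] free_carrier_finite[OF g] by auto
  ultimately show ?thesis
    using free_carrier_val[OF f] free_carrier_val[OF g]
      free_carrier_outside[OF f] free_carrier_outside[OF g]
    by (auto simp: free_carrier_iff intro: finite_subset)
qed

lemma free_module_module: "module R (free_module R S)"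
proof (rule moduleI)
  show "abelian_group (free_module R S)"
  proof (rule abelian_groupI)
    fix x assume x: "x \<in> carrier (free_module R S)"
    show "\<exists>y\<in>carrier (free_module R S). y \<oplus>\<^bsub>free_module R S\<^esub> x = \<zero>\<^bsub>free_module R S\<^esub>"
      using x by (intro bexI[of _ "\<lambda>z. \<ominus> x z"]) (auto simp: free_carrier_neg l_neg free_carrier_val)
  qed (auto simp: free_carrier_add free_carrier_zero a_ac free_carrier_val)
qed (auto simp: is_cring free_carrier_smult l_distr r_distr m_assoc free_carrier_val)

lemma free_minus:
  assumes "f \<in> free_carrier R S" "g \<in> free_carrier R S"
  shows "f \<ominus>\<^bsub>free_module R S\<^esub> g = (\<lambda>z. f z \<ominus> g z)"
proof -
  interpret F: module R "free_module R S" by (rule free_module_module)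
  have "\<ominus>\<^bsub>free_module R S\<^esub> g = (\<lambda>z. \<ominus> g z)"
    by (rule F.minus_equality) (use assms in \<open>auto simp: free_carrier_neg l_neg free_carrier_val\<close>)
  then show ?thesis by (simp add: a_minus_def)
qed

lemma free_finsum_apply:
  assumes "finite I" "F \<in> I \<rightarrow> free_carrier R S"
  shows "finsum (free_module R S) F I z = (\<Oplus>i\<in>I. F i z)"
  using assms
proof (induction I rule: finite_induct)
  case empty
  interpret FM: module R "free_module R S" by (rule free_module_module)
  show ?case by simp
next
  case (insert i I)
  interpret FM: module R "free_module R S" by (rule free_module_module)
  from insert have "finsum (free_module R S) F (insert i I) = F i \<oplus>\<^bsub>free_module R S\<^esub> finsum (free_module R S) F I"
    by (intro FM.finsum_insert) auto
  moreover from insert have "(\<Oplus>i\<in>insert i I. F i z) = F i z \<oplus> (\<Oplus>i\<in>I. F i z)"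
    by (intro finsum_insert) (auto intro: free_carrier_val)
  ultimately show ?case using insert by simp
qed

lemma free_expand_apply:
  assumes f: "f \<in> free_carrier R S" and T: "finite T" "{x. f x \<noteq> \<zero>} \<subseteq> T"
  shows "(\<Oplus>t\<in>T. f t \<otimes> fs_delta R t z) = f z"
proof -
  have fc: "\<And>x. f x \<in> carrier R" using f by (rule free_carrier_val)
  have "(\<Oplus>t\<in>T. f t \<otimes> fs_delta R t z) = (\<Oplus>t\<in>T. if z = t then f t else \<zero>)"
    using fc by (intro finsum_cong) (auto simp: fs_delta_def simp_implies_def)
  also have "\<dots> = f z"
  proof (cases "z \<in> T")
    case True then show ?thesis using finsum_singleton[OF True T(1), of f] fc by auto
  next
    case False
    then have "f z = \<zero>" using T by auto
    moreover have "(\<Oplus>t\<in>T. if z = t then f t else \<zero>) = (\<Oplus>t\<in>T. \<zero>)"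
      using False by (intro finsum_cong) (auto simp: simp_implies_def)
    ultimately show ?thesis by simp
  qed
  finally show ?thesis .
qed

lemma free_expand:
  assumes f: "f \<in> free_carrier R S" and T: "finite T" "{x. f x \<noteq> \<zero>} \<subseteq> T" "T \<subseteq> S"
  shows "finsum (free_module R S) (\<lambda>t. f t \<odot>\<^bsub>free_module R S\<^esub> fs_delta R t) T = f"
proof
  fix z
  have "(\<lambda>t. f t \<odot>\<^bsub>free_module R S\<^esub> fs_delta R t) \<in> T \<rightarrow> free_carrier R S"
    using T f by (auto simp: free_carrier_smult_delta free_carrier_val)
  then have "finsum (free_module R S) (\<lambda>t. f t \<odot>\<^bsub>free_module R S\<^esub> fs_delta R t) T z
     = (\<Oplus>t\<in>T. (f t \<odot>\<^bsub>free_module R S\<^esub> fs_delta R t) z)"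
    by (intro free_finsum_apply[OF T(1)])
  also have "\<dots> = f z" using free_expand_apply[OF f T(1,2)] by simp
  finally show "finsum (free_module R S) (\<lambda>t. f t \<odot>\<^bsub>free_module R S\<^esub> fs_delta R t) T z = f z" .
qed

end

definition free_lift :: "('k,'c) ring_scheme \<Rightarrow> ('k,'n,'y) module_scheme \<Rightarrow> ('s \<Rightarrow> 'n) \<Rightarrow> ('s \<Rightarrow> 'k) \<Rightarrow> 'n" where
  "free_lift R L \<beta> f = finsum L (\<lambda>z. f z \<odot>\<^bsub>L\<^esub> \<beta> z) {z. f z \<noteq> \<zero>\<^bsub>R\<^esub>}"

context module begin

lemma is_module: "module R M" by unfold_locales

lemma free_lift_superset:
  assumes f: "f \<in> free_carrier R S" and T: "finite T" "{z. f z \<noteq> \<zero>} \<subseteq> T" "T \<subseteq> S"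
    and b: "\<beta> \<in> S \<rightarrow> carrier M"
  shows "free_lift R M \<beta> f = (\<Oplus>\<^bsub>M\<^esub> z\<in>T. f z \<odot>\<^bsub>M\<^esub> \<beta> z)"
  unfolding free_lift_def
proof (rule M.add.finprod_mono_neutral_cong_left)
  show "finite T" by fact
  show "{z. f z \<noteq> \<zero>} \<subseteq> T" by fact
  show "f i \<odot>\<^bsub>M\<^esub> \<beta> i = \<zero>\<^bsub>M\<^esub>" if "i \<in> T - {z. f z \<noteq> \<zero>}" for i
  proof -
    have "\<beta> i \<in> carrier M" using that T b by auto
    then show ?thesis using that by simp
  qed
  show "\<And>x. x \<in> {z. f z \<noteq> \<zero>} \<Longrightarrow> f x \<odot>\<^bsub>M\<^esub> \<beta> x = f x \<odot>\<^bsub>M\<^esub> \<beta> x" by simp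
  show "(\<lambda>z. f z \<odot>\<^bsub>M\<^esub> \<beta> z) \<in> T \<rightarrow> carrier M"
    using T b f by (auto intro!: smult_closed free_carrier_val[OF f])
qed

lemma free_lift_closed:
  assumes f: "f \<in> free_carrier R S" and b: "\<beta> \<in> S \<rightarrow> carrier M"
  shows "free_lift R M \<beta> f \<in> carrier M"
  unfolding free_lift_def using f b free_carrier_support[OF f]
  by (intro M.finsum_closed) (auto intro!: smult_closed free_carrier_val[OF f])

lemma free_lift_add:
  assumes f: "f \<in> free_carrier R S" and g: "g \<in> free_carrier R S" and b: "\<beta> \<in> S \<rightarrow> carrier M"
  shows "free_lift R M \<beta> (\<lambda>x. f x \<oplus> g x) = free_lift R M \<beta> f \<oplus>\<^bsub>M\<^esub> free_lift R M \<beta> g"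
proof -
  let ?T = "{z. f z \<noteq> \<zero>} \<union> {z. g z \<noteq> \<zero>}"
  have T: "finite ?T" "?T \<subseteq> S"
    using free_carrier_finite[OF f] free_carrier_finite[OF g] free_carrier_support[OF f]
        free_carrier_support[OF g]
    by auto
  have fg: "(\<lambda>x. f x \<oplus> g x) \<in> free_carrier R S" using free_carrier_add f g by blast
  have s: "{z. f z \<oplus> g z \<noteq> \<zero>} \<subseteq> ?T" using f g by (auto intro: free_carrier_val)
  have "free_lift R M \<beta> (\<lambda>x. f x \<oplus> g x) = (\<Oplus>\<^bsub>M\<^esub> z\<in>?T. (f z \<oplus> g z) \<odot>\<^bsub>M\<^esub> \<beta> z)"
    by (rule free_lift_superset[OF fg T(1) s T(2) b])
  also have "\<dots> = (\<Oplus>\<^bsub>M\<^esub> z\<in>?T. f z \<odot>\<^bsub>M\<^esub> \<beta> z \<oplus>\<^bsub>M\<^esub> g z \<odot>\<^bsub>M\<^esub> \<beta> z)"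
    using T b f g
    by (intro M.finsum_cong) (auto simp: smult_l_distr free_carrier_val Pi_iff simp_implies_def
          subset_iff)
  also have "\<dots> = (\<Oplus>\<^bsub>M\<^esub> z\<in>?T. f z \<odot>\<^bsub>M\<^esub> \<beta> z) \<oplus>\<^bsub>M\<^esub> (\<Oplus>\<^bsub>M\<^esub> z\<in>?T. g z \<odot>\<^bsub>M\<^esub> \<beta> z)"
    using T b f g by (intro M.finsum_addf) (auto simp: free_carrier_val Pi_iff subset_iff)
  also have "\<dots> = free_lift R M \<beta> f \<oplus>\<^bsub>M\<^esub> free_lift R M \<beta> g"
    using free_lift_superset[OF f T(1) _ T(2) b] free_lift_superset[OF g T(1) _ T(2) b] by auto
  finally show ?thesis .
qed

lemma free_lift_smult:
  assumes f: "f \<in> free_carrier R S" and r: "r \<in> carrier R" and b: "\<beta> \<in> S \<rightarrow> carrier M"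
  shows "free_lift R M \<beta> (\<lambda>x. r \<otimes> f x) = r \<odot>\<^bsub>M\<^esub> free_lift R M \<beta> f"
proof -
  let ?T = "{z. f z \<noteq> \<zero>}"
  have T: "finite ?T" "?T \<subseteq> S" using free_carrier_finite[OF f] free_carrier_support[OF f] by auto
  have rf: "(\<lambda>x. r \<otimes> f x) \<in> free_carrier R S" using free_carrier_smult f r by blast
  have s: "{z. r \<otimes> f z \<noteq> \<zero>} \<subseteq> ?T" using f r by (auto intro: free_carrier_val)
  have "free_lift R M \<beta> (\<lambda>x. r \<otimes> f x) = (\<Oplus>\<^bsub>M\<^esub> z\<in>?T. (r \<otimes> f z) \<odot>\<^bsub>M\<^esub> \<beta> z)"
    by (rule free_lift_superset[OF rf T(1) s T(2) b])
  also have "\<dots> = (\<Oplus>\<^bsub>M\<^esub> z\<in>?T. r \<odot>\<^bsub>M\<^esub> (f z \<odot>\<^bsub>M\<^esub> \<beta> z))"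
    using T b f r
    by (intro M.finsum_cong) (auto simp: smult_assoc1 free_carrier_val Pi_iff simp_implies_def
          subset_iff)
  also have "\<dots> = r \<odot>\<^bsub>M\<^esub> (\<Oplus>\<^bsub>M\<^esub> z\<in>?T. f z \<odot>\<^bsub>M\<^esub> \<beta> z)"
    using T b f r
    by (intro finsum_smult_ldistr[symmetric]) (auto simp: free_carrier_val Pi_iff subset_iff)
  also have "\<dots> = r \<odot>\<^bsub>M\<^esub> free_lift R M \<beta> f" by (simp add: free_lift_def)
  finally show ?thesis .
qed

lemma free_lift_lin:
  assumes b: "\<beta> \<in> S \<rightarrow> carrier M"
  shows "lin_map R (free_module R S) M (free_lift R M \<beta>)"
  by (rule lin_mapI) (auto simp: free_lift_closed[OF _ b] free_lift_add[OF _ _ b]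
      free_lift_smult[OF _ _ b])

lemma free_lift_minus:
  assumes u: "u \<in> free_carrier R S" and v: "v \<in> free_carrier R S" and b: "\<beta> \<in> S \<rightarrow> carrier M"
  shows "free_lift R M \<beta> (\<lambda>z. u z \<ominus> v z) = free_lift R M \<beta> u \<ominus>\<^bsub>M\<^esub> free_lift R M \<beta> v"
  using lin_map_minus[OF free_module_module is_module free_lift_lin[OF b], of u v] u v
  by (simp add: free_minus)

lemma free_lift_delta:
  assumes s: "s \<in> S" and b: "\<beta> \<in> S \<rightarrow> carrier M"
  shows "free_lift R M \<beta> (fs_delta R s) = \<beta> s"
proof -
  have "free_lift R M \<beta> (fs_delta R s) = (\<Oplus>\<^bsub>M\<^esub> z\<in>{s}. fs_delta R s z \<odot>\<^bsub>M\<^esub> \<beta> z)"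
    using s
    by (intro free_lift_superset[OF free_carrier_delta[OF s] _ _ _ b]) (auto simp: fs_delta_def)
  also have "\<dots> = \<one> \<odot>\<^bsub>M\<^esub> \<beta> s" using s b by (simp add: fs_delta_def Pi_iff)
  also have "\<dots> = \<beta> s" using funcset_mem[OF b s] by simp
  finally show ?thesis .
qed

lemma free_lift_cong:
  assumes f: "f \<in> free_carrier R S" and eq: "\<And>z. z \<in> S \<Longrightarrow> \<beta> z = \<gamma> z"
    and c: "\<gamma> \<in> S \<rightarrow> carrier M"
  shows "free_lift R M \<beta> f = free_lift R M \<gamma> f"
  unfolding free_lift_def using free_carrier_support[OF f] eq c
  by (intro M.finsum_cong') (auto simp: free_carrier_val[OF f] Pi_iff subset_iff intro!:
      smult_closed)

lemma free_lift_fun_add: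
  assumes f: "f \<in> free_carrier R S" and b: "\<beta> \<in> S \<rightarrow> carrier M" and c: "\<gamma> \<in> S \<rightarrow> carrier M"
  shows "free_lift R M (\<lambda>z. \<beta> z \<oplus>\<^bsub>M\<^esub> \<gamma> z) f = free_lift R M \<beta> f \<oplus>\<^bsub>M\<^esub> free_lift R M \<gamma> f"
proof -
  have s: "{z. f z \<noteq> \<zero>} \<subseteq> S" "finite {z. f z \<noteq> \<zero>}"
    using free_carrier_support[OF f] free_carrier_finite[OF f] by auto
  have "free_lift R M (\<lambda>z. \<beta> z \<oplus>\<^bsub>M\<^esub> \<gamma> z) f = (\<Oplus>\<^bsub>M\<^esub>z\<in>{z. f z \<noteq> \<zero>}. f z \<odot>\<^bsub>M\<^esub> \<beta> z \<oplus>\<^bsub>M\<^esub> f z \<odot>\<^bsub>M\<^esub> \<gamma> z)"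
    unfolding free_lift_def using s b c
    by (intro M.finsum_cong_simple) (auto simp: smult_r_distr free_carrier_val[OF f] Pi_iff
        subset_iff)
  also have "\<dots> = free_lift R M \<beta> f \<oplus>\<^bsub>M\<^esub> free_lift R M \<gamma> f"
    unfolding free_lift_def using s b c
    by (intro M.finsum_addf) (auto simp: free_carrier_val[OF f] Pi_iff subset_iff)
  finally show ?thesis .
qed

lemma free_lift_fun_smult:
  assumes f: "f \<in> free_carrier R S" and b: "\<beta> \<in> S \<rightarrow> carrier M" and r: "r \<in> carrier R"
  shows "free_lift R M (\<lambda>z. r \<odot>\<^bsub>M\<^esub> \<beta> z) f = r \<odot>\<^bsub>M\<^esub> free_lift R M \<beta> f"
proof -
  have s: "{z. f z \<noteq> \<zero>} \<subseteq> S" "finite {z. f z \<noteq> \<zero>}"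
    using free_carrier_support[OF f] free_carrier_finite[OF f] by auto
  have "free_lift R M (\<lambda>z. r \<odot>\<^bsub>M\<^esub> \<beta> z) f = (\<Oplus>\<^bsub>M\<^esub>z\<in>{z. f z \<noteq> \<zero>}. r \<odot>\<^bsub>M\<^esub> (f z \<odot>\<^bsub>M\<^esub> \<beta> z))"
    unfolding free_lift_def using s b r
    by (intro M.finsum_cong_simple) (auto simp: smult_assoc1[symmetric] free_carrier_val[OF f]
        Pi_iff subset_iff m_comm)
  also have "\<dots> = r \<odot>\<^bsub>M\<^esub> free_lift R M \<beta> f"
    unfolding free_lift_def using s b r
    by (intro finsum_smult_ldistr[symmetric]) (auto simp: free_carrier_val[OF f] Pi_iff subset_iff)
  finally show ?thesis .
qed

lemma lin_map_eq_free_lift: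
  assumes G: "lin_map R (free_module R S) M G" and f: "f \<in> free_carrier R S"
  shows "G f = free_lift R M (\<lambda>s. G (fs_delta R s)) f"
proof -
  interpret FM: module R "free_module R S" by (rule free_module_module)
  let ?T = "{z. f z \<noteq> \<zero>}"
  have T: "finite ?T" "?T \<subseteq> S" using free_carrier_finite[OF f] free_carrier_support[OF f] by auto
  have "G f = G (finsum (free_module R S) (\<lambda>t. f t \<odot>\<^bsub>free_module R S\<^esub> fs_delta R t) ?T)"
    using free_expand[OF f T(1) _ T(2)] by simp
  also have "\<dots> = (\<Oplus>\<^bsub>M\<^esub> t\<in>?T. G (f t \<odot>\<^bsub>free_module R S\<^esub> fs_delta R t))"
    using T f by (intro lin_map_finsum[OF free_module_module is_module G])
       (auto simp: Pi_iff subset_iff free_carrier_smult_delta free_carrier_val)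
  also have "\<dots> = (\<Oplus>\<^bsub>M\<^esub> t\<in>?T. f t \<odot>\<^bsub>M\<^esub> G (fs_delta R t))"
  proof (rule M.finsum_cong_simple)
    fix t assume "t \<in> ?T"
    then have "t \<in> S" using T by auto
    then show "G (f t \<odot>\<^bsub>free_module R S\<^esub> fs_delta R t) = f t \<odot>\<^bsub>M\<^esub> G (fs_delta R t)"
      by (intro lin_mapD(3)[OF G] free_carrier_val[OF f]) (simp add: free_carrier_delta)
  next
    show "(\<lambda>t. f t \<odot>\<^bsub>M\<^esub> G (fs_delta R t)) \<in> ?T \<rightarrow> carrier M"
      using T
      by (auto intro!: smult_closed lin_mapD(1)[OF G] free_carrier_delta free_carrier_val[OF f])
  qed
  also have "\<dots> = free_lift R M (\<lambda>s. G (fs_delta R s)) f" by (simp add: free_lift_def)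
  finally show ?thesis .
qed

end


section \<open>Tensor products of modules\<close>

lemma (in abelian_group) minus_eq_zero_imp_eq:
  assumes "x \<in> carrier G" "y \<in> carrier G" "x \<ominus> y = \<zero>"
  shows "x = y"
proof -
  have "x = (x \<ominus> y) \<oplus> y" using assms(1,2) by (simp add: a_minus_def a_assoc l_neg)
  then show ?thesis using assms by simp
qed

lemma (in abelian_group) add_minus_minus_cancel:
  assumes "x \<in> carrier G" "y \<in> carrier G"
  shows "x \<oplus> y \<ominus> x \<ominus> y = \<zero>"
proof -
  have "x \<oplus> y \<ominus> x = y \<oplus> (x \<ominus> x)" using assms by (simp add: a_minus_def a_assoc a_comm a_lcomm)
  also have "\<dots> = y" using assms by (simp add: a_minus_def r_neg)
  finally show ?thesis using assms by (simp add: a_minus_def r_neg)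
qed

lemma (in abelian_group) minus_self: "x \<in> carrier G \<Longrightarrow> x \<ominus> x = \<zero>"
  by (simp add: a_minus_def r_neg)

definition bilinear :: "('k,'c) ring_scheme \<Rightarrow> ('k,'m,'x) module_scheme \<Rightarrow> ('k,'n,'y) module_scheme
   \<Rightarrow> ('k,'l,'z) module_scheme \<Rightarrow> ('m \<Rightarrow> 'n \<Rightarrow> 'l) \<Rightarrow> bool" where
  "bilinear R M N L \<beta> \<longleftrightarrow>
    (\<forall>m\<in>carrier M. \<forall>n\<in>carrier N. \<beta> m n \<in> carrier L) \<and>
    (\<forall>m\<in>carrier M. \<forall>m'\<in>carrier M. \<forall>n\<in>carrier N. \<beta> (m \<oplus>\<^bsub>M\<^esub> m') n = \<beta> m n \<oplus>\<^bsub>L\<^esub> \<beta> m' n) \<and>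
    (\<forall>m\<in>carrier M. \<forall>n\<in>carrier N. \<forall>n'\<in>carrier N. \<beta> m (n \<oplus>\<^bsub>N\<^esub> n') = \<beta> m n \<oplus>\<^bsub>L\<^esub> \<beta> m n') \<and>
    (\<forall>r\<in>carrier R. \<forall>m\<in>carrier M. \<forall>n\<in>carrier N. \<beta> (r \<odot>\<^bsub>M\<^esub> m) n = r \<odot>\<^bsub>L\<^esub> \<beta> m n) \<and>
    (\<forall>r\<in>carrier R. \<forall>m\<in>carrier M. \<forall>n\<in>carrier N. \<beta> m (r \<odot>\<^bsub>N\<^esub> n) = r \<odot>\<^bsub>L\<^esub> \<beta> m n)"

lemma bilinearI:
  assumes "\<And>m n. m \<in> carrier M \<Longrightarrow> n \<in> carrier N \<Longrightarrow> \<beta> m n \<in> carrier L"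
    and "\<And>m m' n. m \<in> carrier M \<Longrightarrow> m' \<in> carrier M \<Longrightarrow> n \<in> carrier N \<Longrightarrow>
        \<beta> (m \<oplus>\<^bsub>M\<^esub> m') n = \<beta> m n \<oplus>\<^bsub>L\<^esub> \<beta> m' n"
    and "\<And>m n n'. m \<in> carrier M \<Longrightarrow> n \<in> carrier N \<Longrightarrow> n' \<in> carrier N \<Longrightarrow>
        \<beta> m (n \<oplus>\<^bsub>N\<^esub> n') = \<beta> m n \<oplus>\<^bsub>L\<^esub> \<beta> m n'"
    and "\<And>r m n. r \<in> carrier R \<Longrightarrow> m \<in> carrier M \<Longrightarrow> n \<in> carrier N \<Longrightarrow> \<beta> (r \<odot>\<^bsub>M\<^esub> m) n = r \<odot>\<^bsub>L\<^esub> \<beta> m n"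
    and "\<And>r m n. r \<in> carrier R \<Longrightarrow> m \<in> carrier M \<Longrightarrow> n \<in> carrier N \<Longrightarrow> \<beta> m (r \<odot>\<^bsub>N\<^esub> n) = r \<odot>\<^bsub>L\<^esub> \<beta> m n"
  shows "bilinear R M N L \<beta>"
  using assms unfolding bilinear_def by blast

lemma bilinearD:
  assumes "bilinear R M N L \<beta>"
  shows "\<And>m n. m \<in> carrier M \<Longrightarrow> n \<in> carrier N \<Longrightarrow> \<beta> m n \<in> carrier L"
    and "\<And>m m' n. m \<in> carrier M \<Longrightarrow> m' \<in> carrier M \<Longrightarrow> n \<in> carrier N \<Longrightarrow>
        \<beta> (m \<oplus>\<^bsub>M\<^esub> m') n = \<beta> m n \<oplus>\<^bsub>L\<^esub> \<beta> m' n"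
    and "\<And>m n n'. m \<in> carrier M \<Longrightarrow> n \<in> carrier N \<Longrightarrow> n' \<in> carrier N \<Longrightarrow>
        \<beta> m (n \<oplus>\<^bsub>N\<^esub> n') = \<beta> m n \<oplus>\<^bsub>L\<^esub> \<beta> m n'"
    and "\<And>r m n. r \<in> carrier R \<Longrightarrow> m \<in> carrier M \<Longrightarrow> n \<in> carrier N \<Longrightarrow> \<beta> (r \<odot>\<^bsub>M\<^esub> m) n = r \<odot>\<^bsub>L\<^esub> \<beta> m n"
    and "\<And>r m n. r \<in> carrier R \<Longrightarrow> m \<in> carrier M \<Longrightarrow> n \<in> carrier N \<Longrightarrow> \<beta> m (r \<odot>\<^bsub>N\<^esub> n) = r \<odot>\<^bsub>L\<^esub> \<beta> m n"
  using assms unfolding bilinear_def by blast+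


(* tensor_lift evaluates on the representative picked by tens_rep; for bilinear \<beta> the result
   does not depend on that choice (tensor_lift_cls). *)
definition tensor_lift :: "('k,'c) ring_scheme \<Rightarrow> ('k,'l,'z) module_scheme \<Rightarrow> ('m \<Rightarrow> 'n \<Rightarrow> 'l)
   \<Rightarrow> ('m \<times> 'n \<Rightarrow> 'k) set \<Rightarrow> 'l" where
  "tensor_lift R L \<beta> U = free_lift R L (\<lambda>z. \<beta> (fst z) (snd z)) (tens_rep U)"

locale tensor_modules = cring R + M: module R M + N: module R N
  for R :: "('k, 'c) ring_scheme" (structure) and M :: "('k, 'm, 'x) module_scheme"
    and N :: "('k, 'n, 'y) module_scheme"
begin

abbreviation "FMN \<equiv> free_module R (carrier M \<times> carrier N)"
abbreviation "TMN \<equiv> tensor_mod R M N"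
abbreviation "cls \<equiv> tens_cls R M N"
abbreviation "rel \<equiv> tens_rel R M N"
abbreviation "tens m n \<equiv> tens_cls R M N (fs_delta R (m, n))"

lemma free_module_MN: "module R FMN" by (rule free_module_module)

lemma tens_gens_subset: "tens_gens R M N \<subseteq> free_carrier R (carrier M \<times> carrier N)"
  unfolding tens_gens_def by (auto intro!: free_carrier_minus free_carrier_delta free_carrier_smult)

lemma tens_rel_family: "carrier FMN \<in> {H. submodule H R FMN \<and> tens_gens R M N \<subseteq> H}"
  using tens_gens_subset module.carrier_is_submodule[OF free_module_MN] by simp

lemma tens_rel_subset: "rel \<subseteq> free_carrier R (carrier M \<times> carrier N)"
  unfolding tens_rel_def using tens_rel_family by auto

lemma tens_gens_in_rel: "tens_gens R M N \<subseteq> rel"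
  unfolding tens_rel_def by auto

lemma tens_rel_least: "submodule H R FMN \<Longrightarrow> tens_gens R M N \<subseteq> H \<Longrightarrow> rel \<subseteq> H"
  unfolding tens_rel_def by auto

lemma tens_rel_zero: "(\<lambda>z. \<zero>) \<in> rel"
proof -
  have "\<zero>\<^bsub>FMN\<^esub> \<in> H" if "submodule H R FMN" for H
    using subgroup.one_closed[OF submodule.axioms(1)[OF that]] by simp
  then show ?thesis unfolding tens_rel_def by auto
qed

lemma tens_rel_add: "f \<in> rel \<Longrightarrow> g \<in> rel \<Longrightarrow> (\<lambda>z. f z \<oplus> g z) \<in> rel"
proof -
  assume f: "f \<in> rel" and g: "g \<in> rel"
  have "f \<oplus>\<^bsub>FMN\<^esub> g \<in> H" if "submodule H R FMN" "f \<in> H" "g \<in> H" for H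
    using subgroup.m_closed[OF submodule.axioms(1)[OF that(1)] that(2,3)] by simp
  then show ?thesis using f g unfolding tens_rel_def by auto
qed

lemma tens_rel_smult: "r \<in> carrier R \<Longrightarrow> f \<in> rel \<Longrightarrow> (\<lambda>z. r \<otimes> f z) \<in> rel"
proof -
  assume r: "r \<in> carrier R" and f: "f \<in> rel"
  have "r \<odot>\<^bsub>FMN\<^esub> f \<in> H" if "submodule H R FMN" "f \<in> H" for H
    using submodule.smult_closed[OF that(1) r that(2)] by simp
  then show ?thesis using f unfolding tens_rel_def by auto
qed

lemma tens_rel_neg: "f \<in> rel \<Longrightarrow> (\<lambda>z. \<ominus> f z) \<in> rel"
proof -
  assume f: "f \<in> rel"
  have fc: "f \<in> free_carrier R (carrier M \<times> carrier N)" using f tens_rel_subset by auto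
  have "(\<lambda>z. (\<ominus> \<one>) \<otimes> f z) \<in> rel" by (rule tens_rel_smult) (use f in auto)
  moreover have "(\<lambda>z. (\<ominus> \<one>) \<otimes> f z) = (\<lambda>z. \<ominus> f z)"
    using free_carrier_val[OF fc] by (auto simp: l_minus)
  ultimately show ?thesis by simp
qed

lemma tens_rel_minus: "f \<in> rel \<Longrightarrow> g \<in> rel \<Longrightarrow> (\<lambda>z. f z \<ominus> g z) \<in> rel"
  using tens_rel_add[OF _ tens_rel_neg] by (simp add: a_minus_def)

lemma lin_map_vanishes_on_tens_rel:
  assumes L: "module R L" and lin: "lin_map R FMN L h"
    and gens: "\<And>g. g \<in> tens_gens R M N \<Longrightarrow> h g = \<zero>\<^bsub>L\<^esub>"
    and f: "f \<in> rel"
  shows "h f = \<zero>\<^bsub>L\<^esub>"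
proof -
  interpret L: module R L by fact
  interpret FM: module R FMN by (rule free_module_MN)
  let ?K = "{f \<in> carrier FMN. h f = \<zero>\<^bsub>L\<^esub>}"
  have "submodule ?K R FMN"
  proof (rule FM.submoduleI)
    show "?K \<subseteq> carrier FMN" by auto
    show "\<zero>\<^bsub>FMN\<^esub> \<in> ?K" using lin_map_zero[OF free_module_MN L lin] FM.zero_closed by simp
    show "\<ominus>\<^bsub>FMN\<^esub> a \<in> ?K" if "a \<in> ?K" for a
      using that lin_map_neg[OF free_module_MN L lin, of a] FM.a_inv_closed[of a] by simp
    show "a \<oplus>\<^bsub>FMN\<^esub> b \<in> ?K" if "a \<in> ?K" "b \<in> ?K" for a b
      using that lin_mapD(2)[OF lin, of a b] by (simp del: free_module_simps)
    show "r \<odot>\<^bsub>FMN\<^esub> a \<in> ?K" if "r \<in> carrier R" "a \<in> ?K" for r a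
      using that lin_mapD(3)[OF lin, of r a] by (simp del: free_module_simps)
  qed
  moreover have "tens_gens R M N \<subseteq> ?K" using gens tens_gens_subset by auto
  ultimately have "rel \<subseteq> ?K" by (rule tens_rel_least)
  then show ?thesis using f by auto
qed

lemma cls_mem: "g \<in> cls f \<longleftrightarrow> g \<in> free_carrier R (carrier M \<times> carrier N) \<and> (\<lambda>z. g z \<ominus> f z) \<in> rel"
  by (simp add: tens_cls_def)

lemma cls_self: "f \<in> free_carrier R (carrier M \<times> carrier N) \<Longrightarrow> f \<in> cls f"
proof -
  assume f: "f \<in> free_carrier R (carrier M \<times> carrier N)"
  have "(\<lambda>z. f z \<ominus> f z) = (\<lambda>z. \<zero>)" using free_carrier_val[OF f] by (auto simp: r_neg a_minus_def)
  then show ?thesis using f tens_rel_zero by (simp add: cls_mem)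
qed

lemma cls_eq:
  assumes f: "f \<in> free_carrier R (carrier M \<times> carrier N)" and g:
      "g \<in> free_carrier R (carrier M \<times> carrier N)"
    and d: "(\<lambda>z. f z \<ominus> g z) \<in> rel"
  shows "cls f = cls g"
proof -
  have "h \<in> cls f \<longleftrightarrow> h \<in> cls g" if h: "h \<in> free_carrier R (carrier M \<times> carrier N)" for h
  proof
    assume "h \<in> cls f"
    then have "(\<lambda>z. h z \<ominus> f z) \<in> rel" by (simp add: cls_mem)
    from tens_rel_add[OF this d] have "(\<lambda>z. (h z \<ominus> f z) \<oplus> (f z \<ominus> g z)) \<in> rel" .
    moreover have "(\<lambda>z. (h z \<ominus> f z) \<oplus> (f z \<ominus> g z)) = (\<lambda>z. h z \<ominus> g z)"
    proof
      fix z
      have "h z \<in> carrier R" "f z \<in> carrier R" "g z \<in> carrier R" using h f g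
        by (auto intro: free_carrier_val)
      then show "(h z \<ominus> f z) \<oplus> (f z \<ominus> g z) = h z \<ominus> g z" by algebra
    qed
    ultimately show "h \<in> cls g" using h by (simp add: cls_mem)
  next
    assume "h \<in> cls g"
    then have "(\<lambda>z. h z \<ominus> g z) \<in> rel" by (simp add: cls_mem)
    from tens_rel_minus[OF this d] have "(\<lambda>z. (h z \<ominus> g z) \<ominus> (f z \<ominus> g z)) \<in> rel" .
    moreover have "(\<lambda>z. (h z \<ominus> g z) \<ominus> (f z \<ominus> g z)) = (\<lambda>z. h z \<ominus> f z)"
    proof
      fix z
      have "h z \<in> carrier R" "f z \<in> carrier R" "g z \<in> carrier R" using h f g
        by (auto intro: free_carrier_val)
      then show "(h z \<ominus> g z) \<ominus> (f z \<ominus> g z) = h z \<ominus> f z" by algebra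
    qed
    ultimately show "h \<in> cls f" using h by (simp add: cls_mem)
  qed
  then show ?thesis unfolding tens_cls_def by auto
qed

lemma tens_rep_cls:
  assumes f: "f \<in> free_carrier R (carrier M \<times> carrier N)"
  shows "tens_rep (cls f) \<in> free_carrier R (carrier M \<times> carrier N)"
    and "(\<lambda>z. tens_rep (cls f) z \<ominus> f z) \<in> rel"
    and "cls (tens_rep (cls f)) = cls f"
proof -
  have "tens_rep (cls f) \<in> cls f" unfolding tens_rep_def using cls_self[OF f]
    by (rule someI[of "\<lambda>u. u \<in> cls f"])
  then show r: "tens_rep (cls f) \<in> free_carrier R (carrier M \<times> carrier N)"
    and d: "(\<lambda>z. tens_rep (cls f) z \<ominus> f z) \<in> rel" by (auto simp: cls_mem)
  show "cls (tens_rep (cls f)) = cls f" by (rule cls_eq[OF r f d])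
qed

lemma tensor_mod_simps:
  "carrier TMN = cls ` free_carrier R (carrier M \<times> carrier N)"
  "\<zero>\<^bsub>TMN\<^esub> = cls (\<lambda>z. \<zero>)"
  "U \<oplus>\<^bsub>TMN\<^esub> V = cls (\<lambda>z. tens_rep U z \<oplus> tens_rep V z)"
  "r \<odot>\<^bsub>TMN\<^esub> U = cls (\<lambda>z. r \<otimes> tens_rep U z)"
  by (simp_all add: tensor_mod_def)

lemma cls_add:
  assumes f: "f \<in> free_carrier R (carrier M \<times> carrier N)" and g:
      "g \<in> free_carrier R (carrier M \<times> carrier N)"
  shows "cls f \<oplus>\<^bsub>TMN\<^esub> cls g = cls (\<lambda>z. f z \<oplus> g z)"
proof -
  let ?f' = "tens_rep (cls f)" and ?g' = "tens_rep (cls g)"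
  have f': "?f' \<in> free_carrier R (carrier M \<times> carrier N)" and g':
      "?g' \<in> free_carrier R (carrier M \<times> carrier N)"
    using tens_rep_cls f g by auto
  have "(\<lambda>z. (?f' z \<ominus> f z) \<oplus> (?g' z \<ominus> g z)) \<in> rel"
    using tens_rel_add[OF tens_rep_cls(2)[OF f] tens_rep_cls(2)[OF g]] .
  moreover have "(\<lambda>z. (?f' z \<ominus> f z) \<oplus> (?g' z \<ominus> g z)) = (\<lambda>z. (?f' z \<oplus> ?g' z) \<ominus> (f z \<oplus> g z))"
  proof
    fix z
    have "?f' z \<in> carrier R" "?g' z \<in> carrier R" "f z \<in> carrier R" "g z \<in> carrier R"
      using f g f' g' by (auto intro: free_carrier_val)
    then show "(?f' z \<ominus> f z) \<oplus> (?g' z \<ominus> g z) = (?f' z \<oplus> ?g' z) \<ominus> (f z \<oplus> g z)" by algebra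
  qed
  ultimately show ?thesis unfolding tensor_mod_simps
    by (intro cls_eq free_carrier_add f g f' g') simp
qed

lemma cls_smult:
  assumes f: "f \<in> free_carrier R (carrier M \<times> carrier N)" and r: "r \<in> carrier R"
  shows "r \<odot>\<^bsub>TMN\<^esub> cls f = cls (\<lambda>z. r \<otimes> f z)"
proof -
  let ?f' = "tens_rep (cls f)"
  have f': "?f' \<in> free_carrier R (carrier M \<times> carrier N)" using tens_rep_cls f by auto
  have "(\<lambda>z. r \<otimes> (?f' z \<ominus> f z)) \<in> rel"
    using tens_rel_smult[OF r tens_rep_cls(2)[OF f]] .
  moreover have "(\<lambda>z. r \<otimes> (?f' z \<ominus> f z)) = (\<lambda>z. r \<otimes> ?f' z \<ominus> r \<otimes> f z)"
  proof
    fix z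
    have "?f' z \<in> carrier R" "f z \<in> carrier R" using f f' by (auto intro: free_carrier_val)
    then show "r \<otimes> (?f' z \<ominus> f z) = r \<otimes> ?f' z \<ominus> r \<otimes> f z" using r by algebra
  qed
  ultimately show ?thesis unfolding tensor_mod_simps
    by (intro cls_eq free_carrier_smult f f' r) simp
qed

lemma tensor_module: "module R TMN"
proof (rule module_image[OF free_module_MN, where q = cls])
  show "carrier TMN = cls ` carrier FMN" by (simp add: tensor_mod_simps)
  show "\<zero>\<^bsub>TMN\<^esub> = cls \<zero>\<^bsub>FMN\<^esub>" by (simp add: tensor_mod_simps)
  show "\<And>x y. x \<in> carrier FMN \<Longrightarrow> y \<in> carrier FMN \<Longrightarrow> cls x \<oplus>\<^bsub>TMN\<^esub> cls y = cls (x \<oplus>\<^bsub>FMN\<^esub> y)"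
    by (simp only: free_module_simps) (rule cls_add)
  show "\<And>r x. r \<in> carrier R \<Longrightarrow> x \<in> carrier FMN \<Longrightarrow> r \<odot>\<^bsub>TMN\<^esub> cls x = cls (r \<odot>\<^bsub>FMN\<^esub> x)"
    by (simp only: free_module_simps) (rule cls_smult)
qed

lemma cls_closed: "f \<in> free_carrier R (carrier M \<times> carrier N) \<Longrightarrow> cls f \<in> carrier TMN"
  by (simp add: tensor_mod_simps)

lemma cls_lin: "lin_map R FMN TMN cls"
proof (rule lin_mapI)
  show "\<And>x. x \<in> carrier FMN \<Longrightarrow> cls x \<in> carrier TMN" using cls_closed by simp
  show "\<And>x y. x \<in> carrier FMN \<Longrightarrow> y \<in> carrier FMN \<Longrightarrow> cls (x \<oplus>\<^bsub>FMN\<^esub> y) = cls x \<oplus>\<^bsub>TMN\<^esub> cls y"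
    by (simp only: free_module_simps) (rule cls_add[symmetric])
  show "\<And>r x. r \<in> carrier R \<Longrightarrow> x \<in> carrier FMN \<Longrightarrow> cls (r \<odot>\<^bsub>FMN\<^esub> x) = r \<odot>\<^bsub>TMN\<^esub> cls x"
    by (simp only: free_module_simps) (rule cls_smult[symmetric])
qed

lemma tens_closed: "m \<in> carrier M \<Longrightarrow> n \<in> carrier N \<Longrightarrow> tens m n \<in> carrier TMN"
  by (intro cls_closed free_carrier_delta) simp

lemma tensor_mod_elem: "U \<in> carrier TMN \<Longrightarrow> \<exists>f \<in> free_carrier R (carrier M \<times> carrier N). U = cls f"
  by (auto simp: tensor_mod_simps)

lemma tens_rep_free: "U \<in> carrier TMN \<Longrightarrow> tens_rep U \<in> free_carrier R (carrier M \<times> carrier N)"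
  using tensor_mod_elem tens_rep_cls(1) by blast

lemma delta_in_free: "m \<in> carrier M \<Longrightarrow> n \<in> carrier N \<Longrightarrow>
    fs_delta R (m, n) \<in> free_carrier R (carrier M \<times> carrier N)"
  by (intro free_carrier_delta) simp

lemma tens_add_left:
  assumes m: "m \<in> carrier M" "m' \<in> carrier M" and n: "n \<in> carrier N"
  shows "tens (m \<oplus>\<^bsub>M\<^esub> m') n = tens m n \<oplus>\<^bsub>TMN\<^esub> tens m' n"
proof -
  let ?g = "\<lambda>z. fs_delta R (m \<oplus>\<^bsub>M\<^esub> m', n) z \<ominus> fs_delta R (m, n) z \<ominus> fs_delta R (m', n) z"
  have "?g \<in> tens_gens R M N" unfolding tens_gens_def using m n by blast
  then have g: "?g \<in> rel" using tens_gens_in_rel by auto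
  have eq: "?g = (\<lambda>z. fs_delta R (m \<oplus>\<^bsub>M\<^esub> m', n) z \<ominus> (fs_delta R (m, n) z \<oplus> fs_delta R (m', n) z))"
  proof
    fix z
    have "fs_delta R (m \<oplus>\<^bsub>M\<^esub> m', n) z \<in> carrier R" "fs_delta R (m, n) z \<in> carrier R"
        "fs_delta R (m', n) z \<in> carrier R"
      by (rule fs_delta_closed)+
    then show "?g z = fs_delta R (m \<oplus>\<^bsub>M\<^esub> m', n) z \<ominus> (fs_delta R (m, n) z \<oplus> fs_delta R (m', n) z)"
      by algebra
  qed
  have "tens (m \<oplus>\<^bsub>M\<^esub> m') n = cls (\<lambda>z. fs_delta R (m, n) z \<oplus> fs_delta R (m', n) z)"
    using g m n unfolding eq
    by (intro cls_eq[OF delta_in_free free_carrier_add[OF delta_in_free delta_in_free]]) auto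
  then show ?thesis using cls_add[OF delta_in_free delta_in_free] m n by simp
qed

lemma tens_add_right:
  assumes m: "m \<in> carrier M" and n: "n \<in> carrier N" "n' \<in> carrier N"
  shows "tens m (n \<oplus>\<^bsub>N\<^esub> n') = tens m n \<oplus>\<^bsub>TMN\<^esub> tens m n'"
proof -
  let ?g = "\<lambda>z. fs_delta R (m, n \<oplus>\<^bsub>N\<^esub> n') z \<ominus> fs_delta R (m, n) z \<ominus> fs_delta R (m, n') z"
  have "?g \<in> tens_gens R M N" unfolding tens_gens_def using m n by blast
  then have g: "?g \<in> rel" using tens_gens_in_rel by auto
  have eq: "?g = (\<lambda>z. fs_delta R (m, n \<oplus>\<^bsub>N\<^esub> n') z \<ominus> (fs_delta R (m, n) z \<oplus> fs_delta R (m, n') z))"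
  proof
    fix z
    have "fs_delta R (m, n \<oplus>\<^bsub>N\<^esub> n') z \<in> carrier R" "fs_delta R (m, n) z \<in> carrier R"
        "fs_delta R (m, n') z \<in> carrier R"
      by (rule fs_delta_closed)+
    then show "?g z = fs_delta R (m, n \<oplus>\<^bsub>N\<^esub> n') z \<ominus> (fs_delta R (m, n) z \<oplus> fs_delta R (m, n') z)"
      by algebra
  qed
  have "tens m (n \<oplus>\<^bsub>N\<^esub> n') = cls (\<lambda>z. fs_delta R (m, n) z \<oplus> fs_delta R (m, n') z)"
    using g m n unfolding eq
    by (intro cls_eq[OF delta_in_free free_carrier_add[OF delta_in_free delta_in_free]]) auto
  then show ?thesis using cls_add[OF delta_in_free delta_in_free] m n by simp
qed

lemma tens_smult_left:
  assumes r: "r \<in> carrier R" and m: "m \<in> carrier M" and n: "n \<in> carrier N"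
  shows "tens (r \<odot>\<^bsub>M\<^esub> m) n = r \<odot>\<^bsub>TMN\<^esub> tens m n"
proof -
  let ?g = "\<lambda>z. fs_delta R (r \<odot>\<^bsub>M\<^esub> m, n) z \<ominus> r \<otimes> fs_delta R (m, n) z"
  have "?g \<in> tens_gens R M N" unfolding tens_gens_def using r m n by blast
  then have g: "?g \<in> rel" using tens_gens_in_rel by auto
  have "tens (r \<odot>\<^bsub>M\<^esub> m) n = cls (\<lambda>z. r \<otimes> fs_delta R (m, n) z)"
    using g r m n by (intro cls_eq[OF delta_in_free free_carrier_smult[OF r delta_in_free]]) auto
  then show ?thesis using cls_smult[OF delta_in_free r] m n by simp
qed

lemma tens_smult_right:
  assumes r: "r \<in> carrier R" and m: "m \<in> carrier M" and n: "n \<in> carrier N"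
  shows "tens m (r \<odot>\<^bsub>N\<^esub> n) = r \<odot>\<^bsub>TMN\<^esub> tens m n"
proof -
  let ?g = "\<lambda>z. fs_delta R (m, r \<odot>\<^bsub>N\<^esub> n) z \<ominus> r \<otimes> fs_delta R (m, n) z"
  have "?g \<in> tens_gens R M N" unfolding tens_gens_def using r m n by blast
  then have g: "?g \<in> rel" using tens_gens_in_rel by auto
  have "tens m (r \<odot>\<^bsub>N\<^esub> n) = cls (\<lambda>z. r \<otimes> fs_delta R (m, n) z)"
    using g r m n by (intro cls_eq[OF delta_in_free free_carrier_smult[OF r delta_in_free]]) auto
  then show ?thesis using cls_smult[OF delta_in_free r] m n by simp
qed

lemma tens_smult_smult:
  assumes r: "r \<in> carrier R" and s: "s \<in> carrier R" and m: "m \<in> carrier M" and n: "n \<in> carrier N"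
  shows "tens (r \<odot>\<^bsub>M\<^esub> m) (s \<odot>\<^bsub>N\<^esub> n) = (r \<otimes> s) \<odot>\<^bsub>TMN\<^esub> tens m n"
proof -
  have "tens (r \<odot>\<^bsub>M\<^esub> m) (s \<odot>\<^bsub>N\<^esub> n) = r \<odot>\<^bsub>TMN\<^esub> tens m (s \<odot>\<^bsub>N\<^esub> n)"
    using assms by (intro tens_smult_left) auto
  also have "tens m (s \<odot>\<^bsub>N\<^esub> n) = s \<odot>\<^bsub>TMN\<^esub> tens m n"
    using assms by (intro tens_smult_right) auto
  also have "r \<odot>\<^bsub>TMN\<^esub> (s \<odot>\<^bsub>TMN\<^esub> tens m n) = (r \<otimes> s) \<odot>\<^bsub>TMN\<^esub> tens m n"
    using assms by (intro module.smult_assoc1[OF tensor_module, symmetric] tens_closed)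
  finally show ?thesis .
qed

lemma tens_linear_left: "n \<in> carrier N \<Longrightarrow> lin_map R M TMN (\<lambda>m. tens m n)"
  by (rule lin_mapI) (auto simp: tens_closed tens_add_left tens_smult_left)

lemma tens_linear_right: "m \<in> carrier M \<Longrightarrow> lin_map R N TMN (\<lambda>n. tens m n)"
  by (rule lin_mapI) (auto simp: tens_closed tens_add_right tens_smult_right)

lemma tens_finsum_finsum:
  assumes I: "finite I" and J: "finite J" and x: "\<And>i. i \<in> I \<Longrightarrow> x i \<in> carrier M"
    and y: "\<And>j. j \<in> J \<Longrightarrow> y j \<in> carrier N"
  shows "tens (finsum M x I) (finsum N y J) = finsum TMN (\<lambda>p. tens (x (fst p)) (y (snd p))) (I \<times> J)"
proof -
  interpret T: module R TMN by (rule tensor_module)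
  have sy: "finsum N y J \<in> carrier N" using y by (intro N.finsum_closed) auto
  have "tens (finsum M x I) (finsum N y J) = finsum TMN (\<lambda>i. tens (x i) (finsum N y J)) I"
    using I x sy by (intro lin_map_finsum[OF M.is_module tensor_module tens_linear_left]) auto
  also have "\<dots> = finsum TMN (\<lambda>i. finsum TMN (\<lambda>j. tens (x i) (y j)) J) I"
    using I J x y sy
    by (intro T.finsum_cong_simple lin_map_finsum[OF N.is_module tensor_module tens_linear_right])
      (auto intro!: tens_closed T.finsum_closed)
  also have "\<dots> = finsum TMN (\<lambda>p. tens (x (fst p)) (y (snd p))) (I \<times> J)"
    using I J x y by (intro T.finsum_product) (auto intro!: tens_closed)
  finally show ?thesis .
qed

lemma cls_expand:
  assumes f: "f \<in> free_carrier R (carrier M \<times> carrier N)"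
  shows "cls f = free_lift R TMN (\<lambda>z. tens (fst z) (snd z)) f"
  using module.lin_map_eq_free_lift[OF tensor_module cls_lin f] by simp

lemma tens_induct [consumes 1, case_names zero tens add]:
  assumes U: "U \<in> carrier TMN"
    and zero: "P \<zero>\<^bsub>TMN\<^esub>"
    and tmP: "\<And>m n. m \<in> carrier M \<Longrightarrow> n \<in> carrier N \<Longrightarrow> P (tens m n)"
    and add: "\<And>U V. U \<in> carrier TMN \<Longrightarrow> V \<in> carrier TMN \<Longrightarrow> P U \<Longrightarrow> P V \<Longrightarrow> P (U \<oplus>\<^bsub>TMN\<^esub> V)"
  shows "P U"
proof -
  interpret T: module R TMN by (rule tensor_module)
  obtain f where f: "f \<in> free_carrier R (carrier M \<times> carrier N)" and Uf: "U = cls f"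
    using tensor_mod_elem[OF U] by blast
  let ?F = "\<lambda>z. f z \<odot>\<^bsub>TMN\<^esub> tens (fst z) (snd z)"
  have Fc: "?F z \<in> carrier TMN" if "z \<in> carrier M \<times> carrier N" for z
    using that f by (auto intro!: T.smult_closed tens_closed free_carrier_val[OF f])
  have FP: "P (?F z)" if "z \<in> carrier M \<times> carrier N" for z
  proof -
    have "?F z = tens (f z \<odot>\<^bsub>M\<^esub> fst z) (snd z)" using that
      by (auto simp: tens_smult_left free_carrier_val[OF f])
    then show ?thesis using that tmP free_carrier_val[OF f] by auto
  qed
  have main: "A \<subseteq> carrier M \<times> carrier N \<Longrightarrow>
      P (finsum TMN ?F A) \<and> finsum TMN ?F A \<in> carrier TMN" if "finite A" for A
    using that
  proof (induction A rule: finite_induct)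
    case empty
    then show ?case using zero by simp
  next
    case (insert a A)
    then have "finsum TMN ?F (insert a A) = ?F a \<oplus>\<^bsub>TMN\<^esub> finsum TMN ?F A"
      using Fc by (intro T.finsum_insert) auto
    then show ?case using insert Fc FP add by auto
  qed
  have "U = finsum TMN ?F {z. f z \<noteq> \<zero>}"
    unfolding Uf cls_expand[OF f] free_lift_def by simp
  then show ?thesis using main[OF free_carrier_finite[OF f] free_carrier_support[OF f]] by simp
qed

lemma free_lift_tens_gens:
  assumes L: "module R L" and b: "bilinear R M N L \<beta>" and g: "g \<in> tens_gens R M N"
  shows "free_lift R L (\<lambda>z. \<beta> (fst z) (snd z)) g = \<zero>\<^bsub>L\<^esub>"
proof -
  interpret L: module R L by fact
  let ?b = "\<lambda>z. \<beta> (fst z) (snd z)"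
  have bc: "?b \<in> carrier M \<times> carrier N \<rightarrow> carrier L" using bilinearD(1)[OF b] by auto
  note delta = free_carrier_delta[where S = "carrier M \<times> carrier N"]
  have three: "free_lift R L ?b (\<lambda>z. fs_delta R u z \<ominus> fs_delta R v z \<ominus> fs_delta R w z)
      = ?b u \<ominus>\<^bsub>L\<^esub> ?b v \<ominus>\<^bsub>L\<^esub> ?b w"
    if "u \<in> carrier M \<times> carrier N" "v \<in> carrier M \<times> carrier N" "w \<in> carrier M \<times> carrier N" for u v w
    using that by (simp add: L.free_lift_minus[OF _ _ bc] free_carrier_minus delta
          L.free_lift_delta[OF _ bc])
  have two: "free_lift R L ?b (\<lambda>z. fs_delta R u z \<ominus> r \<otimes> fs_delta R w z) = ?b u \<ominus>\<^bsub>L\<^esub> r \<odot>\<^bsub>L\<^esub> ?b w"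
    if "u \<in> carrier M \<times> carrier N" "w \<in> carrier M \<times> carrier N" "r \<in> carrier R" for u w r
    using that by (simp add: L.free_lift_minus[OF _ _ bc] free_carrier_smult delta
        L.free_lift_smult[OF _ _ bc] L.free_lift_delta[OF _ bc])
  from g show ?thesis unfolding tens_gens_def
  proof (elim UnE CollectE exE conjE)
    fix m m' n assume "g = (\<lambda>z. fs_delta R (m \<oplus>\<^bsub>M\<^esub> m', n) z \<ominus> fs_delta R (m, n) z \<ominus> fs_delta R (m', n) z)"
      "m \<in> carrier M" "m' \<in> carrier M" "n \<in> carrier N"
    then show ?thesis
      using three[of "(m \<oplus>\<^bsub>M\<^esub> m', n)" "(m, n)" "(m', n)"] bilinearD(1,2)[OF b]
      by (simp add: L.add_minus_minus_cancel)
  next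
    fix m n n' assume "g = (\<lambda>z. fs_delta R (m, n \<oplus>\<^bsub>N\<^esub> n') z \<ominus> fs_delta R (m, n) z \<ominus> fs_delta R (m, n') z)"
      "m \<in> carrier M" "n \<in> carrier N" "n' \<in> carrier N"
    then show ?thesis
      using three[of "(m, n \<oplus>\<^bsub>N\<^esub> n')" "(m, n)" "(m, n')"] bilinearD(1,3)[OF b]
      by (simp add: L.add_minus_minus_cancel)
  next
    fix r m n assume "g = (\<lambda>z. fs_delta R (r \<odot>\<^bsub>M\<^esub> m, n) z \<ominus> r \<otimes> fs_delta R (m, n) z)"
      "r \<in> carrier R" "m \<in> carrier M" "n \<in> carrier N"
    then show ?thesis
      using two[of "(r \<odot>\<^bsub>M\<^esub> m, n)" "(m, n)" r] bilinearD(1,4)[OF b] by (simp add: L.minus_self)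
  next
    fix r m n assume "g = (\<lambda>z. fs_delta R (m, r \<odot>\<^bsub>N\<^esub> n) z \<ominus> r \<otimes> fs_delta R (m, n) z)"
      "r \<in> carrier R" "m \<in> carrier M" "n \<in> carrier N"
    then show ?thesis
      using two[of "(m, r \<odot>\<^bsub>N\<^esub> n)" "(m, n)" r] bilinearD(1,5)[OF b] by (simp add: L.minus_self)
  qed
qed

lemma tensor_lift_cls:
  assumes L: "module R L" and b: "bilinear R M N L \<beta>"
    and f: "f \<in> free_carrier R (carrier M \<times> carrier N)"
  shows "tensor_lift R L \<beta> (cls f) = free_lift R L (\<lambda>z. \<beta> (fst z) (snd z)) f"
proof -
  interpret L: module R L by fact
  let ?b = "\<lambda>z. \<beta> (fst z) (snd z)" and ?f' = "tens_rep (cls f)"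
  have bc: "?b \<in> carrier M \<times> carrier N \<rightarrow> carrier L" using bilinearD(1)[OF b] by auto
  have f': "?f' \<in> free_carrier R (carrier M \<times> carrier N)" using tens_rep_cls(1)[OF f] .
  have "free_lift R L ?b (\<lambda>z. ?f' z \<ominus> f z) = \<zero>\<^bsub>L\<^esub>"
    by (rule lin_map_vanishes_on_tens_rel[OF L L.free_lift_lin[OF bc] free_lift_tens_gens[OF L b]
          tens_rep_cls(2)[OF f]])
  then have "free_lift R L ?b ?f' \<ominus>\<^bsub>L\<^esub> free_lift R L ?b f = \<zero>\<^bsub>L\<^esub>"
    by (simp add: L.free_lift_minus[OF f' f bc])
  then show ?thesis unfolding tensor_lift_def
    by (rule L.minus_eq_zero_imp_eq[OF L.free_lift_closed[OF f' bc] L.free_lift_closed[OF f bc]])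
qed

lemma tensor_lift_tens:
  assumes L: "module R L" and b: "bilinear R M N L \<beta>" and m: "m \<in> carrier M" and n: "n \<in> carrier N"
  shows "tensor_lift R L \<beta> (tens m n) = \<beta> m n"
proof -
  interpret L: module R L by fact
  have bc: "(\<lambda>z. \<beta> (fst z) (snd z)) \<in> carrier M \<times> carrier N \<rightarrow> carrier L" using bilinearD(1)[OF b]
    by auto
  show ?thesis using tensor_lift_cls[OF L b delta_in_free[OF m n]]
      L.free_lift_delta[OF _ bc, of "(m, n)"] m n
    by simp
qed

lemma tensor_lift_lin:
  assumes L: "module R L" and b: "bilinear R M N L \<beta>"
  shows "lin_map R TMN L (tensor_lift R L \<beta>)"
proof -
  interpret L: module R L by fact
  have bc: "(\<lambda>z. \<beta> (fst z) (snd z)) \<in> carrier M \<times> carrier N \<rightarrow> carrier L" using bilinearD(1)[OF b]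
    by auto
  show ?thesis
  proof (rule lin_mapI)
    fix U assume "U \<in> carrier TMN"
    then obtain f where f: "f \<in> free_carrier R (carrier M \<times> carrier N)" "U = cls f"
      using tensor_mod_elem by blast
    then show "tensor_lift R L \<beta> U \<in> carrier L"
      using tensor_lift_cls[OF L b] L.free_lift_closed[OF _ bc] by simp
  next
    fix U V assume "U \<in> carrier TMN" "V \<in> carrier TMN"
    then obtain f g where f: "f \<in> free_carrier R (carrier M \<times> carrier N)" "U = cls f"
      and g: "g \<in> free_carrier R (carrier M \<times> carrier N)" "V = cls g" using tensor_mod_elem by meson
    then show "tensor_lift R L \<beta> (U \<oplus>\<^bsub>TMN\<^esub> V) = tensor_lift R L \<beta> U \<oplus>\<^bsub>L\<^esub> tensor_lift R L \<beta> V"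
      using tensor_lift_cls[OF L b] L.free_lift_add[OF _ _ bc]
      by (simp add: cls_add free_carrier_add)
  next
    fix r U assume r: "r \<in> carrier R" and "U \<in> carrier TMN"
    then obtain f where f: "f \<in> free_carrier R (carrier M \<times> carrier N)" "U = cls f"
      using tensor_mod_elem by blast
    then show "tensor_lift R L \<beta> (r \<odot>\<^bsub>TMN\<^esub> U) = r \<odot>\<^bsub>L\<^esub> tensor_lift R L \<beta> U"
      using tensor_lift_cls[OF L b] L.free_lift_smult[OF _ r bc] r
      by (simp add: cls_smult free_carrier_smult)
  qed
qed

lemma tensor_lift_closed:
  assumes L: "module R L" and b: "bilinear R M N L \<beta>" and U: "U \<in> carrier TMN"
  shows "tensor_lift R L \<beta> U \<in> carrier L"
  using lin_mapD(1)[OF tensor_lift_lin[OF L b] U] .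

lemma tensor_lin_map_eqI:
  assumes L: "module R L" and F: "lin_map R TMN L F" and G: "lin_map R TMN L G"
    and eq: "\<And>m n. m \<in> carrier M \<Longrightarrow> n \<in> carrier N \<Longrightarrow> F (tens m n) = G (tens m n)"
    and U: "U \<in> carrier TMN"
  shows "F U = G U"
  using U
proof (induction rule: tens_induct)
  case zero
  then show ?case using lin_map_zero[OF tensor_module L F] lin_map_zero[OF tensor_module L G]
    by simp
next
  case (tens m n)
  then show ?case by (rule eq)
next
  case (add U V)
  then show ?case using lin_mapD(2)[OF F] lin_mapD(2)[OF G] by simp
qed

lemma tensor_lift_cong:
  assumes L: "module R L" and U: "U \<in> carrier TMN"
    and eq: "\<And>m n. m \<in> carrier M \<Longrightarrow> n \<in> carrier N \<Longrightarrow> \<beta> m n = \<gamma> m n"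
    and c: "\<And>m n. m \<in> carrier M \<Longrightarrow> n \<in> carrier N \<Longrightarrow> \<gamma> m n \<in> carrier L"
  shows "tensor_lift R L \<beta> U = tensor_lift R L \<gamma> U"
  unfolding tensor_lift_def
  by (rule module.free_lift_cong[OF L tens_rep_free[OF U]]) (auto intro: eq c)

lemma tensor_lift_fun_add:
  assumes L: "module R L" and U: "U \<in> carrier TMN"
    and b: "\<And>m n. m \<in> carrier M \<Longrightarrow> n \<in> carrier N \<Longrightarrow> \<beta> m n \<in> carrier L"
    and c: "\<And>m n. m \<in> carrier M \<Longrightarrow> n \<in> carrier N \<Longrightarrow> \<gamma> m n \<in> carrier L"
  shows "tensor_lift R L (\<lambda>m n. \<beta> m n \<oplus>\<^bsub>L\<^esub> \<gamma> m n) U = tensor_lift R L \<beta> U \<oplus>\<^bsub>L\<^esub> tensor_lift R L \<gamma> U"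
  unfolding tensor_lift_def using b c
  by (intro module.free_lift_fun_add[OF L tens_rep_free[OF U]]) auto

lemma tensor_lift_fun_smult:
  assumes L: "module R L" and U: "U \<in> carrier TMN" and r: "r \<in> carrier R"
    and b: "\<And>m n. m \<in> carrier M \<Longrightarrow> n \<in> carrier N \<Longrightarrow> \<beta> m n \<in> carrier L"
  shows "tensor_lift R L (\<lambda>m n. r \<odot>\<^bsub>L\<^esub> \<beta> m n) U = r \<odot>\<^bsub>L\<^esub> tensor_lift R L \<beta> U"
  unfolding tensor_lift_def using b r
  by (intro module.free_lift_fun_smult[OF L tens_rep_free[OF U]]) auto

lemma tensor_lift_bilinear_param:
  assumes L: "module R L" and W: "W \<in> carrier TMN"
    and \<gamma>: "\<And>a b. a \<in> carrier M' \<Longrightarrow> b \<in> carrier N' \<Longrightarrow> bilinear R M N L (\<gamma> a b)"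
    and \<gamma>': "\<And>m n. m \<in> carrier M \<Longrightarrow> n \<in> carrier N \<Longrightarrow> bilinear R M' N' L (\<lambda>a b. \<gamma> a b m n)"
  shows "bilinear R M' N' L (\<lambda>a b. tensor_lift R L (\<gamma> a b) W)"
proof -
  interpret L: module R L by fact
  note cl = bilinearD(1)[OF \<gamma>]
  show ?thesis
  proof (rule bilinearI)
    fix a b assume "a \<in> carrier M'" "b \<in> carrier N'"
    then show "tensor_lift R L (\<gamma> a b) W \<in> carrier L" by (intro tensor_lift_closed[OF L \<gamma> W])
  next
    fix a a' b assume ab: "a \<in> carrier M'" "a' \<in> carrier M'" "b \<in> carrier N'"
    then have "tensor_lift R L (\<gamma> (a \<oplus>\<^bsub>M'\<^esub> a') b) W = tensor_lift R L (\<lambda>m n. \<gamma> a b m n \<oplus>\<^bsub>L\<^esub> \<gamma> a' b m n) W"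
      by (intro tensor_lift_cong[OF L W]) (auto simp: bilinearD(2)[OF \<gamma>'] cl)
    then show "tensor_lift R L (\<gamma> (a \<oplus>\<^bsub>M'\<^esub> a') b) W = tensor_lift R L (\<gamma> a b) W \<oplus>\<^bsub>L\<^esub> tensor_lift R L (\<gamma> a' b) W"
      using ab by (simp add: tensor_lift_fun_add[OF L W] cl)
  next
    fix a b b' assume ab: "a \<in> carrier M'" "b \<in> carrier N'" "b' \<in> carrier N'"
    then have "tensor_lift R L (\<gamma> a (b \<oplus>\<^bsub>N'\<^esub> b')) W = tensor_lift R L (\<lambda>m n. \<gamma> a b m n \<oplus>\<^bsub>L\<^esub> \<gamma> a b' m n) W"
      by (intro tensor_lift_cong[OF L W]) (auto simp: bilinearD(3)[OF \<gamma>'] cl)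
    then show "tensor_lift R L (\<gamma> a (b \<oplus>\<^bsub>N'\<^esub> b')) W = tensor_lift R L (\<gamma> a b) W \<oplus>\<^bsub>L\<^esub> tensor_lift R L (\<gamma> a b') W"
      using ab by (simp add: tensor_lift_fun_add[OF L W] cl)
  next
    fix r a b assume ab: "r \<in> carrier R" "a \<in> carrier M'" "b \<in> carrier N'"
    then have "tensor_lift R L (\<gamma> (r \<odot>\<^bsub>M'\<^esub> a) b) W = tensor_lift R L (\<lambda>m n. r \<odot>\<^bsub>L\<^esub> \<gamma> a b m n) W"
      by (intro tensor_lift_cong[OF L W]) (auto simp: bilinearD(4)[OF \<gamma>'] cl)
    then show "tensor_lift R L (\<gamma> (r \<odot>\<^bsub>M'\<^esub> a) b) W = r \<odot>\<^bsub>L\<^esub> tensor_lift R L (\<gamma> a b) W"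
      using ab by (simp add: tensor_lift_fun_smult[OF L W] cl)
  next
    fix r a b assume ab: "r \<in> carrier R" "a \<in> carrier M'" "b \<in> carrier N'"
    then have "tensor_lift R L (\<gamma> a (r \<odot>\<^bsub>N'\<^esub> b)) W = tensor_lift R L (\<lambda>m n. r \<odot>\<^bsub>L\<^esub> \<gamma> a b m n) W"
      by (intro tensor_lift_cong[OF L W]) (auto simp: bilinearD(5)[OF \<gamma>'] cl)
    then show "tensor_lift R L (\<gamma> a (r \<odot>\<^bsub>N'\<^esub> b)) W = r \<odot>\<^bsub>L\<^esub> tensor_lift R L (\<gamma> a b) W"
      using ab by (simp add: tensor_lift_fun_smult[OF L W] cl)
  qed
qed

lemma tensor_lift_lin_param:
  assumes L: "module R L" and U: "U \<in> carrier TMN"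
    and \<gamma>: "\<And>W. W \<in> carrier K \<Longrightarrow> bilinear R M N L (\<gamma> W)"
    and \<gamma>': "\<And>m n. m \<in> carrier M \<Longrightarrow> n \<in> carrier N \<Longrightarrow> lin_map R K L (\<lambda>W. \<gamma> W m n)"
  shows "lin_map R K L (\<lambda>W. tensor_lift R L (\<gamma> W) U)"
proof -
  interpret L: module R L by fact
  note cl = bilinearD(1)[OF \<gamma>]
  show ?thesis
  proof (rule lin_mapI)
    fix W assume "W \<in> carrier K"
    then show "tensor_lift R L (\<gamma> W) U \<in> carrier L" by (intro tensor_lift_closed[OF L \<gamma> U])
  next
    fix W W' assume W: "W \<in> carrier K" "W' \<in> carrier K"
    then have "tensor_lift R L (\<gamma> (W \<oplus>\<^bsub>K\<^esub> W')) U = tensor_lift R L (\<lambda>m n. \<gamma> W m n \<oplus>\<^bsub>L\<^esub> \<gamma> W' m n) U"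
      by (intro tensor_lift_cong[OF L U]) (auto simp: lin_mapD(2)[OF \<gamma>'] cl)
    then show "tensor_lift R L (\<gamma> (W \<oplus>\<^bsub>K\<^esub> W')) U = tensor_lift R L (\<gamma> W) U \<oplus>\<^bsub>L\<^esub> tensor_lift R L (\<gamma> W') U"
      using W by (simp add: tensor_lift_fun_add[OF L U] cl)
  next
    fix r W assume W: "r \<in> carrier R" "W \<in> carrier K"
    then have "tensor_lift R L (\<gamma> (r \<odot>\<^bsub>K\<^esub> W)) U = tensor_lift R L (\<lambda>m n. r \<odot>\<^bsub>L\<^esub> \<gamma> W m n) U"
      by (intro tensor_lift_cong[OF L U]) (auto simp: lin_mapD(3)[OF \<gamma>'] cl)
    then show "tensor_lift R L (\<gamma> (r \<odot>\<^bsub>K\<^esub> W)) U = r \<odot>\<^bsub>L\<^esub> tensor_lift R L (\<gamma> W) U"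
      using W by (simp add: tensor_lift_fun_smult[OF L U] cl)
  qed
qed

end


section \<open>The tensor product algebra\<close>

lemma k_algebra_smult_mult:
  "k_algebra R A \<Longrightarrow> r \<in> carrier R \<Longrightarrow> x \<in> carrier A \<Longrightarrow> y \<in> carrier A \<Longrightarrow>
    (r \<odot>\<^bsub>A\<^esub> x) \<otimes>\<^bsub>A\<^esub> y = r \<odot>\<^bsub>A\<^esub> (x \<otimes>\<^bsub>A\<^esub> y)"
  by (simp add: k_algebra_def)

lemma k_algebra_mult_smult:
  "k_algebra R A \<Longrightarrow> r \<in> carrier R \<Longrightarrow> x \<in> carrier A \<Longrightarrow> y \<in> carrier A \<Longrightarrow>
    x \<otimes>\<^bsub>A\<^esub> (r \<odot>\<^bsub>A\<^esub> y) = r \<odot>\<^bsub>A\<^esub> (x \<otimes>\<^bsub>A\<^esub> y)"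
  by (simp add: k_algebra_def)

locale tensor_algebras = tensor_modules R A B for R (structure) and A and B +
  assumes algA: "k_algebra R A" and algB: "k_algebra R B"

sublocale tensor_algebras \<subseteq> RA: ring A using algA unfolding k_algebra_def by auto

sublocale tensor_algebras \<subseteq> RB: ring B using algB unfolding k_algebra_def by auto

context tensor_algebras begin

abbreviation "TA \<equiv> tensor_alg R A B"

lemma tensor_add_closed: "U \<in> carrier TMN \<Longrightarrow> V \<in> carrier TMN \<Longrightarrow> U \<oplus>\<^bsub>TMN\<^esub> V \<in> carrier TMN"
proof -
  interpret T: module R TMN by (rule tensor_module)
  show "U \<in> carrier TMN \<Longrightarrow> V \<in> carrier TMN \<Longrightarrow> U \<oplus>\<^bsub>TMN\<^esub> V \<in> carrier TMN" by simp
qed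

(* tensor_alg multiplies representatives via fs_mult. The product tmult below is built by lifting
   twice, so it is well defined and bilinear by construction; tensor_alg_mult_eq shows that the
   two agree. *)
definition mult_pure where "mult_pure a b = (\<lambda>a' b'. tens (a \<otimes>\<^bsub>A\<^esub> a') (b \<otimes>\<^bsub>B\<^esub> b'))"
definition mult_pure_left where "mult_pure_left V = (\<lambda>a b. tensor_lift R TMN (mult_pure a b) V)"
definition tmult where "tmult U V = tensor_lift R TMN (mult_pure_left V) U"

lemma mult_pure_closed: "a \<in> carrier A \<Longrightarrow> b \<in> carrier B \<Longrightarrow> a' \<in> carrier A \<Longrightarrow> b' \<in> carrier B \<Longrightarrow>
    mult_pure a b a' b' \<in> carrier TMN"
  unfolding mult_pure_def by (intro tens_closed RA.m_closed RB.m_closed)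

lemma mult_pure_bilinear: "a \<in> carrier A \<Longrightarrow> b \<in> carrier B \<Longrightarrow> bilinear R A B TMN (mult_pure a b)"
  by (rule bilinearI)
     (auto simp: mult_pure_closed, auto simp: mult_pure_def RA.r_distr RB.r_distr tens_add_left
         tens_add_right k_algebra_mult_smult[OF algA] k_algebra_mult_smult[OF algB]
             tens_smult_left tens_smult_right)

lemma mult_pure_bilinear_param:
  "a' \<in> carrier A \<Longrightarrow> b' \<in> carrier B \<Longrightarrow> bilinear R A B TMN (\<lambda>a b. mult_pure a b a' b')"
  by (rule bilinearI)
     (auto simp: mult_pure_closed, auto simp: mult_pure_def RA.l_distr RB.l_distr tens_add_left
         tens_add_right
        k_algebra_smult_mult[OF algA] k_algebra_smult_mult[OF algB] tens_smult_left
            tens_smult_right)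

lemma mult_pure_left_bilinear: "V \<in> carrier TMN \<Longrightarrow> bilinear R A B TMN (mult_pure_left V)"
  unfolding mult_pure_left_def
  by (intro tensor_lift_bilinear_param tensor_module mult_pure_bilinear mult_pure_bilinear_param)

lemma tmult_lin_left: "V \<in> carrier TMN \<Longrightarrow> lin_map R TMN TMN (\<lambda>U. tmult U V)"
  unfolding tmult_def by (intro tensor_lift_lin tensor_module mult_pure_left_bilinear)

lemma tmult_closed: "U \<in> carrier TMN \<Longrightarrow> V \<in> carrier TMN \<Longrightarrow> tmult U V \<in> carrier TMN"
  using lin_mapD(1)[OF tmult_lin_left] by blast

lemma tmult_tens_left: "a \<in> carrier A \<Longrightarrow> b \<in> carrier B \<Longrightarrow> V \<in> carrier TMN \<Longrightarrow>
    tmult (tens a b) V = tensor_lift R TMN (mult_pure a b) V"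
  unfolding tmult_def using tensor_lift_tens[OF tensor_module mult_pure_left_bilinear]
  by (simp add: mult_pure_left_def)

lemma tmult_tens: "a \<in> carrier A \<Longrightarrow> b \<in> carrier B \<Longrightarrow> a' \<in> carrier A \<Longrightarrow> b' \<in> carrier B \<Longrightarrow>
   tmult (tens a b) (tens a' b') = tens (a \<otimes>\<^bsub>A\<^esub> a') (b \<otimes>\<^bsub>B\<^esub> b')"
  using tmult_tens_left tens_closed tensor_lift_tens[OF tensor_module mult_pure_bilinear]
  by (simp add: mult_pure_def)

lemma tmult_lin_right: "U \<in> carrier TMN \<Longrightarrow> lin_map R TMN TMN (\<lambda>V. tmult U V)"
  unfolding tmult_def mult_pure_left_def
  by (intro tensor_lift_lin_param tensor_module mult_pure_left_bilinear[unfolded mult_pure_left_def]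
      tensor_lift_lin mult_pure_bilinear)

definition pair_mult where "pair_mult u v = (fst u \<otimes>\<^bsub>A\<^esub> fst v, snd u \<otimes>\<^bsub>B\<^esub> snd v)"

lemma pair_mult_closed: "u \<in> carrier A \<times> carrier B \<Longrightarrow> v \<in> carrier A \<times> carrier B \<Longrightarrow>
    pair_mult u v \<in> carrier A \<times> carrier B"
  by (auto simp: pair_mult_def)

lemma fs_mult_apply:
  assumes f: "f \<in> free_carrier R (carrier A \<times> carrier B)" and g:
      "g \<in> free_carrier R (carrier A \<times> carrier B)"
  shows "fs_mult R A B f g z
    = (\<Oplus>p\<in>{u. f u \<noteq> \<zero>} \<times> {v. g v \<noteq> \<zero>}. (f (fst p) \<otimes> g (snd p)) \<otimes> fs_delta R (pair_mult (fst p)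
        (snd p)) z)"
proof -
  let ?Sf = "{u. f u \<noteq> \<zero>}" and ?Sg = "{v. g v \<noteq> \<zero>}"
  let ?Z = "{(u, v). f u \<noteq> \<zero> \<and> g v \<noteq> \<zero> \<and> z = (fst u \<otimes>\<^bsub>A\<^esub> fst v, snd u \<otimes>\<^bsub>B\<^esub> snd v)}"
  note vals = free_carrier_val[OF f] free_carrier_val[OF g]
  have "(\<Oplus>p\<in>?Sf \<times> ?Sg. (f (fst p) \<otimes> g (snd p)) \<otimes> fs_delta R (pair_mult (fst p) (snd p)) z)
      = finsum R (\<lambda>(u, v). f u \<otimes> g v) ?Z"
  proof (rule add.finprod_mono_neutral_cong_right)
    show "finite (?Sf \<times> ?Sg)" using free_carrier_finite[OF f] free_carrier_finite[OF g] by auto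
    show "?Z \<subseteq> ?Sf \<times> ?Sg" by auto
    show "(f (fst p) \<otimes> g (snd p)) \<otimes> fs_delta R (pair_mult (fst p) (snd p)) z = \<zero>" if
        "p \<in> ?Sf \<times> ?Sg - ?Z" for p
      using that vals by (auto simp: fs_delta_def pair_mult_def)
    show "(f (fst p) \<otimes> g (snd p)) \<otimes> fs_delta R (pair_mult (fst p) (snd p)) z = (case p of (u, v) \<Rightarrow> f u \<otimes> g v)"
      if "p \<in> ?Z" for p
      using that vals by (auto simp: fs_delta_def pair_mult_def)
    show "(\<lambda>p. (f (fst p) \<otimes> g (snd p)) \<otimes> fs_delta R (pair_mult (fst p) (snd p)) z) \<in> ?Sf \<times> ?Sg \<rightarrow> carrier R"
      using vals fs_delta_closed by (auto intro!: m_closed)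
  qed
  then show ?thesis by (simp add: fs_mult_def)
qed

lemma fs_mult_expand:
  assumes f: "f \<in> free_carrier R (carrier A \<times> carrier B)" and g:
      "g \<in> free_carrier R (carrier A \<times> carrier B)"
  shows "fs_mult R A B f g = finsum FMN (\<lambda>u. finsum FMN (\<lambda>v. (f u \<otimes> g v) \<odot>\<^bsub>FMN\<^esub> fs_delta R (pair_mult u v)) {v. g v \<noteq> \<zero>}) {u. f u \<noteq> \<zero>}"
proof
  fix z
  interpret FM: module R FMN by (rule free_module_MN)
  let ?Sf = "{u. f u \<noteq> \<zero>}" and ?Sg = "{v. g v \<noteq> \<zero>}"
  have Sf: "finite ?Sf" "?Sf \<subseteq> carrier A \<times> carrier B"
    using free_carrier_finite[OF f] free_carrier_support[OF f] by auto
  have Sg: "finite ?Sg" "?Sg \<subseteq> carrier A \<times> carrier B"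
    using free_carrier_finite[OF g] free_carrier_support[OF g] by auto
  let ?G = "\<lambda>u. finsum FMN (\<lambda>v. (f u \<otimes> g v) \<odot>\<^bsub>FMN\<^esub> fs_delta R (pair_mult u v)) ?Sg"
  have term_c: "(f u \<otimes> g v) \<odot>\<^bsub>FMN\<^esub> fs_delta R (pair_mult u v) \<in> free_carrier R (carrier A \<times> carrier B)"
    if "u \<in> ?Sf" "v \<in> ?Sg" for u v
    using that Sf Sg by (auto intro!: free_carrier_smult free_carrier_delta pair_mult_closed
          free_carrier_val[OF f] free_carrier_val[OF g])
  have G_c: "?G u \<in> free_carrier R (carrier A \<times> carrier B)" if "u \<in> ?Sf" for u
    using FM.finsum_closed[of "\<lambda>v. (f u \<otimes> g v) \<odot>\<^bsub>FMN\<^esub> fs_delta R (pair_mult u v)" ?Sg]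
        term_c[OF that]
      by auto
  let ?F = "\<lambda>u v. (f u \<otimes> g v) \<otimes> fs_delta R (pair_mult u v) z"
  have F_c: "?F u v \<in> carrier R" for u v
    using free_carrier_val[OF f, of u] free_carrier_val[OF g, of v]
        fs_delta_closed[of "pair_mult u v" z]
      by (intro m_closed)
  have "finsum FMN ?G ?Sf z = (\<Oplus>u\<in>?Sf. ?G u z)"
    using G_c Sf by (intro free_finsum_apply) auto
  also have "\<dots> = (\<Oplus>u\<in>?Sf. \<Oplus>v\<in>?Sg. ?F u v)"
  proof (rule finsum_cong_simple)
    fix u assume u: "u \<in> ?Sf"
    have "?G u z = (\<Oplus>v\<in>?Sg. ((f u \<otimes> g v) \<odot>\<^bsub>FMN\<^esub> fs_delta R (pair_mult u v)) z)"
      using term_c[OF u] Sg by (intro free_finsum_apply) auto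
    then show "?G u z = (\<Oplus>v\<in>?Sg. ?F u v)" by simp
  qed (use F_c in \<open>auto intro: finsum_closed\<close>)
  also have "\<dots> = (\<Oplus>p\<in>?Sf \<times> ?Sg. ?F (fst p) (snd p))"
    using Sf Sg F_c by (intro finsum_product) auto
  also have "\<dots> = fs_mult R A B f g z" by (rule fs_mult_apply[OF f g, symmetric])
  finally show "fs_mult R A B f g z = finsum FMN ?G ?Sf z" by simp
qed

lemma tensor_alg_simps:
  "carrier TA = carrier TMN"
  "\<zero>\<^bsub>TA\<^esub> = \<zero>\<^bsub>TMN\<^esub>"
  "U \<oplus>\<^bsub>TA\<^esub> V = U \<oplus>\<^bsub>TMN\<^esub> V"
  "r \<odot>\<^bsub>TA\<^esub> U = r \<odot>\<^bsub>TMN\<^esub> U"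
  "U \<otimes>\<^bsub>TA\<^esub> V = cls (fs_mult R A B (tens_rep U) (tens_rep V))"
  "\<one>\<^bsub>TA\<^esub> = tens \<one>\<^bsub>A\<^esub> \<one>\<^bsub>B\<^esub>"
  by (simp_all add: tensor_alg_def tensor_mod_def)

lemma cls_fs_mult_row:
  assumes u: "u \<in> carrier A \<times> carrier B" and r: "r \<in> carrier R"
    and g: "g \<in> free_carrier R (carrier A \<times> carrier B)"
  shows "cls (finsum FMN (\<lambda>v. (r \<otimes> g v) \<odot>\<^bsub>FMN\<^esub> fs_delta R (pair_mult u v)) {v. g v \<noteq> \<zero>})
       = r \<odot>\<^bsub>TMN\<^esub> (\<Oplus>\<^bsub>TMN\<^esub>v\<in>{v. g v \<noteq> \<zero>}. g v \<odot>\<^bsub>TMN\<^esub> tens (fst u \<otimes>\<^bsub>A\<^esub> fst v) (snd u \<otimes>\<^bsub>B\<^esub> snd v))"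
proof -
  interpret T: module R TMN by (rule tensor_module)
  let ?Sg = "{v. g v \<noteq> \<zero>}"
  have Sg: "finite ?Sg" "?Sg \<subseteq> carrier A \<times> carrier B"
    using free_carrier_finite[OF g] free_carrier_support[OF g] by auto
  have term_c: "(r \<otimes> g v) \<odot>\<^bsub>FMN\<^esub> fs_delta R (pair_mult u v) \<in> carrier FMN" if "v \<in> ?Sg" for v
    using that u r Sg by (auto intro!: free_carrier_smult free_carrier_delta pair_mult_closed
          free_carrier_val[OF g])
  have tmc: "tens (fst u \<otimes>\<^bsub>A\<^esub> fst v) (snd u \<otimes>\<^bsub>B\<^esub> snd v) \<in> carrier TMN" if "v \<in> ?Sg" for v
    using that u Sg by (auto intro!: tens_closed RA.m_closed RB.m_closed)
  have "cls (finsum FMN (\<lambda>v. (r \<otimes> g v) \<odot>\<^bsub>FMN\<^esub> fs_delta R (pair_mult u v)) ?Sg)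
      = (\<Oplus>\<^bsub>TMN\<^esub>v\<in>?Sg. cls ((r \<otimes> g v) \<odot>\<^bsub>FMN\<^esub> fs_delta R (pair_mult u v)))"
    using term_c Sg by (intro lin_map_finsum[OF free_module_MN tensor_module cls_lin]) auto
  also have "\<dots> = (\<Oplus>\<^bsub>TMN\<^esub>v\<in>?Sg. r \<odot>\<^bsub>TMN\<^esub> (g v \<odot>\<^bsub>TMN\<^esub> tens (fst u \<otimes>\<^bsub>A\<^esub> fst v) (snd u \<otimes>\<^bsub>B\<^esub> snd v)))"
  proof (rule T.finsum_cong_simple)
    fix v assume v: "v \<in> ?Sg"
    have "cls ((r \<otimes> g v) \<odot>\<^bsub>FMN\<^esub> fs_delta R (pair_mult u v)) = (r \<otimes> g v) \<odot>\<^bsub>TMN\<^esub> cls (fs_delta R (pair_mult u v))"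
      using u v r Sg
      by (intro lin_mapD(3)[OF cls_lin]) (auto intro!: free_carrier_delta pair_mult_closed
            free_carrier_val[OF g])
    also have "\<dots> = r \<odot>\<^bsub>TMN\<^esub> (g v \<odot>\<^bsub>TMN\<^esub> tens (fst u \<otimes>\<^bsub>A\<^esub> fst v) (snd u \<otimes>\<^bsub>B\<^esub> snd v))"
      using tmc[OF v] r by (simp add: pair_mult_def T.smult_assoc1 free_carrier_val[OF g])
    finally show "cls ((r \<otimes> g v) \<odot>\<^bsub>FMN\<^esub> fs_delta R (pair_mult u v))
        = r \<odot>\<^bsub>TMN\<^esub> (g v \<odot>\<^bsub>TMN\<^esub> tens (fst u \<otimes>\<^bsub>A\<^esub> fst v) (snd u \<otimes>\<^bsub>B\<^esub> snd v))" .
  qed (use tmc r in \<open>auto simp: free_carrier_val[OF g]\<close>)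
  also have "\<dots> = r \<odot>\<^bsub>TMN\<^esub> (\<Oplus>\<^bsub>TMN\<^esub>v\<in>?Sg. g v \<odot>\<^bsub>TMN\<^esub> tens (fst u \<otimes>\<^bsub>A\<^esub> fst v) (snd u \<otimes>\<^bsub>B\<^esub> snd v))"
    using tmc r Sg by (intro T.finsum_smult_ldistr[symmetric]) (auto simp: free_carrier_val[OF g])
  finally show ?thesis .
qed

lemma tensor_alg_mult_eq:
  assumes U: "U \<in> carrier TMN" and V: "V \<in> carrier TMN"
  shows "U \<otimes>\<^bsub>TA\<^esub> V = tmult U V"
proof -
  interpret FM: module R FMN by (rule free_module_MN)
  interpret T: module R TMN by (rule tensor_module)
  let ?f = "tens_rep U" and ?g = "tens_rep V"
  have f: "?f \<in> free_carrier R (carrier A \<times> carrier B)" using tens_rep_free[OF U] .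
  have g: "?g \<in> free_carrier R (carrier A \<times> carrier B)" using tens_rep_free[OF V] .
  let ?Sf = "{u. ?f u \<noteq> \<zero>}" and ?Sg = "{v. ?g v \<noteq> \<zero>}"
  have Sf: "finite ?Sf" "?Sf \<subseteq> carrier A \<times> carrier B"
    using free_carrier_finite[OF f] free_carrier_support[OF f] by auto
  have Sg: "finite ?Sg" "?Sg \<subseteq> carrier A \<times> carrier B"
    using free_carrier_finite[OF g] free_carrier_support[OF g] by auto
  let ?G = "\<lambda>u. finsum FMN (\<lambda>v. (?f u \<otimes> ?g v) \<odot>\<^bsub>FMN\<^esub> fs_delta R (pair_mult u v)) ?Sg"
  have G_c: "?G u \<in> carrier FMN" if "u \<in> ?Sf" for u
    using that Sf Sg by (intro FM.finsum_closed)
       (auto intro!: free_carrier_smult free_carrier_delta pair_mult_closed free_carrier_val[OF f]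
           free_carrier_val[OF g])
  have tmc: "tens (fst u \<otimes>\<^bsub>A\<^esub> fst v) (snd u \<otimes>\<^bsub>B\<^esub> snd v) \<in> carrier TMN"
    if "u \<in> ?Sf" "v \<in> ?Sg" for u v
    using that Sf Sg by (auto intro!: tens_closed RA.m_closed RB.m_closed)
  have "U \<otimes>\<^bsub>TA\<^esub> V = cls (finsum FMN ?G ?Sf)"
    by (simp add: tensor_alg_simps fs_mult_expand[OF f g])
  also have "\<dots> = (\<Oplus>\<^bsub>TMN\<^esub>u\<in>?Sf. cls (?G u))"
    using G_c Sf by (intro lin_map_finsum[OF free_module_MN tensor_module cls_lin]) auto
  also have "\<dots> = (\<Oplus>\<^bsub>TMN\<^esub>u\<in>?Sf. ?f u \<odot>\<^bsub>TMN\<^esub> (\<Oplus>\<^bsub>TMN\<^esub>v\<in>?Sg. ?g v \<odot>\<^bsub>TMN\<^esub> tens (fst u \<otimes>\<^bsub>A\<^esub> fst v) (snd u \<otimes>\<^bsub>B\<^esub> snd v)))"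
    using Sf tmc by (intro T.finsum_cong_simple cls_fs_mult_row[OF _ _ g])
       (auto simp: free_carrier_val[OF f] free_carrier_val[OF g] intro!: T.finsum_closed)
  also have "\<dots> = tmult U V"
    unfolding tmult_def tensor_lift_def free_lift_def mult_pure_left_def mult_pure_def by simp
  finally show ?thesis .
qed

lemma tensor_alg_ops:
  "carrier TA = carrier TMN" "ring.add TA = ring.add TMN" "ring.zero TA = ring.zero TMN"
  "module.smult TA = module.smult TMN"
  by (simp_all add: tensor_alg_def)

lemma finsum_tensor_alg: "finsum TA = finsum TMN"
  by (simp add: finsum_def tensor_alg_ops)

lemma lin_map_tensor_alg_dom: "lin_map R TA L h = lin_map R TMN L h"
  by (simp add: lin_map_def tensor_alg_ops)

lemma lin_map_tensor_alg_cod: "lin_map R L TA h = lin_map R L TMN h"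
  by (simp add: lin_map_def tensor_alg_ops)

lemma fin_gen_tensor_alg: "fin_gen R TA = fin_gen R TMN"
  by (simp add: fin_gen_def finsum_tensor_alg tensor_alg_ops)

lemma projective_tensor_alg: "projective R TA = projective R TMN"
  by (simp add: projective_def lin_map_tensor_alg_dom lin_map_tensor_alg_cod tensor_alg_ops)

lemma tensor_alg_module: "module R TA"
  by (rule module_image[OF tensor_module, where q = "\<lambda>x. x"]) (simp_all add: tensor_alg_simps)

lemma tmult_assoc:
  assumes U: "U \<in> carrier TMN" and V: "V \<in> carrier TMN" and W: "W \<in> carrier TMN"
  shows "tmult (tmult U V) W = tmult U (tmult V W)"
proof -
  have step3: "tmult (tens (a \<otimes>\<^bsub>A\<^esub> a') (b \<otimes>\<^bsub>B\<^esub> b')) W = tmult (tens a b) (tmult (tens a' b') W)"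
    if ab: "a \<in> carrier A" "b \<in> carrier B" "a' \<in> carrier A" "b' \<in> carrier B" and W:
        "W \<in> carrier TMN" for a b a' b' W
    using W
  proof (rule tensor_lin_map_eqI[OF tensor_module, rotated 3])
    show "lin_map R TMN TMN (tmult (tens (a \<otimes>\<^bsub>A\<^esub> a') (b \<otimes>\<^bsub>B\<^esub> b')))"
      using ab by (intro tmult_lin_right tens_closed) auto
    show "lin_map R TMN TMN (\<lambda>W. tmult (tens a b) (tmult (tens a' b') W))"
      using ab by (intro lin_map_comp[OF tmult_lin_right tmult_lin_right] tens_closed)
    fix m n assume mn: "m \<in> carrier A" "n \<in> carrier B"
    show "tmult (tens (a \<otimes>\<^bsub>A\<^esub> a') (b \<otimes>\<^bsub>B\<^esub> b')) (tens m n) = tmult (tens a b) (tmult (tens a' b') (tens m n))"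
      using ab mn by (simp add: tmult_tens RA.m_assoc RB.m_assoc)
  qed
  have step2: "tmult (tmult (tens a b) V) W = tmult (tens a b) (tmult V W)"
    if ab: "a \<in> carrier A" "b \<in> carrier B" and V: "V \<in> carrier TMN" and W: "W \<in> carrier TMN" for a
        b V W
    using V
  proof (rule tensor_lin_map_eqI[OF tensor_module, rotated 3])
    show "lin_map R TMN TMN (\<lambda>V. tmult (tmult (tens a b) V) W)"
      using ab W by (intro lin_map_comp[OF tmult_lin_right tmult_lin_left] tens_closed)
    show "lin_map R TMN TMN (\<lambda>V. tmult (tens a b) (tmult V W))"
      using ab W by (intro lin_map_comp[OF tmult_lin_left tmult_lin_right] tens_closed)
    fix m n assume mn: "m \<in> carrier A" "n \<in> carrier B"
    show "tmult (tmult (tens a b) (tens m n)) W = tmult (tens a b) (tmult (tens m n) W)"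
      using ab mn W by (simp add: tmult_tens step3)
  qed
  show ?thesis
    using U
  proof (rule tensor_lin_map_eqI[OF tensor_module, rotated 3])
    show "lin_map R TMN TMN (\<lambda>U. tmult (tmult U V) W)"
      using V W by (intro lin_map_comp[OF tmult_lin_left tmult_lin_left])
    show "lin_map R TMN TMN (\<lambda>U. tmult U (tmult V W))"
      using V W by (intro tmult_lin_left tmult_closed)
    fix m n assume mn: "m \<in> carrier A" "n \<in> carrier B"
    show "tmult (tmult (tens m n) V) W = tmult (tens m n) (tmult V W)"
      using mn V W by (rule step2)
  qed
qed

lemma tmult_one_left:
  assumes U: "U \<in> carrier TMN"
  shows "tmult (tens \<one>\<^bsub>A\<^esub> \<one>\<^bsub>B\<^esub>) U = U"
  using U
proof (rule tensor_lin_map_eqI[OF tensor_module, rotated 3])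
  show "lin_map R TMN TMN (tmult (tens \<one>\<^bsub>A\<^esub> \<one>\<^bsub>B\<^esub>))" by (intro tmult_lin_right tens_closed) auto
  show "lin_map R TMN TMN (\<lambda>x. x)" by (rule lin_map_id)
  fix m n assume mn: "m \<in> carrier A" "n \<in> carrier B"
  show "tmult (tens \<one>\<^bsub>A\<^esub> \<one>\<^bsub>B\<^esub>) (tens m n) = tens m n" using mn by (simp add: tmult_tens)
qed

lemma tmult_one_right:
  assumes U: "U \<in> carrier TMN"
  shows "tmult U (tens \<one>\<^bsub>A\<^esub> \<one>\<^bsub>B\<^esub>) = U"
  using U
proof (rule tensor_lin_map_eqI[OF tensor_module, rotated 3])
  show "lin_map R TMN TMN (\<lambda>U. tmult U (tens \<one>\<^bsub>A\<^esub> \<one>\<^bsub>B\<^esub>))" by (intro tmult_lin_left tens_closed) auto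
  show "lin_map R TMN TMN (\<lambda>x. x)" by (rule lin_map_id)
  fix m n assume mn: "m \<in> carrier A" "n \<in> carrier B"
  show "tmult (tens m n) (tens \<one>\<^bsub>A\<^esub> \<one>\<^bsub>B\<^esub>) = tens m n" using mn by (simp add: tmult_tens)
qed

lemma tensor_alg_ring: "ring TA"
proof (rule ringI)
  show "abelian_group TA" using module.axioms(2)[OF tensor_alg_module] .
  show "monoid TA"
  proof (rule monoidI)
    show "\<And>x y. x \<in> carrier TA \<Longrightarrow> y \<in> carrier TA \<Longrightarrow> x \<otimes>\<^bsub>TA\<^esub> y \<in> carrier TA"
      by (simp only: tensor_alg_simps(1)) (simp add: tensor_alg_mult_eq tmult_closed)
    show "\<one>\<^bsub>TA\<^esub> \<in> carrier TA" by (simp add: tensor_alg_simps tens_closed)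
    show "\<And>x y z. x \<in> carrier TA \<Longrightarrow> y \<in> carrier TA \<Longrightarrow> z \<in> carrier TA \<Longrightarrow>
        x \<otimes>\<^bsub>TA\<^esub> y \<otimes>\<^bsub>TA\<^esub> z = x \<otimes>\<^bsub>TA\<^esub> (y \<otimes>\<^bsub>TA\<^esub> z)"
      by (simp only: tensor_alg_simps(1)) (simp add: tensor_alg_mult_eq tmult_closed tmult_assoc)
    show "\<And>x. x \<in> carrier TA \<Longrightarrow> \<one>\<^bsub>TA\<^esub> \<otimes>\<^bsub>TA\<^esub> x = x"
      by (simp only: tensor_alg_simps(1,6)) (simp add: tensor_alg_mult_eq tmult_one_left
          tens_closed)
    show "\<And>x. x \<in> carrier TA \<Longrightarrow> x \<otimes>\<^bsub>TA\<^esub> \<one>\<^bsub>TA\<^esub> = x"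
      by (simp only: tensor_alg_simps(1,6)) (simp add: tensor_alg_mult_eq tmult_one_right
          tens_closed)
  qed
  show "\<And>x y z. x \<in> carrier TA \<Longrightarrow> y \<in> carrier TA \<Longrightarrow> z \<in> carrier TA \<Longrightarrow>
      (x \<oplus>\<^bsub>TA\<^esub> y) \<otimes>\<^bsub>TA\<^esub> z = x \<otimes>\<^bsub>TA\<^esub> z \<oplus>\<^bsub>TA\<^esub> y \<otimes>\<^bsub>TA\<^esub> z"
    by (simp only: tensor_alg_simps(1,3)) (simp add: tensor_alg_mult_eq tensor_add_closed
        lin_mapD(2)[OF tmult_lin_left])
  show "\<And>x y z. x \<in> carrier TA \<Longrightarrow> y \<in> carrier TA \<Longrightarrow> z \<in> carrier TA \<Longrightarrow>
      z \<otimes>\<^bsub>TA\<^esub> (x \<oplus>\<^bsub>TA\<^esub> y) = z \<otimes>\<^bsub>TA\<^esub> x \<oplus>\<^bsub>TA\<^esub> z \<otimes>\<^bsub>TA\<^esub> y"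
    by (simp only: tensor_alg_simps(1,3)) (simp add: tensor_alg_mult_eq tensor_add_closed
        lin_mapD(2)[OF tmult_lin_right])
qed

lemma tensor_alg_k_algebra: "k_algebra R TA"
  unfolding k_algebra_def
proof (intro conjI ballI tensor_alg_ring tensor_alg_module)
  fix r x y assume r: "r \<in> carrier R" and x: "x \<in> carrier TA" and y: "y \<in> carrier TA"
  have sc: "r \<odot>\<^bsub>TMN\<^esub> z \<in> carrier TMN" if "z \<in> carrier TMN" for z
    using module.smult_closed[OF tensor_module r that] .
  show "r \<odot>\<^bsub>TA\<^esub> x \<otimes>\<^bsub>TA\<^esub> y = r \<odot>\<^bsub>TA\<^esub> (x \<otimes>\<^bsub>TA\<^esub> y)"
    using x y r by (simp only: tensor_alg_simps(1,4)) (simp add: tensor_alg_mult_eq sc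
          lin_mapD(3)[OF tmult_lin_left] tmult_closed)
  show "x \<otimes>\<^bsub>TA\<^esub> (r \<odot>\<^bsub>TA\<^esub> y) = r \<odot>\<^bsub>TA\<^esub> (x \<otimes>\<^bsub>TA\<^esub> y)"
    using x y r by (simp only: tensor_alg_simps(1,4)) (simp add: tensor_alg_mult_eq sc
          lin_mapD(3)[OF tmult_lin_right] tmult_closed)
qed

end


section \<open>Finite generation and projectivity\<close>

definition fin_span :: "('k,'c) ring_scheme \<Rightarrow> ('k,'m,'x) module_scheme \<Rightarrow> 'm set \<Rightarrow> 'm set" where
  "fin_span R M S = {m. \<exists>c. (\<forall>s\<in>S. c s \<in> carrier R) \<and> m = finsum M (\<lambda>s. c s \<odot>\<^bsub>M\<^esub> s) S}"


context module begin

lemma fin_span_zero: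
  assumes S: "finite S" "S \<subseteq> carrier M"
  shows "\<zero>\<^bsub>M\<^esub> \<in> fin_span R M S"
proof -
  have "finsum M (\<lambda>s. \<zero> \<odot>\<^bsub>M\<^esub> s) S = finsum M (\<lambda>s. \<zero>\<^bsub>M\<^esub>) S"
    using S by (intro M.finsum_cong_simple) auto
  then show ?thesis unfolding fin_span_def by (intro CollectI exI[of _ "\<lambda>s. \<zero>"]) simp
qed

lemma fin_span_add:
  assumes S: "finite S" "S \<subseteq> carrier M" and x: "x \<in> fin_span R M S" and y: "y \<in> fin_span R M S"
  shows "x \<oplus>\<^bsub>M\<^esub> y \<in> fin_span R M S"
proof -
  obtain c where c: "\<forall>s\<in>S. c s \<in> carrier R" "x = finsum M (\<lambda>s. c s \<odot>\<^bsub>M\<^esub> s) S" using x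
    by (auto simp: fin_span_def)
  obtain d where d: "\<forall>s\<in>S. d s \<in> carrier R" "y = finsum M (\<lambda>s. d s \<odot>\<^bsub>M\<^esub> s) S" using y
    by (auto simp: fin_span_def)
  have "x \<oplus>\<^bsub>M\<^esub> y = finsum M (\<lambda>s. c s \<odot>\<^bsub>M\<^esub> s \<oplus>\<^bsub>M\<^esub> d s \<odot>\<^bsub>M\<^esub> s) S"
    unfolding c d using S c d by (intro M.finsum_addf[symmetric]) (auto simp: Pi_iff subset_iff)
  also have "\<dots> = finsum M (\<lambda>s. (c s \<oplus> d s) \<odot>\<^bsub>M\<^esub> s) S"
    using S c d by (intro M.finsum_cong_simple) (auto simp: smult_l_distr subset_iff)
  finally show ?thesis unfolding fin_span_def using c d
    by (intro CollectI exI[of _ "\<lambda>s. c s \<oplus> d s"]) auto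
qed

lemma fin_span_smult:
  assumes S: "finite S" "S \<subseteq> carrier M" and r: "r \<in> carrier R" and x: "x \<in> fin_span R M S"
  shows "r \<odot>\<^bsub>M\<^esub> x \<in> fin_span R M S"
proof -
  obtain c where c: "\<forall>s\<in>S. c s \<in> carrier R" "x = finsum M (\<lambda>s. c s \<odot>\<^bsub>M\<^esub> s) S" using x
    by (auto simp: fin_span_def)
  have "r \<odot>\<^bsub>M\<^esub> x = finsum M (\<lambda>s. r \<odot>\<^bsub>M\<^esub> (c s \<odot>\<^bsub>M\<^esub> s)) S"
    unfolding c using S c r by (intro finsum_smult_ldistr) (auto simp: Pi_iff subset_iff)
  also have "\<dots> = finsum M (\<lambda>s. (r \<otimes> c s) \<odot>\<^bsub>M\<^esub> s) S"
    using S c r by (intro M.finsum_cong_simple) (auto simp: smult_assoc1 subset_iff)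
  finally show ?thesis unfolding fin_span_def using c r
    by (intro CollectI exI[of _ "\<lambda>s. r \<otimes> c s"]) auto
qed

lemma fin_span_gen:
  assumes S: "finite S" "S \<subseteq> carrier M" and t: "t \<in> S"
  shows "t \<in> fin_span R M S"
proof -
  have "finsum M (\<lambda>s. (if s = t then \<one> else \<zero>) \<odot>\<^bsub>M\<^esub> s) S = finsum M (\<lambda>s. if t = s then s else \<zero>\<^bsub>M\<^esub>) S"
    using S by (intro M.finsum_cong_simple) (auto simp: subset_iff)
  also have "\<dots> = t" using M.finsum_singleton[OF t S(1), of "\<lambda>s. s"] S by auto
  finally show ?thesis unfolding fin_span_def
    by (intro CollectI exI[of _ "\<lambda>s. if s = t then \<one> else \<zero>"]) auto
qed

lemma fin_span_finsum:
  assumes S: "finite S" "S \<subseteq> carrier M" and I: "finite I" and F: "\<And>i. i \<in> I \<Longrightarrow> F i \<in> fin_span R M S"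
    and Fc: "\<And>i. i \<in> I \<Longrightarrow> F i \<in> carrier M"
  shows "finsum M F I \<in> fin_span R M S"
  using I F Fc
proof (induction I rule: finite_induct)
  case empty
  then show ?case using fin_span_zero[OF S] by simp
next
  case (insert i I)
  then show ?case using fin_span_add[OF S] by (simp add: M.finsum_insert Pi_iff)
qed

lemma lin_map_fin_span:
  assumes L: "module R L" and h: "lin_map R M L h" and S: "finite S" "S \<subseteq> carrier M"
    and T: "finite T" "T \<subseteq> carrier L" and hS: "\<And>s. s \<in> S \<Longrightarrow> h s \<in> fin_span R L T"
    and m: "m \<in> fin_span R M S"
  shows "h m \<in> fin_span R L T"
proof -
  interpret L: module R L by fact
  obtain c where c: "\<forall>s\<in>S. c s \<in> carrier R" "m = finsum M (\<lambda>s. c s \<odot>\<^bsub>M\<^esub> s) S"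
    using m by (auto simp: fin_span_def)
  have "h m = finsum L (\<lambda>s. h (c s \<odot>\<^bsub>M\<^esub> s)) S"
    unfolding c(2) using S c by (intro lin_map_finsum[OF is_module L h]) auto
  also have "\<dots> \<in> fin_span R L T"
  proof (rule L.fin_span_finsum[OF T S(1)])
    fix s assume s: "s \<in> S"
    then have sc: "s \<in> carrier M" "c s \<in> carrier R" using S c by auto
    then show "h (c s \<odot>\<^bsub>M\<^esub> s) \<in> fin_span R L T"
      using hS[OF s] by (simp add: lin_mapD(3)[OF h] L.fin_span_smult[OF T])
    show "h (c s \<odot>\<^bsub>M\<^esub> s) \<in> carrier L" using sc by (simp add: lin_mapD(1)[OF h])
  qed
  finally show ?thesis .
qed

lemma fin_gen_span:
  assumes S: "finite S" "S \<subseteq> carrier M" and all: "carrier M \<subseteq> fin_span R M S"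
  shows "fin_gen R M"
  unfolding fin_gen_def using S all by (auto simp: fin_span_def subset_iff)

lemma fin_gen_obtain:
  assumes "fin_gen R M"
  obtains S where "finite S" "S \<subseteq> carrier M" "carrier M \<subseteq> fin_span R M S"
  using assms unfolding fin_gen_def fin_span_def by blast

end


context tensor_modules begin

lemma tens_in_fin_span:
  assumes SM: "finite SM" "SM \<subseteq> carrier M" "carrier M \<subseteq> fin_span R M SM"
    and SN: "finite SN" "SN \<subseteq> carrier N" "carrier N \<subseteq> fin_span R N SN"
    and m: "m \<in> carrier M" and n: "n \<in> carrier N"
  shows "tens m n \<in> fin_span R TMN ((\<lambda>p. tens (fst p) (snd p)) ` (SM \<times> SN))"
proof -
  interpret T: module R TMN by (rule tensor_module)
  let ?S = "(\<lambda>p. tens (fst p) (snd p)) ` (SM \<times> SN)"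
  have S: "finite ?S" "?S \<subseteq> carrier TMN" using SM SN by (auto intro!: tens_closed)
  have "tens s n \<in> fin_span R TMN ?S" if s: "s \<in> SM" for s
  proof (rule N.lin_map_fin_span[OF tensor_module tens_linear_right SN(1,2) S])
    show "s \<in> carrier M" using s SM by auto
    show "tens s t \<in> fin_span R TMN ?S" if "t \<in> SN" for t
      using s that by (intro T.fin_span_gen[OF S]) auto
    show "n \<in> fin_span R N SN" using n SN by auto
  qed
  then show ?thesis
    by (rule M.lin_map_fin_span[OF tensor_module tens_linear_left[OF n] SM(1,2) S]) (use m SM in
        auto)
qed

lemma fin_gen_tensor:
  assumes fM: "fin_gen R M" and fN: "fin_gen R N"
  shows "fin_gen R TMN"
proof -
  interpret T: module R TMN by (rule tensor_module)
  obtain SM where SM: "finite SM" "SM \<subseteq> carrier M" "carrier M \<subseteq> fin_span R M SM"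
    using M.fin_gen_obtain[OF fM] by blast
  obtain SN where SN: "finite SN" "SN \<subseteq> carrier N" "carrier N \<subseteq> fin_span R N SN"
    using N.fin_gen_obtain[OF fN] by blast
  let ?S = "(\<lambda>p. tens (fst p) (snd p)) ` (SM \<times> SN)"
  have S: "finite ?S" "?S \<subseteq> carrier TMN" using SM SN by (auto intro!: tens_closed)
  have "U \<in> fin_span R TMN ?S" if "U \<in> carrier TMN" for U
    using that
  proof (induction rule: tens_induct)
    case zero
    then show ?case by (rule T.fin_span_zero[OF S])
  next
    case (tens m n)
    then show ?case by (rule tens_in_fin_span[OF SM SN])
  next
    case (add U V)
    then show ?case by (intro T.fin_span_add[OF S])
  qed
  then show ?thesis using T.fin_gen_span[OF S] by blast
qed

end

context module begin

lemma free_lin_map_eqI: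
  assumes G: "lin_map R (free_module R S) M G" and H: "lin_map R (free_module R S) M H"
    and eq: "\<And>s. s \<in> S \<Longrightarrow> G (fs_delta R s) = H (fs_delta R s)" and h: "h \<in> free_carrier R S"
  shows "G h = H h"
proof -
  have "(\<lambda>s. H (fs_delta R s)) \<in> S \<rightarrow> carrier M"
    using free_carrier_delta by (auto intro!: lin_mapD(1)[OF H, simplified])
  then show ?thesis
    using lin_map_eq_free_lift[OF G h] lin_map_eq_free_lift[OF H h] free_lift_cong[OF h eq] by simp
qed

(* projective_def retracts onto the free module on carrier M itself; any free module will do. *)
lemma projective_if_retract_of_free:
  fixes Idx :: "'s set"
  assumes F: "lin_map R M (free_module R Idx) F" and G: "lin_map R (free_module R Idx) M G"
    and id: "\<And>x. x \<in> carrier M \<Longrightarrow> G (F x) = x"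
  shows "projective R M"
proof -
  interpret FC: module R "free_module R (carrier M)" by (rule free_module_module)
  let ?\<beta> = "\<lambda>x. fs_delta R (G (fs_delta R x))"
  have Gd: "G (fs_delta R x) \<in> carrier M" if "x \<in> Idx" for x
    using lin_mapD(1)[OF G] free_carrier_delta[OF that] by simp
  have bc: "?\<beta> \<in> Idx \<rightarrow> carrier (free_module R (carrier M))"
    using Gd by (auto intro: free_carrier_delta)
  let ?f = "\<lambda>m. free_lift R (free_module R (carrier M)) ?\<beta> (F m)"
  let ?g = "free_lift R M (\<lambda>w. w)"
  have idc: "(\<lambda>w. w) \<in> carrier M \<rightarrow> carrier M" by auto
  have f_lin: "lin_map R M (free_module R (carrier M)) ?f"
    by (rule lin_map_comp[OF F FC.free_lift_lin[OF bc]])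
  have g_lin: "lin_map R (free_module R (carrier M)) M ?g" by (rule free_lift_lin[OF idc])
  have "?g (free_lift R (free_module R (carrier M)) ?\<beta> h) = G h" if h: "h \<in> free_carrier R Idx"
      for h
  proof (rule free_lin_map_eqI[OF lin_map_comp[OF FC.free_lift_lin[OF bc] g_lin] G _ h])
    fix s assume s: "s \<in> Idx"
    show "?g (free_lift R (free_module R (carrier M)) ?\<beta> (fs_delta R s)) = G (fs_delta R s)"
      using FC.free_lift_delta[OF s bc] free_lift_delta[OF Gd[OF s] idc] by simp
  qed
  then have "\<forall>x\<in>carrier M. ?g (?f x) = x" using lin_mapD(1)[OF F] id by simp
  then show ?thesis unfolding projective_def using f_lin g_lin by blast
qed

end

context tensor_modules begin

lemma bilinear_free_prod:
  assumes fM: "lin_map R M (free_module R I) fM" and fN: "lin_map R N (free_module R J) fN"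
  shows "bilinear R M N (free_module R (I \<times> J)) (\<lambda>m n p. fM m (fst p) \<otimes> fN n (snd p))"
proof -
  have fMc: "fM m \<in> free_carrier R I" if "m \<in> carrier M" for m using lin_mapD(1)[OF fM that] by simp
  have fNc: "fN n \<in> free_carrier R J" if "n \<in> carrier N" for n using lin_mapD(1)[OF fN that] by simp
  note vals = free_carrier_val[OF fMc] free_carrier_val[OF fNc]
  show ?thesis
  proof (rule bilinearI)
    fix m m' n assume *: "m \<in> carrier M" "m' \<in> carrier M" "n \<in> carrier N"
    have "fM (m \<oplus>\<^bsub>M\<^esub> m') = (\<lambda>u. fM m u \<oplus> fM m' u)" using lin_mapD(2)[OF fM *(1,2)] by simp
    then show "(\<lambda>p. fM (m \<oplus>\<^bsub>M\<^esub> m') (fst p) \<otimes> fN n (snd p))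
        = (\<lambda>p. fM m (fst p) \<otimes> fN n (snd p)) \<oplus>\<^bsub>free_module R (I \<times> J)\<^esub> (\<lambda>p. fM m' (fst p) \<otimes> fN n
            (snd p))"
      using * vals by (auto simp: l_distr)
  next
    fix m n n' assume *: "m \<in> carrier M" "n \<in> carrier N" "n' \<in> carrier N"
    have "fN (n \<oplus>\<^bsub>N\<^esub> n') = (\<lambda>u. fN n u \<oplus> fN n' u)" using lin_mapD(2)[OF fN *(2,3)] by simp
    then show "(\<lambda>p. fM m (fst p) \<otimes> fN (n \<oplus>\<^bsub>N\<^esub> n') (snd p))
        = (\<lambda>p. fM m (fst p) \<otimes> fN n (snd p)) \<oplus>\<^bsub>free_module R (I \<times> J)\<^esub> (\<lambda>p. fM m (fst p) \<otimes> fN n'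
            (snd p))"
      using * vals by (auto simp: r_distr)
  next
    fix r m n assume *: "r \<in> carrier R" "m \<in> carrier M" "n \<in> carrier N"
    have "fM (r \<odot>\<^bsub>M\<^esub> m) = (\<lambda>u. r \<otimes> fM m u)" using lin_mapD(3)[OF fM *(1,2)] by simp
    then show "(\<lambda>p. fM (r \<odot>\<^bsub>M\<^esub> m) (fst p) \<otimes> fN n (snd p))
        = r \<odot>\<^bsub>free_module R (I \<times> J)\<^esub> (\<lambda>p. fM m (fst p) \<otimes> fN n (snd p))"
      using * vals by (auto simp: m_assoc)
  next
    fix r m n assume *: "r \<in> carrier R" "m \<in> carrier M" "n \<in> carrier N"
    have "fN (r \<odot>\<^bsub>N\<^esub> n) = (\<lambda>u. r \<otimes> fN n u)" using lin_mapD(3)[OF fN *(1,3)] by simp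
    then show "(\<lambda>p. fM m (fst p) \<otimes> fN (r \<odot>\<^bsub>N\<^esub> n) (snd p))
        = r \<odot>\<^bsub>free_module R (I \<times> J)\<^esub> (\<lambda>p. fM m (fst p) \<otimes> fN n (snd p))"
      using * vals by (auto simp: m_lcomm)
  qed (use fMc fNc in \<open>simp add: free_carrier_prod\<close>)
qed

lemma free_lift_tens_prod:
  assumes f: "f \<in> free_carrier R I" and g: "g \<in> free_carrier R J"
    and bM: "\<beta>M \<in> I \<rightarrow> carrier M" and bN: "\<beta>N \<in> J \<rightarrow> carrier N"
  shows "free_lift R TMN (\<lambda>p. tens (\<beta>M (fst p)) (\<beta>N (snd p))) (\<lambda>p. f (fst p) \<otimes> g (snd p))
       = tens (free_lift R M \<beta>M f) (free_lift R N \<beta>N g)"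
proof -
  interpret T: module R TMN by (rule tensor_module)
  let ?Sf = "{u. f u \<noteq> \<zero>}" and ?Sg = "{v. g v \<noteq> \<zero>}"
  have Sf: "finite ?Sf" "?Sf \<subseteq> I" using free_carrier_finite[OF f] free_carrier_support[OF f] by auto
  have Sg: "finite ?Sg" "?Sg \<subseteq> J" using free_carrier_finite[OF g] free_carrier_support[OF g] by auto
  note vals = free_carrier_val[OF f] free_carrier_val[OF g]
  have xM: "f u \<odot>\<^bsub>M\<^esub> \<beta>M u \<in> carrier M" if "u \<in> ?Sf" for u
    using that Sf bM vals by (intro M.smult_closed) auto
  have yN: "g v \<odot>\<^bsub>N\<^esub> \<beta>N v \<in> carrier N" if "v \<in> ?Sg" for v
    using that Sg bN vals by (intro N.smult_closed) auto
  have "free_lift R TMN (\<lambda>p. tens (\<beta>M (fst p)) (\<beta>N (snd p))) (\<lambda>p. f (fst p) \<otimes> g (snd p))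
      = (\<Oplus>\<^bsub>TMN\<^esub>p\<in>?Sf \<times> ?Sg. (f (fst p) \<otimes> g (snd p)) \<odot>\<^bsub>TMN\<^esub> tens (\<beta>M (fst p)) (\<beta>N (snd p)))"
    using Sf Sg bM bN vals
    by (intro T.free_lift_superset[OF free_carrier_prod[OF f g]]) (auto intro!: tens_closed)
  also have "\<dots> = (\<Oplus>\<^bsub>TMN\<^esub>p\<in>?Sf \<times> ?Sg. tens (f (fst p) \<odot>\<^bsub>M\<^esub> \<beta>M (fst p)) (g (snd p) \<odot>\<^bsub>N\<^esub> \<beta>N (snd p)))"
  proof (rule T.finsum_cong_simple)
    fix p assume "p \<in> ?Sf \<times> ?Sg"
    then have "fst p \<in> I" "snd p \<in> J" using Sf Sg by auto
    then show "(f (fst p) \<otimes> g (snd p)) \<odot>\<^bsub>TMN\<^esub> tens (\<beta>M (fst p)) (\<beta>N (snd p))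
        = tens (f (fst p) \<odot>\<^bsub>M\<^esub> \<beta>M (fst p)) (g (snd p) \<odot>\<^bsub>N\<^esub> \<beta>N (snd p))"
      using bM bN vals by (intro tens_smult_smult[symmetric]) auto
  qed (use xM yN in \<open>auto intro!: tens_closed\<close>)
  also have "\<dots> = tens (\<Oplus>\<^bsub>M\<^esub>u\<in>?Sf. f u \<odot>\<^bsub>M\<^esub> \<beta>M u) (\<Oplus>\<^bsub>N\<^esub>v\<in>?Sg. g v \<odot>\<^bsub>N\<^esub> \<beta>N v)"
    by (intro tens_finsum_finsum[symmetric] Sf(1) Sg(1) xM yN)
  also have "\<dots> = tens (free_lift R M \<beta>M f) (free_lift R N \<beta>N g)" by (simp add: free_lift_def)
  finally show ?thesis .
qed

lemma projective_tensor:
  assumes pM: "projective R M" and pN: "projective R N"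
  shows "projective R TMN"
proof -
  interpret T: module R TMN by (rule tensor_module)
  obtain fM gM where fM: "lin_map R M (free_module R (carrier M)) fM"
    and gM: "lin_map R (free_module R (carrier M)) M gM" and idM: "\<forall>x\<in>carrier M. gM (fM x) = x"
    using pM unfolding projective_def by blast
  obtain fN gN where fN: "lin_map R N (free_module R (carrier N)) fN"
    and gN: "lin_map R (free_module R (carrier N)) N gN" and idN: "\<forall>x\<in>carrier N. gN (fN x) = x"
    using pN unfolding projective_def by blast
  let ?P = "\<lambda>m n p. fM m (fst p) \<otimes> fN n (snd p)"
  have P: "bilinear R M N FMN ?P" by (rule bilinear_free_prod[OF fM fN])
  let ?\<beta>M = "\<lambda>u. gM (fs_delta R u)" and ?\<beta>N = "\<lambda>v. gN (fs_delta R v)"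
  have bM: "?\<beta>M \<in> carrier M \<rightarrow> carrier M" using free_carrier_delta
    by (auto intro!: lin_mapD(1)[OF gM, simplified])
  have bN: "?\<beta>N \<in> carrier N \<rightarrow> carrier N" using free_carrier_delta
    by (auto intro!: lin_mapD(1)[OF gN, simplified])
  let ?\<gamma> = "\<lambda>p. tens (?\<beta>M (fst p)) (?\<beta>N (snd p))"
  have gc: "?\<gamma> \<in> carrier M \<times> carrier N \<rightarrow> carrier TMN" using bM bN by (auto intro!: tens_closed)
  have "free_lift R TMN ?\<gamma> (tensor_lift R FMN ?P U) = U" if U: "U \<in> carrier TMN" for U
    using U
  proof (rule tensor_lin_map_eqI[OF tensor_module, rotated 3])
    show "lin_map R TMN TMN (\<lambda>U. free_lift R TMN ?\<gamma> (tensor_lift R FMN ?P U))"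
      by (rule lin_map_comp[OF tensor_lift_lin[OF free_module_MN P] T.free_lift_lin[OF gc]])
    fix m n assume m: "m \<in> carrier M" and n: "n \<in> carrier N"
    have fm: "fM m \<in> free_carrier R (carrier M)" and fn: "fN n \<in> free_carrier R (carrier N)"
      using lin_mapD(1)[OF fM m] lin_mapD(1)[OF fN n] by auto
    have "free_lift R TMN ?\<gamma> (tensor_lift R FMN ?P (tens m n))
        = tens (free_lift R M ?\<beta>M (fM m)) (free_lift R N ?\<beta>N (fN n))"
      using m n
      by (simp add: tensor_lift_tens[OF free_module_MN P] free_lift_tens_prod[OF fm fn bM bN])
    also have "free_lift R M ?\<beta>M (fM m) = m"
      using M.lin_map_eq_free_lift[OF gM fm] idM m by simp
    also have "free_lift R N ?\<beta>N (fN n) = n"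
      using N.lin_map_eq_free_lift[OF gN fn] idN n by simp
    finally show "free_lift R TMN ?\<gamma> (tensor_lift R FMN ?P (tens m n)) = tens m n" .
  qed (rule lin_map_id)
  then show ?thesis
    by (intro T.projective_if_retract_of_free[OF tensor_lift_lin[OF free_module_MN P] T.free_lift_lin[OF gc]])
qed

end


section \<open>Dual bases\<close>

definition dual_basis :: "('k, 'c) ring_scheme \<Rightarrow> ('k, 'm, 'x) module_scheme
    \<Rightarrow> 'i set \<Rightarrow> ('i \<Rightarrow> 'm) \<Rightarrow> ('i \<Rightarrow> 'm \<Rightarrow> 'k) \<Rightarrow> bool" where
  "dual_basis R M I d \<alpha> \<longleftrightarrow> finite I \<and> (\<forall>i\<in>I. d i \<in> carrier M) \<and>
     (\<forall>i\<in>I. lin_map R M (self_mod R) (\<alpha> i)) \<and>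
     (\<forall>x\<in>carrier M. x = finsum M (\<lambda>i. \<alpha> i x \<odot>\<^bsub>M\<^esub> d i) I)"

lemma self_mod_simps [simp]:
  "carrier (self_mod R) = carrier R" "x \<oplus>\<^bsub>self_mod R\<^esub> y = x \<oplus>\<^bsub>R\<^esub> y"
  "r \<odot>\<^bsub>self_mod R\<^esub> x = r \<otimes>\<^bsub>R\<^esub> x"
  by (simp_all add: self_mod_def)

context module begin

lemma lin_map_coordinate:
  assumes f: "lin_map R M (free_module R Idx) f"
  shows "lin_map R M (self_mod R) (\<lambda>x. f x u)"
proof (rule lin_mapI)
  show "f x u \<in> carrier (self_mod R)" if "x \<in> carrier M" for x
    using free_carrier_val[of "f x" Idx u] lin_mapD(1)[OF f that] by simp
  show "f (x \<oplus>\<^bsub>M\<^esub> y) u = f x u \<oplus>\<^bsub>self_mod R\<^esub> f y u" if "x \<in> carrier M" "y \<in> carrier M" for x y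
    using lin_mapD(2)[OF f that] by simp
  show "f (r \<odot>\<^bsub>M\<^esub> x) u = r \<odot>\<^bsub>self_mod R\<^esub> f x u" if "r \<in> carrier R" "x \<in> carrier M" for r x
    using lin_mapD(3)[OF f that] by simp
qed

lemma lin_map_free_support:
  assumes f: "lin_map R M (free_module R Idx) f" and S: "finite S" "S \<subseteq> carrier M"
    and x: "x \<in> fin_span R M S"
  shows "{u. f x u \<noteq> \<zero>} \<subseteq> (\<Union>s\<in>S. {u. f s u \<noteq> \<zero>})"
proof
  have fc: "f y \<in> free_carrier R Idx" if "y \<in> carrier M" for y using lin_mapD(1)[OF f that] by simp
  fix u assume u: "u \<in> {u. f x u \<noteq> \<zero>}"
  obtain c where c: "\<forall>s\<in>S. c s \<in> carrier R" "x = finsum M (\<lambda>s. c s \<odot>\<^bsub>M\<^esub> s) S"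
    using x by (auto simp: fin_span_def)
  have "f x = finsum (free_module R Idx) (\<lambda>s. f (c s \<odot>\<^bsub>M\<^esub> s)) S"
    using c S by (subst c(2)) (intro lin_map_finsum[OF is_module free_module_module f], auto)
  then have "f x u = (\<Oplus>s\<in>S. f (c s \<odot>\<^bsub>M\<^esub> s) u)"
    using S c fc by (simp add: free_finsum_apply Pi_iff subset_iff)
  also have "\<dots> = (\<Oplus>s\<in>S. c s \<otimes> f s u)"
    by (rule R.finsum_cong_simple)
       (use S c lin_mapD(3)[OF f] in \<open>auto simp: subset_iff free_carrier_val[OF fc]\<close>)
  finally have eq: "f x u = (\<Oplus>s\<in>S. c s \<otimes> f s u)" .
  show "u \<in> (\<Union>s\<in>S. {u. f s u \<noteq> \<zero>})"
  proof (rule ccontr)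
    assume "u \<notin> (\<Union>s\<in>S. {u. f s u \<noteq> \<zero>})"
    then have "\<forall>s\<in>S. f s u = \<zero>" by auto
    then have "(\<Oplus>s\<in>S. c s \<otimes> f s u) = (\<Oplus>s\<in>S. \<zero>)"
      by (intro R.finsum_cong_simple) (use c in auto)
    then show False using eq u by simp
  qed
qed

(* The coordinates of a retraction onto a free module, restricted to the finitely many indices
   met by a finite generating set, form a dual basis. *)
lemma dual_basis_exists:
  assumes fg: "fin_gen R M" and pj: "projective R M"
  shows "\<exists>I \<subseteq> carrier M. \<exists>d \<alpha>. dual_basis R M I d \<alpha>"
proof -
  obtain f g where f: "lin_map R M (free_module R (carrier M)) f"
    and g: "lin_map R (free_module R (carrier M)) M g" and gf: "\<forall>x\<in>carrier M. g (f x) = x"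
    using pj unfolding projective_def by blast
  obtain S where S: "finite S" "S \<subseteq> carrier M" "carrier M \<subseteq> fin_span R M S"
    using fin_gen_obtain[OF fg] by blast
  have fc: "f x \<in> free_carrier R (carrier M)" if "x \<in> carrier M" for x
    using lin_mapD(1)[OF f that] by simp
  let ?I = "\<Union>s\<in>S. {u. f s u \<noteq> \<zero>}"
  have I: "finite ?I" using S free_carrier_finite[OF fc] by auto
  have Isub: "?I \<subseteq> carrier M"
  proof
    fix u assume "u \<in> ?I"
    then obtain s where "s \<in> S" "f s u \<noteq> \<zero>" by blast
    then show "u \<in> carrier M" using free_carrier_outside[OF fc[of s]] S by auto
  qed
  have gd: "g (fs_delta R u) \<in> carrier M" if "u \<in> carrier M" for u
    by (rule lin_mapD(1)[OF g]) (simp add: free_carrier_delta[OF that])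
  have "dual_basis R M ?I (\<lambda>u. g (fs_delta R u)) (\<lambda>u x. f x u)"
    unfolding dual_basis_def
  proof (intro conjI ballI I)
    show "g (fs_delta R u) \<in> carrier M" if "u \<in> ?I" for u using that Isub gd by blast
    show "lin_map R M (self_mod R) (\<lambda>x. f x u)" for u by (rule lin_map_coordinate[OF f])
    fix x assume x: "x \<in> carrier M"
    have supp: "{u. f x u \<noteq> \<zero>} \<subseteq> ?I"
      using lin_map_free_support[OF f S(1,2)] S(3) x by blast
    have "x = free_lift R M (\<lambda>s. g (fs_delta R s)) (f x)"
      using gf x lin_map_eq_free_lift[OF g fc[OF x]] by simp
    also have "\<dots> = finsum M (\<lambda>u. f x u \<odot>\<^bsub>M\<^esub> g (fs_delta R u)) ?I"
      using gd by (intro free_lift_superset[OF fc[OF x] I supp Isub]) auto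
    finally show "x = finsum M (\<lambda>u. f x u \<odot>\<^bsub>M\<^esub> g (fs_delta R u)) ?I" .
  qed
  with Isub show ?thesis by blast
qed

end


context tensor_modules begin

lemma tens_dual_basis_expansion:
  assumes dM: "dual_basis R M I d \<alpha>" and dN: "dual_basis R N J e \<beta>"
    and x: "x \<in> carrier M" and y: "y \<in> carrier N"
  shows "finsum TMN (\<lambda>ij. (\<alpha> (fst ij) x \<otimes> \<beta> (snd ij) y) \<odot>\<^bsub>TMN\<^esub> tens (d (fst ij)) (e (snd ij))) (I \<times> J)
       = tens x y"
proof -
  have I: "finite I" "\<And>i. i \<in> I \<Longrightarrow> d i \<in> carrier M" "\<And>i. i \<in> I \<Longrightarrow> \<alpha> i x \<in> carrier R"
    and ex: "finsum M (\<lambda>i. \<alpha> i x \<odot>\<^bsub>M\<^esub> d i) I = x"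
    using dM x lin_mapD(1)[of R M "self_mod R"] unfolding dual_basis_def by fastforce+
  have J: "finite J" "\<And>j. j \<in> J \<Longrightarrow> e j \<in> carrier N" "\<And>j. j \<in> J \<Longrightarrow> \<beta> j y \<in> carrier R"
    and ey: "finsum N (\<lambda>j. \<beta> j y \<odot>\<^bsub>N\<^esub> e j) J = y"
    using dN y lin_mapD(1)[of R N "self_mod R"] unfolding dual_basis_def by fastforce+
  interpret T: module R TMN by (rule tensor_module)
  have "finsum TMN (\<lambda>ij. (\<alpha> (fst ij) x \<otimes> \<beta> (snd ij) y) \<odot>\<^bsub>TMN\<^esub> tens (d (fst ij)) (e (snd ij))) (I \<times> J)
      = finsum TMN (\<lambda>ij. tens (\<alpha> (fst ij) x \<odot>\<^bsub>M\<^esub> d (fst ij)) (\<beta> (snd ij) y \<odot>\<^bsub>N\<^esub> e (snd ij))) (I \<times>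
          J)"
    using I J by (intro T.finsum_cong_simple) (auto simp: tens_smult_smult intro!: tens_closed)
  also have "\<dots> = tens (finsum M (\<lambda>i. \<alpha> i x \<odot>\<^bsub>M\<^esub> d i) I) (finsum N (\<lambda>j. \<beta> j y \<odot>\<^bsub>N\<^esub> e j) J)"
    using I J by (intro tens_finsum_finsum[symmetric]) auto
  also have "\<dots> = tens x y" by (simp only: ex ey)
  finally show ?thesis .
qed

end

section \<open>Frobenius algebras with a dual basis\<close>

locale frobenius_dual_basis = cring R + A: module R A + P: module R P
  for R :: "('k, 'c) ring_scheme" (structure) and A :: "('k, 'a, 'x) module_scheme"
    and P :: "('k, 'p, 'u) module_scheme"
    and I :: "'a set" and d :: "'a \<Rightarrow> 'a" and \<alpha> :: "'a \<Rightarrow> 'a \<Rightarrow> 'k" +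
  assumes frob: "frobenius R P A" and dual: "dual_basis R A I d \<alpha>"

sublocale frobenius_dual_basis \<subseteq> RA: ring A using frob unfolding frobenius_def k_algebra_def by auto

context frobenius_dual_basis begin

lemma basis_finite: "finite I"
  using dual by (simp add: dual_basis_def)

lemma basis_closed: "i \<in> I \<Longrightarrow> d i \<in> carrier A"
  using dual by (simp add: dual_basis_def)

lemma basis_expansion: "x \<in> carrier A \<Longrightarrow> x = finsum A (\<lambda>i. \<alpha> i x \<odot>\<^bsub>A\<^esub> d i) I"
  using dual by (simp add: dual_basis_def)

lemma coord_lin: "i \<in> I \<Longrightarrow> lin_map R A (self_mod R) (\<alpha> i)"
  using dual by (simp add: dual_basis_def)

lemma coord_closed: "i \<in> I \<Longrightarrow> x \<in> carrier A \<Longrightarrow> \<alpha> i x \<in> carrier R"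
  using lin_mapD(1)[OF coord_lin] by simp

lemma coord_add:
  "i \<in> I \<Longrightarrow> x \<in> carrier A \<Longrightarrow> y \<in> carrier A \<Longrightarrow> \<alpha> i (x \<oplus>\<^bsub>A\<^esub> y) = \<alpha> i x \<oplus> \<alpha> i y"
  using lin_mapD(2)[OF coord_lin] by simp

lemma coord_smult:
  "i \<in> I \<Longrightarrow> r \<in> carrier R \<Longrightarrow> x \<in> carrier A \<Longrightarrow> \<alpha> i (r \<odot>\<^bsub>A\<^esub> x) = r \<otimes> \<alpha> i x"
  using lin_mapD(3)[OF coord_lin] by simp

lemma k_algebra_A: "k_algebra R A"
  using frob by (simp add: frobenius_def)

definition frob where "frob = (SOME \<phi>. bij_betw \<phi> (carrier A) (hom_set R A P) \<and>
        (\<forall>x\<in>carrier A. \<forall>y\<in>carrier A.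
            \<phi> (x \<oplus>\<^bsub>A\<^esub> y) = (\<lambda>z\<in>carrier A. \<phi> x z \<oplus>\<^bsub>P\<^esub> \<phi> y z)) \<and>
        (\<forall>x\<in>carrier A. \<forall>a\<in>carrier A.
            \<phi> (x \<otimes>\<^bsub>A\<^esub> a) = (\<lambda>z\<in>carrier A. \<phi> x (a \<otimes>\<^bsub>A\<^esub> z))))"

lemma frob_props: "bij_betw frob (carrier A) (hom_set R A P) \<and>
        (\<forall>x\<in>carrier A. \<forall>y\<in>carrier A.
            frob (x \<oplus>\<^bsub>A\<^esub> y) = (\<lambda>z\<in>carrier A. frob x z \<oplus>\<^bsub>P\<^esub> frob y z)) \<and>
        (\<forall>x\<in>carrier A. \<forall>a\<in>carrier A.
            frob (x \<otimes>\<^bsub>A\<^esub> a) = (\<lambda>z\<in>carrier A. frob x (a \<otimes>\<^bsub>A\<^esub> z)))"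
  unfolding frob_def using frob unfolding frobenius_def
  by (rule someI_ex[OF conjunct2[OF conjunct2[OF conjunct2]]])

lemma frob_bij: "bij_betw frob (carrier A) (hom_set R A P)" using frob_props by blast

lemma frob_hom: "a \<in> carrier A \<Longrightarrow> frob a \<in> hom_set R A P"
  using frob_bij bij_betwE by blast

lemma frob_lin: "a \<in> carrier A \<Longrightarrow> lin_map R A P (frob a)"
  using frob_hom by (simp add: hom_set_def)

lemma frob_ext: "a \<in> carrier A \<Longrightarrow> frob a \<in> extensional (carrier A)"
  using frob_hom by (simp add: hom_set_def)

lemma frob_closed: "a \<in> carrier A \<Longrightarrow> x \<in> carrier A \<Longrightarrow> frob a x \<in> carrier P"
  using lin_mapD(1)[OF frob_lin] by blast

lemma frob_add: "a \<in> carrier A \<Longrightarrow> a' \<in> carrier A \<Longrightarrow> x \<in> carrier A \<Longrightarrow>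
    frob (a \<oplus>\<^bsub>A\<^esub> a') x = frob a x \<oplus>\<^bsub>P\<^esub> frob a' x"
  using frob_props by simp

lemma frob_mult: "a \<in> carrier A \<Longrightarrow> a' \<in> carrier A \<Longrightarrow> x \<in> carrier A \<Longrightarrow>
    frob (a \<otimes>\<^bsub>A\<^esub> a') x = frob a (a' \<otimes>\<^bsub>A\<^esub> x)"
  using frob_props by simp


lemma frob_smult:
  assumes r: "r \<in> carrier R" and a: "a \<in> carrier A" and x: "x \<in> carrier A"
  shows "frob (r \<odot>\<^bsub>A\<^esub> a) x = r \<odot>\<^bsub>P\<^esub> frob a x"
proof -
  have "r \<odot>\<^bsub>A\<^esub> a = a \<otimes>\<^bsub>A\<^esub> (r \<odot>\<^bsub>A\<^esub> \<one>\<^bsub>A\<^esub>)"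
    using k_algebra_mult_smult[OF k_algebra_A r a RA.one_closed] a by simp
  then have "frob (r \<odot>\<^bsub>A\<^esub> a) x = frob a ((r \<odot>\<^bsub>A\<^esub> \<one>\<^bsub>A\<^esub>) \<otimes>\<^bsub>A\<^esub> x)" using frob_mult r a x by simp
  also have "(r \<odot>\<^bsub>A\<^esub> \<one>\<^bsub>A\<^esub>) \<otimes>\<^bsub>A\<^esub> x = r \<odot>\<^bsub>A\<^esub> x"
    using k_algebra_smult_mult[OF k_algebra_A r RA.one_closed x] x by simp
  also have "frob a (r \<odot>\<^bsub>A\<^esub> x) = r \<odot>\<^bsub>P\<^esub> frob a x" using lin_mapD(3)[OF frob_lin[OF a] r x] .
  finally show ?thesis .
qed

lemma frob_lin_left: "x \<in> carrier A \<Longrightarrow> lin_map R A P (\<lambda>a. frob a x)"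
  by (rule lin_mapI) (simp_all add: frob_closed frob_add frob_smult)

lemma frob_eqI:
  assumes a: "a \<in> carrier A" and a': "a' \<in> carrier A" and eq: "\<And>x. x \<in> carrier A \<Longrightarrow>
      frob a x = frob a' x"
  shows "a = a'"
proof -
  have "frob a = frob a'" using frob_ext[OF a] frob_ext[OF a'] eq by (rule extensionalityI)
  then show ?thesis using frob_bij a a' by (auto simp: bij_betw_def inj_on_def)
qed


definition frob_inv where "frob_inv = inv_into (carrier A) frob"

lemma frob_inv_props: "h \<in> hom_set R A P \<Longrightarrow> frob_inv h \<in> carrier A \<and> frob (frob_inv h) = h"
  unfolding frob_inv_def using frob_bij by (metis bij_betw_def f_inv_into_f inv_into_into)

(* \<epsilon>\<^sub>i p of the header. *)
definition dual_elem where "dual_elem i p = frob_inv (\<lambda>x\<in>carrier A. \<alpha> i x \<odot>\<^bsub>P\<^esub> p)"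

lemma dual_functional_hom: "i \<in> I \<Longrightarrow> p \<in> carrier P \<Longrightarrow> (\<lambda>x\<in>carrier A. \<alpha> i x \<odot>\<^bsub>P\<^esub> p) \<in> hom_set R A P"
  unfolding hom_set_def
  by (auto intro!: lin_mapI simp: coord_closed coord_add coord_smult P.smult_l_distr P.smult_assoc1)

lemma dual_elem_closed: "i \<in> I \<Longrightarrow> p \<in> carrier P \<Longrightarrow> dual_elem i p \<in> carrier A"
  unfolding dual_elem_def using frob_inv_props dual_functional_hom by blast

lemma frob_dual_elem: "i \<in> I \<Longrightarrow> p \<in> carrier P \<Longrightarrow> x \<in> carrier A \<Longrightarrow>
    frob (dual_elem i p) x = \<alpha> i x \<odot>\<^bsub>P\<^esub> p"
  unfolding dual_elem_def using frob_inv_props[OF dual_functional_hom] by simp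

lemma dual_elem_add: "i \<in> I \<Longrightarrow> p \<in> carrier P \<Longrightarrow> p' \<in> carrier P \<Longrightarrow>
    dual_elem i (p \<oplus>\<^bsub>P\<^esub> p') = dual_elem i p \<oplus>\<^bsub>A\<^esub> dual_elem i p'"
  by (rule frob_eqI) (auto simp: dual_elem_closed frob_add frob_dual_elem coord_closed
      P.smult_r_distr)

lemma dual_elem_smult:
  assumes i: "i \<in> I" and r: "r \<in> carrier R" and p: "p \<in> carrier P"
  shows "dual_elem i (r \<odot>\<^bsub>P\<^esub> p) = r \<odot>\<^bsub>A\<^esub> dual_elem i p"
proof (rule frob_eqI)
  show "dual_elem i (r \<odot>\<^bsub>P\<^esub> p) \<in> carrier A" using i r p by (simp add: dual_elem_closed)
  show "r \<odot>\<^bsub>A\<^esub> dual_elem i p \<in> carrier A" using i r p by (simp add: dual_elem_closed)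
  fix x assume x: "x \<in> carrier A"
  have "frob (dual_elem i (r \<odot>\<^bsub>P\<^esub> p)) x = \<alpha> i x \<odot>\<^bsub>P\<^esub> (r \<odot>\<^bsub>P\<^esub> p)" using i r p x
    by (simp add: frob_dual_elem)
  also have "\<dots> = (\<alpha> i x \<otimes> r) \<odot>\<^bsub>P\<^esub> p" using i r p x coord_closed by (simp add: P.smult_assoc1)
  also have "\<dots> = (r \<otimes> \<alpha> i x) \<odot>\<^bsub>P\<^esub> p" using i r x coord_closed by (simp add: m_comm)
  also have "\<dots> = r \<odot>\<^bsub>P\<^esub> (\<alpha> i x \<odot>\<^bsub>P\<^esub> p)" using i r p x coord_closed by (simp add: P.smult_assoc1)
  also have "\<dots> = frob (r \<odot>\<^bsub>A\<^esub> dual_elem i p) x" using i r p x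
    by (simp add: frob_smult frob_dual_elem dual_elem_closed)
  finally show "frob (dual_elem i (r \<odot>\<^bsub>P\<^esub> p)) x = frob (r \<odot>\<^bsub>A\<^esub> dual_elem i p) x" .
qed

lemma dual_elem_expansion:
  assumes a: "a \<in> carrier A"
  shows "finsum A (\<lambda>i. dual_elem i (frob a (d i))) I = a"
proof (rule frob_eqI)
  have evc: "dual_elem i (frob a (d i)) \<in> carrier A" if "i \<in> I" for i
    using that a by (simp add: dual_elem_closed frob_closed basis_closed)
  show "finsum A (\<lambda>i. dual_elem i (frob a (d i))) I \<in> carrier A" using evc
    by (intro A.finsum_closed) auto
  show "a \<in> carrier A" by fact
  fix x assume x: "x \<in> carrier A"
  have "frob (finsum A (\<lambda>i. dual_elem i (frob a (d i))) I) x = finsum P (\<lambda>i. frob (dual_elem i (frob a (d i))) x) I"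
    using evc basis_finite
    by (intro lin_map_finsum[OF A.is_module P.is_module frob_lin_left[OF x]]) auto
  also have "\<dots> = finsum P (\<lambda>i. frob a (\<alpha> i x \<odot>\<^bsub>A\<^esub> d i)) I"
    using x a by (intro P.finsum_cong_simple)
       (auto simp: frob_dual_elem lin_mapD(3)[OF frob_lin[OF a]] frob_closed basis_closed
           coord_closed)
  also have "\<dots> = frob a (finsum A (\<lambda>i. \<alpha> i x \<odot>\<^bsub>A\<^esub> d i) I)"
    using x a basis_finite
    by (intro lin_map_finsum[OF A.is_module P.is_module frob_lin, symmetric]) (auto simp:
        basis_closed coord_closed)
  also have "\<dots> = frob a x" using basis_expansion[OF x] by simp
  finally show "frob (finsum A (\<lambda>i. dual_elem i (frob a (d i))) I) x = frob a x" .
qed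

end

lemma frobenius_dual_basis_exists:
  assumes R: "cring R" and A: "frobenius R P A" and P: "module R P"
  shows "\<exists>I \<subseteq> carrier A. \<exists>d \<alpha>. frobenius_dual_basis R A P I d \<alpha>"
proof -
  have mA: "module R A" using A by (simp add: frobenius_def k_algebra_def)
  obtain I d \<alpha> where "I \<subseteq> carrier A" "dual_basis R A I d \<alpha>"
    using module.dual_basis_exists[OF mA] A unfolding frobenius_def by blast
  moreover have "frobenius_dual_basis R A P I d \<alpha>" if "dual_basis R A I d \<alpha>" for I d \<alpha>
    using R mA P A that
    by (intro frobenius_dual_basis.intro frobenius_dual_basis_axioms.intro) (auto intro:
          module.axioms)
  ultimately show ?thesis by blast
qed


section \<open>The Frobenius isomorphism of the tensor product\<close>

locale frobenius_tensor = tensor_algebras R A B + FA: frobenius_dual_basis R A P IA dA \<alpha>A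
    + FB: frobenius_dual_basis R B Q IB dB \<alpha>B
  for R :: "('k, 'c) ring_scheme" (structure) and A :: "('k, 'a, 'x) module_scheme"
    and B :: "('k, 'b, 'y) module_scheme"
    and P :: "('k, 'p, 'u) module_scheme" and Q :: "('k, 'q, 'v) module_scheme"
    and IA dA \<alpha>A IB dB \<alpha>B

lemma frobenius_tensorI:
  assumes FA: "frobenius_dual_basis R A P IA dA \<alpha>A" and FB: "frobenius_dual_basis R B Q IB dB \<alpha>B"
  shows "frobenius_tensor R A B P Q IA dA \<alpha>A IB dB \<alpha>B"
proof -
  interpret FA: frobenius_dual_basis R A P IA dA \<alpha>A by (rule FA)
  interpret FB: frobenius_dual_basis R B Q IB dB \<alpha>B by (rule FB)
  show ?thesis
    using FA.frob FB.frob by unfold_locales (simp_all add: frobenius_def)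
qed

sublocale frobenius_tensor \<subseteq> PQ: tensor_modules R P Q by unfold_locales

context frobenius_tensor begin

abbreviation "TPQ \<equiv> tensor_mod R P Q"
abbreviation "tens_PQ p q \<equiv> tens_cls R P Q (fs_delta R (p, q))"

definition pure_functional where
  "pure_functional a b = tensor_lift R TPQ (\<lambda>x y. tens_PQ (FA.frob a x) (FB.frob b y))"

(* \<Phi> of the header; tfrob_inv below is \<Theta>. *)
definition tfrob where
  "tfrob U = (\<lambda>W\<in>carrier TMN. tensor_lift R TPQ (\<lambda>a b. pure_functional a b W) U)"

lemma tensor_module_PQ: "module R TPQ" by (rule PQ.tensor_module)

lemma pure_functional_bilinear:
  assumes a: "a \<in> carrier A" and b: "b \<in> carrier B"
  shows "bilinear R A B TPQ (\<lambda>x y. tens_PQ (FA.frob a x) (FB.frob b y))"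
  by (rule bilinearI)
     (use a b in \<open>simp_all add: lin_mapD[OF FA.frob_lin] lin_mapD[OF FB.frob_lin] FA.frob_closed
        FB.frob_closed PQ.tens_closed PQ.tens_add_left PQ.tens_add_right PQ.tens_smult_left
        PQ.tens_smult_right\<close>)

lemma pure_functional_bilinear_param:
  assumes x: "x \<in> carrier A" and y: "y \<in> carrier B"
  shows "bilinear R A B TPQ (\<lambda>a b. tens_PQ (FA.frob a x) (FB.frob b y))"
  by (rule bilinearI)
     (use x y in \<open>simp_all add: FA.frob_add FB.frob_add FA.frob_smult FB.frob_smult FA.frob_closed FB.frob_closed
        PQ.tens_closed PQ.tens_add_left PQ.tens_add_right PQ.tens_smult_left PQ.tens_smult_right\<close>)

lemma pure_functional_lin: "a \<in> carrier A \<Longrightarrow> b \<in> carrier B \<Longrightarrow> lin_map R TMN TPQ (pure_functional a b)"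
  unfolding pure_functional_def by (intro tensor_lift_lin tensor_module_PQ pure_functional_bilinear)

lemma pure_functional_tens: "a \<in> carrier A \<Longrightarrow> b \<in> carrier B \<Longrightarrow> x \<in> carrier A \<Longrightarrow> y \<in> carrier B \<Longrightarrow>
   pure_functional a b (tens x y) = tens_PQ (FA.frob a x) (FB.frob b y)"
  unfolding pure_functional_def
  by (intro tensor_lift_tens tensor_module_PQ pure_functional_bilinear)

lemma pure_functional_at_bilinear:
  "W \<in> carrier TMN \<Longrightarrow> bilinear R A B TPQ (\<lambda>a b. pure_functional a b W)"
  unfolding pure_functional_def
  by (intro tensor_lift_bilinear_param tensor_module_PQ pure_functional_bilinear
      pure_functional_bilinear_param)

lemma tfrob_apply: "W \<in> carrier TMN \<Longrightarrow> tfrob U W = tensor_lift R TPQ (\<lambda>a b. pure_functional a b W) U"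
  by (simp add: tfrob_def)

lemma tfrob_lin_left: "W \<in> carrier TMN \<Longrightarrow> lin_map R TMN TPQ (\<lambda>U. tfrob U W)"
  by (simp add: tfrob_apply tensor_lift_lin tensor_module_PQ pure_functional_at_bilinear)

lemma tfrob_tens:
  "a \<in> carrier A \<Longrightarrow> b \<in> carrier B \<Longrightarrow> W \<in> carrier TMN \<Longrightarrow> tfrob (tens a b) W = pure_functional a b W"
  by (simp add: tfrob_apply tensor_lift_tens[OF tensor_module_PQ pure_functional_at_bilinear])

lemma tfrob_lin:
  assumes U: "U \<in> carrier TMN"
  shows "lin_map R TMN TPQ (tfrob U)"
proof -
  interpret T: module R TMN by (rule tensor_module)
  have lin: "lin_map R TMN TPQ (\<lambda>W. tensor_lift R TPQ (\<lambda>a b. pure_functional a b W) U)"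
    by (intro tensor_lift_lin_param tensor_module_PQ U pure_functional_at_bilinear
        pure_functional_lin)
  show ?thesis
    by (rule lin_mapI) (simp_all add: tfrob_apply lin_mapD[OF lin])
qed

lemma tfrob_hom: "U \<in> carrier TMN \<Longrightarrow> tfrob U \<in> hom_set R TMN TPQ"
  by (simp add: hom_set_def tfrob_lin) (simp add: tfrob_def)

lemma tfrob_add:
  assumes U: "U \<in> carrier TMN" and V: "V \<in> carrier TMN"
  shows "tfrob (U \<oplus>\<^bsub>TMN\<^esub> V) = (\<lambda>W\<in>carrier TMN. tfrob U W \<oplus>\<^bsub>TPQ\<^esub> tfrob V W)"
proof (rule ext)
  fix W show "tfrob (U \<oplus>\<^bsub>TMN\<^esub> V) W = (\<lambda>W\<in>carrier TMN. tfrob U W \<oplus>\<^bsub>TPQ\<^esub> tfrob V W) W"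
  proof (cases "W \<in> carrier TMN")
    case True
    then show ?thesis using lin_mapD(2)[OF tfrob_lin_left[OF True] U V] by simp
  next
    case False
    then show ?thesis by (simp add: tfrob_def)
  qed
qed

lemma tfrob_mult:
  assumes U: "U \<in> carrier TMN" and V: "V \<in> carrier TMN" and W: "W \<in> carrier TMN"
  shows "tfrob (tmult U V) W = tfrob U (tmult V W)"
proof -
  have step3: "tfrob (tens (a \<otimes>\<^bsub>A\<^esub> a') (b \<otimes>\<^bsub>B\<^esub> b')) W = tfrob (tens a b) (tmult (tens a' b') W)"
    if ab: "a \<in> carrier A" "b \<in> carrier B" "a' \<in> carrier A" "b' \<in> carrier B" and W:
        "W \<in> carrier TMN" for a b a' b' W
  proof -
    have "pure_functional (a \<otimes>\<^bsub>A\<^esub> a') (b \<otimes>\<^bsub>B\<^esub> b') W = pure_functional a b (tmult (tens a' b') W)"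
      using W
    proof (rule tensor_lin_map_eqI[OF tensor_module_PQ, rotated 3])
      show "lin_map R TMN TPQ (pure_functional (a \<otimes>\<^bsub>A\<^esub> a') (b \<otimes>\<^bsub>B\<^esub> b'))" using ab
        by (intro pure_functional_lin) auto
      show "lin_map R TMN TPQ (\<lambda>W. pure_functional a b (tmult (tens a' b') W))"
        using ab by (intro lin_map_comp[OF tmult_lin_right pure_functional_lin] tens_closed)
      fix x y assume xy: "x \<in> carrier A" "y \<in> carrier B"
      show "pure_functional (a \<otimes>\<^bsub>A\<^esub> a') (b \<otimes>\<^bsub>B\<^esub> b') (tens x y) = pure_functional a b (tmult (tens a' b') (tens x y))"
        using ab xy by (simp add: pure_functional_tens tmult_tens FA.frob_mult FB.frob_mult)
    qed
    then show ?thesis using ab W by (simp add: tfrob_tens tmult_closed tens_closed)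
  qed
  have step2: "tfrob (tmult (tens a b) V) W = tfrob (tens a b) (tmult V W)"
    if ab: "a \<in> carrier A" "b \<in> carrier B" and V: "V \<in> carrier TMN" and W: "W \<in> carrier TMN" for a
        b V W
    using V
  proof (rule tensor_lin_map_eqI[OF tensor_module_PQ, rotated 3])
    show "lin_map R TMN TPQ (\<lambda>V. tfrob (tmult (tens a b) V) W)"
      using ab W by (intro lin_map_comp[OF tmult_lin_right tfrob_lin_left] tens_closed)
    show "lin_map R TMN TPQ (\<lambda>V. tfrob (tens a b) (tmult V W))"
      using ab W by (intro lin_map_comp[OF tmult_lin_left tfrob_lin] tens_closed)
    fix x y assume xy: "x \<in> carrier A" "y \<in> carrier B"
    show "tfrob (tmult (tens a b) (tens x y)) W = tfrob (tens a b) (tmult (tens x y) W)"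
      using ab xy W by (simp add: tmult_tens step3)
  qed
  show ?thesis using U
  proof (rule tensor_lin_map_eqI[OF tensor_module_PQ, rotated 3])
    show "lin_map R TMN TPQ (\<lambda>U. tfrob (tmult U V) W)" using V W
      by (intro lin_map_comp[OF tmult_lin_left tfrob_lin_left])
    show "lin_map R TMN TPQ (\<lambda>U. tfrob U (tmult V W))" using V W
      by (intro tfrob_lin_left tmult_closed)
    fix m n assume mn: "m \<in> carrier A" "n \<in> carrier B"
    show "tfrob (tmult (tens m n) V) W = tfrob (tens m n) (tmult V W)" using mn V W by (rule step2)
  qed
qed

definition dual_tensor where
  "dual_tensor i j = tensor_lift R TMN (\<lambda>p q. tens (FA.dual_elem i p) (FB.dual_elem j q))"

lemma dual_tensor_bilinear: "i \<in> IA \<Longrightarrow> j \<in> IB \<Longrightarrow>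
    bilinear R P Q TMN (\<lambda>p q. tens (FA.dual_elem i p) (FB.dual_elem j q))"
  by (rule bilinearI) (auto simp: FA.dual_elem_closed FB.dual_elem_closed tens_closed
      FA.dual_elem_add FB.dual_elem_add FA.dual_elem_smult FB.dual_elem_smult
      tens_add_left tens_add_right tens_smult_left tens_smult_right)

lemma dual_tensor_lin: "i \<in> IA \<Longrightarrow> j \<in> IB \<Longrightarrow> lin_map R TPQ TMN (dual_tensor i j)"
  unfolding dual_tensor_def by (intro PQ.tensor_lift_lin tensor_module dual_tensor_bilinear)

lemma dual_tensor_closed: "i \<in> IA \<Longrightarrow> j \<in> IB \<Longrightarrow> t \<in> carrier TPQ \<Longrightarrow> dual_tensor i j t \<in> carrier TMN"
  using lin_mapD(1)[OF dual_tensor_lin] by blast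

lemma dual_tensor_tens: "i \<in> IA \<Longrightarrow> j \<in> IB \<Longrightarrow> p \<in> carrier P \<Longrightarrow> q \<in> carrier Q \<Longrightarrow>
    dual_tensor i j (tens_PQ p q) = tens (FA.dual_elem i p) (FB.dual_elem j q)"
  unfolding dual_tensor_def by (intro PQ.tensor_lift_tens tensor_module dual_tensor_bilinear)

definition tfrob_inv where
  "tfrob_inv F = finsum TMN (\<lambda>ij. dual_tensor (fst ij) (snd ij) (F (tens (dA (fst ij)) (dB (snd ij))))) (IA \<times> IB)"

lemma basis_tens_closed: "ij \<in> IA \<times> IB \<Longrightarrow> tens (dA (fst ij)) (dB (snd ij)) \<in> carrier TMN"
  by (auto intro!: tens_closed FA.basis_closed FB.basis_closed)

lemma tfrob_inv_closed:
  assumes F: "\<And>W. W \<in> carrier TMN \<Longrightarrow> F W \<in> carrier TPQ"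
  shows "tfrob_inv F \<in> carrier TMN"
proof -
  interpret T: module R TMN by (rule tensor_module)
  show ?thesis unfolding tfrob_inv_def using F basis_tens_closed
    by (intro T.finsum_closed) (auto intro!: dual_tensor_closed)
qed

lemma tfrob_inv_tfrob_lin: "lin_map R TMN TMN (\<lambda>U. tfrob_inv (tfrob U))"
proof -
  have lin: "lin_map R TMN TMN (\<lambda>U. dual_tensor (fst ij) (snd ij) (tfrob U (tens (dA (fst ij)) (dB (snd ij)))))"
    if "ij \<in> IA \<times> IB" for ij
    using that by (intro lin_map_comp[OF tfrob_lin_left dual_tensor_lin] basis_tens_closed) auto
  show ?thesis
    unfolding tfrob_inv_def
    by (rule lin_map_finsum_fun[OF tensor_module finite_cartesian_product[OF FA.basis_finite FB.basis_finite] lin])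
qed

lemma tfrob_inv_tfrob:
  assumes U: "U \<in> carrier TMN"
  shows "tfrob_inv (tfrob U) = U"
  using U
proof (rule tensor_lin_map_eqI[OF tensor_module tfrob_inv_tfrob_lin lin_map_id, rotated])
  interpret T: module R TMN by (rule tensor_module)
  fix a b assume a: "a \<in> carrier A" and b: "b \<in> carrier B"
  let ?x = "\<lambda>i. FA.dual_elem i (FA.frob a (dA i))" and ?y = "\<lambda>j. FB.dual_elem j (FB.frob b (dB j))"
  have xc: "?x i \<in> carrier A" if "i \<in> IA" for i
    using that a by (intro FA.dual_elem_closed FA.frob_closed FA.basis_closed)
  have yc: "?y j \<in> carrier B" if "j \<in> IB" for j
    using that b by (intro FB.dual_elem_closed FB.frob_closed FB.basis_closed)
  have "tfrob_inv (tfrob (tens a b)) = finsum TMN (\<lambda>ij. tens (?x (fst ij)) (?y (snd ij))) (IA \<times> IB)"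
    unfolding tfrob_inv_def
  proof (rule T.finsum_cong_simple)
    fix ij assume ij: "ij \<in> IA \<times> IB"
    then have "tfrob (tens a b) (tens (dA (fst ij)) (dB (snd ij)))
        = tens_PQ (FA.frob a (dA (fst ij))) (FB.frob b (dB (snd ij)))"
      using a b by (auto simp: tfrob_tens basis_tens_closed pure_functional_tens FA.basis_closed
            FB.basis_closed)
    then show "dual_tensor (fst ij) (snd ij) (tfrob (tens a b) (tens (dA (fst ij)) (dB (snd ij))))
        = tens (?x (fst ij)) (?y (snd ij))"
      using ij a b by (auto simp: dual_tensor_tens FA.frob_closed FB.frob_closed FA.basis_closed
            FB.basis_closed)
  qed (use xc yc in \<open>auto intro!: tens_closed\<close>)
  also have "\<dots> = tens (finsum A ?x IA) (finsum B ?y IB)"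
    using xc yc by (intro tens_finsum_finsum[symmetric] FA.basis_finite FB.basis_finite)
  also have "\<dots> = tens a b" using a b by (simp add: FA.dual_elem_expansion FB.dual_elem_expansion)
  finally show "tfrob_inv (tfrob (tens a b)) = tens a b" .
qed

lemma tfrob_dual_tensor:
  assumes i: "i \<in> IA" and j: "j \<in> IB" and t: "t \<in> carrier TPQ" and x: "x \<in> carrier A" and y:
      "y \<in> carrier B"
  shows "tfrob (dual_tensor i j t) (tens x y) = (\<alpha>A i x \<otimes> \<alpha>B j y) \<odot>\<^bsub>TPQ\<^esub> t"
  using t
proof (rule PQ.tensor_lin_map_eqI[OF tensor_module_PQ, rotated 3])
  interpret TP: module R TPQ by (rule tensor_module_PQ)
  have c: "\<alpha>A i x \<otimes> \<alpha>B j y \<in> carrier R" using i j x y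
    by (intro m_closed FA.coord_closed FB.coord_closed)
  show "lin_map R TPQ TPQ (\<lambda>t. tfrob (dual_tensor i j t) (tens x y))"
    using x y by (intro lin_map_comp[OF dual_tensor_lin[OF i j] tfrob_lin_left] tens_closed)
  show "lin_map R TPQ TPQ (\<lambda>t. (\<alpha>A i x \<otimes> \<alpha>B j y) \<odot>\<^bsub>TPQ\<^esub> t)"
    by (rule lin_map_smult[OF tensor_module_PQ c])
  fix p q assume p: "p \<in> carrier P" and q: "q \<in> carrier Q"
  have ai: "\<alpha>A i x \<in> carrier R" and bj: "\<alpha>B j y \<in> carrier R" using i j x y
    by (auto intro: FA.coord_closed FB.coord_closed)
  have "tfrob (dual_tensor i j (tens_PQ p q)) (tens x y) = tens_PQ (FA.frob (FA.dual_elem i p) x) (FB.frob (FB.dual_elem j q) y)"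
    using i j p q x y
    by (simp add: dual_tensor_tens tfrob_tens pure_functional_tens FA.dual_elem_closed
          FB.dual_elem_closed tens_closed)
  also have "\<dots> = tens_PQ (\<alpha>A i x \<odot>\<^bsub>P\<^esub> p) (\<alpha>B j y \<odot>\<^bsub>Q\<^esub> q)"
    using i j p q x y by (simp add: FA.frob_dual_elem FB.frob_dual_elem)
  also have "\<dots> = \<alpha>A i x \<odot>\<^bsub>TPQ\<^esub> tens_PQ p (\<alpha>B j y \<odot>\<^bsub>Q\<^esub> q)"
    using ai bj p q by (intro PQ.tens_smult_left) auto
  also have "tens_PQ p (\<alpha>B j y \<odot>\<^bsub>Q\<^esub> q) = \<alpha>B j y \<odot>\<^bsub>TPQ\<^esub> tens_PQ p q"
    using ai bj p q by (intro PQ.tens_smult_right) auto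
  also have "\<alpha>A i x \<odot>\<^bsub>TPQ\<^esub> (\<alpha>B j y \<odot>\<^bsub>TPQ\<^esub> tens_PQ p q) = (\<alpha>A i x \<otimes> \<alpha>B j y) \<odot>\<^bsub>TPQ\<^esub> tens_PQ p q"
    using ai bj p q by (intro TP.smult_assoc1[symmetric] PQ.tens_closed)
  finally show "tfrob (dual_tensor i j (tens_PQ p q)) (tens x y) = (\<alpha>A i x \<otimes> \<alpha>B j y) \<odot>\<^bsub>TPQ\<^esub> tens_PQ p q" .
qed

lemma tfrob_tfrob_inv:
  assumes h: "h \<in> hom_set R TMN TPQ"
  shows "tfrob (tfrob_inv h) = h"
proof -
  interpret T: module R TMN by (rule tensor_module)
  interpret TP: module R TPQ by (rule tensor_module_PQ)
  have hl: "lin_map R TMN TPQ h" and he: "h \<in> extensional (carrier TMN)" using h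
    by (auto simp: hom_set_def)
  have hc: "\<And>W. W \<in> carrier TMN \<Longrightarrow> h W \<in> carrier TPQ" using lin_mapD(1)[OF hl] .
  let ?t = "\<lambda>ij. h (tens (dA (fst ij)) (dB (snd ij)))"
  have tc: "?t ij \<in> carrier TPQ" if "ij \<in> IA \<times> IB" for ij using hc basis_tens_closed[OF that] .
  have "tfrob (tfrob_inv h) W = h W" if W: "W \<in> carrier TMN" for W
    using W
  proof (rule tensor_lin_map_eqI[OF tensor_module_PQ, rotated 3])
    show "lin_map R TMN TPQ (tfrob (tfrob_inv h))" by (rule tfrob_lin[OF tfrob_inv_closed[OF hc]])
    show "lin_map R TMN TPQ h" by (rule hl)
    fix x y assume x: "x \<in> carrier A" and y: "y \<in> carrier B"
    let ?c = "\<lambda>ij. \<alpha>A (fst ij) x \<otimes> \<alpha>B (snd ij) y"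
    have c: "?c ij \<in> carrier R" if "ij \<in> IA \<times> IB" for ij
      using that x y by (auto intro!: m_closed FA.coord_closed FB.coord_closed)
    have "tfrob (tfrob_inv h) (tens x y) = finsum TPQ (\<lambda>ij. tfrob (dual_tensor (fst ij) (snd ij) (?t ij)) (tens x y)) (IA \<times> IB)"
      unfolding tfrob_inv_def using tc FA.basis_finite FB.basis_finite
      by (intro lin_map_finsum[OF tensor_module tensor_module_PQ tfrob_lin_left] tens_closed x y)
         (auto intro!: dual_tensor_closed)
    also have "\<dots> = finsum TPQ (\<lambda>ij. h (?c ij \<odot>\<^bsub>TMN\<^esub> tens (dA (fst ij)) (dB (snd ij)))) (IA \<times> IB)"
      using tc c x y basis_tens_closed
      by (intro TP.finsum_cong_simple) (auto simp: tfrob_dual_tensor lin_mapD(3)[OF hl])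
    also have "\<dots> = h (finsum TMN (\<lambda>ij. ?c ij \<odot>\<^bsub>TMN\<^esub> tens (dA (fst ij)) (dB (snd ij))) (IA \<times> IB))"
      using c basis_tens_closed FA.basis_finite FB.basis_finite
      by (intro lin_map_finsum[OF tensor_module tensor_module_PQ hl, symmetric]) auto
    also have "\<dots> = h (tens x y)"
      using tens_dual_basis_expansion[OF FA.dual FB.dual x y] by simp
    finally show "tfrob (tfrob_inv h) (tens x y) = h (tens x y)" .
  qed
  then show ?thesis
    by (intro extensionalityI[where A = "carrier TMN"] he) (auto simp: tfrob_def)
qed

lemma tfrob_bij: "bij_betw tfrob (carrier TMN) (hom_set R TMN TPQ)"
proof (rule bij_betw_imageI)
  show "inj_on tfrob (carrier TMN)"
    by (rule inj_onI) (metis tfrob_inv_tfrob)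
  show "tfrob ` carrier TMN = hom_set R TMN TPQ"
  proof
    show "tfrob ` carrier TMN \<subseteq> hom_set R TMN TPQ" using tfrob_hom by auto
    show "hom_set R TMN TPQ \<subseteq> tfrob ` carrier TMN"
    proof
      fix h assume h: "h \<in> hom_set R TMN TPQ"
      have "tfrob_inv h \<in> carrier TMN"
        using h by (intro tfrob_inv_closed) (auto simp: hom_set_def lin_map_def)
      then show "h \<in> tfrob ` carrier TMN" using tfrob_tfrob_inv[OF h] by (metis image_eqI)
    qed
  qed
qed

lemma hom_set_tensor_alg: "hom_set R TA TPQ = hom_set R TMN TPQ"
  by (simp add: hom_set_def lin_map_tensor_alg_dom tensor_alg_ops)

lemma frobenius_tensor_alg: "frobenius R TPQ TA"
  unfolding frobenius_def
proof (intro conjI)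
  show "k_algebra R TA" by (rule tensor_alg_k_algebra)
  have fgA: "fin_gen R A" and pA: "projective R A" using FA.frob by (auto simp: frobenius_def)
  have fgB: "fin_gen R B" and pB: "projective R B" using FB.frob by (auto simp: frobenius_def)
  show "fin_gen R TA" unfolding fin_gen_tensor_alg by (rule fin_gen_tensor[OF fgA fgB])
  show "projective R TA" unfolding projective_tensor_alg by (rule projective_tensor[OF pA pB])
  show "\<exists>\<phi>. bij_betw \<phi> (carrier TA) (hom_set R TA TPQ) \<and>
        (\<forall>x\<in>carrier TA. \<forall>y\<in>carrier TA. \<phi> (x \<oplus>\<^bsub>TA\<^esub> y) = (\<lambda>z\<in>carrier TA. \<phi> x z \<oplus>\<^bsub>TPQ\<^esub> \<phi> y z)) \<and>
        (\<forall>x\<in>carrier TA. \<forall>a\<in>carrier TA. \<phi> (x \<otimes>\<^bsub>TA\<^esub> a) = (\<lambda>z\<in>carrier TA. \<phi> x (a \<otimes>\<^bsub>TA\<^esub> z)))"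
  proof (intro exI[of _ tfrob] conjI ballI)
    show "bij_betw tfrob (carrier TA) (hom_set R TA TPQ)"
      unfolding hom_set_tensor_alg tensor_alg_ops(1) by (rule tfrob_bij)
  next
    fix x y assume "x \<in> carrier TA" "y \<in> carrier TA"
    then show "tfrob (x \<oplus>\<^bsub>TA\<^esub> y) = (\<lambda>z\<in>carrier TA. tfrob x z \<oplus>\<^bsub>TPQ\<^esub> tfrob y z)"
      unfolding tensor_alg_ops(1) using tfrob_add by (simp add: tensor_alg_ops)
  next
    fix x a assume x: "x \<in> carrier TA" and a: "a \<in> carrier TA"
    show "tfrob (x \<otimes>\<^bsub>TA\<^esub> a) = (\<lambda>z\<in>carrier TA. tfrob x (a \<otimes>\<^bsub>TA\<^esub> z))"
    proof (rule ext)
      fix z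
      show "tfrob (x \<otimes>\<^bsub>TA\<^esub> a) z = (\<lambda>z\<in>carrier TA. tfrob x (a \<otimes>\<^bsub>TA\<^esub> z)) z"
      proof (cases "z \<in> carrier TA")
        case True
        then show ?thesis using x a unfolding tensor_alg_ops(1)
          by (simp add: tensor_alg_mult_eq tfrob_mult tmult_closed)
      next
        case False
        then show ?thesis by (simp add: tfrob_def tensor_alg_ops(1))
      qed
    qed
  qed
qed

end


theorem lemma2p9:
  fixes R :: "('k, 'c) ring_scheme"
    and P :: "('k, 'p, 'u) module_scheme" and Q :: "('k, 'q, 'v) module_scheme"
    and A :: "('k, 'a, 'x) module_scheme" and B :: "('k, 'b, 'y) module_scheme"
  assumes "cring R"
    and "invertible_mod R P" and "invertible_mod R Q"
    and "frobenius R P A" and "frobenius R Q B"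
  shows "frobenius R (tensor_mod R P Q) (tensor_alg R A B)"
proof -
  have P: "module R P" and Q: "module R Q" using assms(2,3) by (auto simp: invertible_mod_def)
  obtain IA :: "'a set" and dA \<alpha>A where FA: "frobenius_dual_basis R A P IA dA \<alpha>A"
    using frobenius_dual_basis_exists[OF assms(1,4) P] by blast
  obtain IB :: "'b set" and dB \<alpha>B where FB: "frobenius_dual_basis R B Q IB dB \<alpha>B"
    using frobenius_dual_basis_exists[OF assms(1,5) Q] by blast
  interpret frobenius_tensor R A B P Q IA dA \<alpha>A IB dB \<alpha>B
    by (rule frobenius_tensorI[OF FA FB])
  show ?thesis by (rule frobenius_tensor_alg)
qed

end
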